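(* Suppose $u_1$ is cyclically separable. Then for every $\varepsilon>0$ there exists $\kappa>0$ such that for every prior $\mu_0$ with $\mu_0(\omega_R)>1-\kappa$ and every $\delta<1$, \[\overline U_1(\delta)<\bar v_1^{\mathrm{CM}}+\varepsilon.\]
   Context: Stage game. Three players $0,1,2$ have finite action sets $A_0,A_1,A_2$; $Y_0,Y_1$ are finite signal sets. Player 0 takes $a_0$, generating a signal $y_0\sim\rho_0(\cdot\mid a_0)$ observed only by player 1; players 1 and 2 then simultaneously take $a_1,a_2$, generating a public signal $y_1\sim\rho_1(\cdot\mid a_1,a_2)$. Assume: (i) $\rho_0(y_0\mid a_0)>0$ always; (ii) $\rho_1(y_1\mid a_1,a_2)>0$ implies $\rho_1(y_1\mid a_1,a_2')>0$; (iii) for every $a_2$ the vectors $(\rho_1(\cdot\mid a_1,a_2))_{a_1\in A_1}$ are linearly independent. Stage strategies: $\alpha_0\in\Delta(A_0)$, $\alpha_2\in\Delta(A_2)$, $s_1:Y_0\to\Delta(A_1)$. Payoffs $u_0:A_0\times A_1\to\mathbb{R}$, $u_i:Y_0\times A_1\times A_2\to\mathbb{R}$ ($i=1,2$), extended by expectation; $u_1(\cdot,\alpha_2)$ is $(y_0,a_1)\mapsto\sum_{a_2}\alpha_2(a_2)u_1(y_0,a_1,a_2)$. $B(s_1)$: set of $(\alpha_0,\alpha_2)$ with $\mathrm{supp}(\alpha_0)\subset\arg\max_{a_0}u_0(a_0,s_1)$ and $\mathrm{supp}(\alpha_2)\subset\arg\max_{a_2}u_2(\alpha_0,s_1,a_2)$.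 Repeated game: periods $t=0,1,\dots$; player 1 long-lived with discount factor $\delta$ and payoff $(1-\delta)\sum_t\delta^tu_1$; new myopic players 0 and 2 each period observe only the public history of past $y_1$'s. Player 1's type is drawn from a full-support prior $\mu_0$ on a countable set $\Omega$ consisting of a rational type $\omega_R$ and commitment types $\omega_{s_1}$ that play $s_1$ every period. $\overline U_1(\delta)$: supremum over Nash equilibria of the rational type's payoff. For $u:Y_0\times A_1\to\mathbb{R}$, $S\subset Y_0\times A_1$ is $u$-cyclically monotone if for every finite $\{(x_i,y_i)\}_{i=1}^N\subset S$ (with $y_{N+1}=y_1$), $\sum_iu(x_i,y_i)\ge\sum_iu(x_i,y_{i+1})$. $u_1$ is cyclically separable if any $S$ that is $u_1(\cdot,\alpha_2)$-cyclically monotone for some $\alpha_2\in\Delta(A_2)$ is so for all $\alpha_2$. A strategy $s_1$ is $u_1$-cyclically monotone if $\mathrm{supp}(s_1)=\{(y_0,a_1):a_1\in\mathrm{supp}(s_1(y_0))\}$ is $u_1(\cdot,\alpha_2)$-cyclically monotone for all $\alpha_2$. $\bar v_1^{\mathrm{CM}}=\sup_{s_1\ u_1\text{-cyclically monotone}}\ \max_{(\alpha_0,\alpha_2)\in B(s_1)}u_1(\alpha_0,s_1,\alpha_2)$. *)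

theory Defs
  imports "HOL-Analysis.Analysis"
begin

definition rg_dist :: "('a::finite \<Rightarrow> real) \<Rightarrow> bool" where
  "rg_dist p \<longleftrightarrow> (\<forall>a. 0 \<le> p a) \<and> sum p UNIV = 1"

definition rg_cyc_mono :: "('x \<Rightarrow> 'y \<Rightarrow> real) \<Rightarrow> ('x \<times> 'y) set \<Rightarrow> bool" where
  "rg_cyc_mono u S \<longleftrightarrow>
     (\<forall>(N::nat) (x::nat \<Rightarrow> 'x) (y::nat \<Rightarrow> 'y).
        1 \<le> N \<and> (\<forall>i<N. (x i, y i) \<in> S) \<longrightarrow>
        (\<Sum>i<N. u (x i) (y (Suc i mod N))) \<le> (\<Sum>i<N. u (x i) (y i)))"

definition rg_u1_at :: "('y0 \<Rightarrow> 'a1 \<Rightarrow> 'a2::finite \<Rightarrow> real) \<Rightarrow> ('a2 \<Rightarrow> real) \<Rightarrow> 'y0 \<Rightarrow> 'a1 \<Rightarrow> real" where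
  "rg_u1_at u1 \<alpha>2 y0 a1 = (\<Sum>a2\<in>UNIV. \<alpha>2 a2 * u1 y0 a1 a2)"

definition rg_cyc_separable :: "('y0 \<Rightarrow> 'a1 \<Rightarrow> 'a2::finite \<Rightarrow> real) \<Rightarrow> bool" where
  "rg_cyc_separable u1 \<longleftrightarrow>
     (\<forall>S. (\<exists>\<alpha>2. rg_dist \<alpha>2 \<and> rg_cyc_mono (rg_u1_at u1 \<alpha>2) S) \<longrightarrow>
          (\<forall>\<alpha>2. rg_dist \<alpha>2 \<longrightarrow> rg_cyc_mono (rg_u1_at u1 \<alpha>2) S))"

definition rg_stage1 :: "('y0 \<Rightarrow> 'a1::finite \<Rightarrow> real) \<Rightarrow> bool" where
  "rg_stage1 s1 \<longleftrightarrow> (\<forall>y0. rg_dist (s1 y0))"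

definition rg_supp1 :: "('y0 \<Rightarrow> 'a1 \<Rightarrow> real) \<Rightarrow> ('y0 \<times> 'a1) set" where
  "rg_supp1 s1 = {(y0, a1). 0 < s1 y0 a1}"

definition rg_cm_strategy :: "('y0 \<Rightarrow> 'a1 \<Rightarrow> 'a2::finite \<Rightarrow> real) \<Rightarrow> ('y0 \<Rightarrow> 'a1 \<Rightarrow> real) \<Rightarrow> bool" where
  "rg_cm_strategy u1 s1 \<longleftrightarrow>
     (\<forall>\<alpha>2. rg_dist \<alpha>2 \<longrightarrow> rg_cyc_mono (rg_u1_at u1 \<alpha>2) (rg_supp1 s1))"

definition rg_u0_s1 :: "('a0 \<Rightarrow> 'y0::finite \<Rightarrow> real) \<Rightarrow> ('a0 \<Rightarrow> 'a1::finite \<Rightarrow> real)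
    \<Rightarrow> ('y0 \<Rightarrow> 'a1 \<Rightarrow> real) \<Rightarrow> 'a0 \<Rightarrow> real" where
  "rg_u0_s1 \<rho>0 u0 s1 a0 = (\<Sum>y0\<in>UNIV. \<rho>0 a0 y0 * (\<Sum>a1\<in>UNIV. s1 y0 a1 * u0 a0 a1))"

definition rg_u2_s1 :: "('a0::finite \<Rightarrow> 'y0::finite \<Rightarrow> real) \<Rightarrow> ('y0 \<Rightarrow> 'a1::finite \<Rightarrow> 'a2 \<Rightarrow> real)
    \<Rightarrow> ('a0 \<Rightarrow> real) \<Rightarrow> ('y0 \<Rightarrow> 'a1 \<Rightarrow> real) \<Rightarrow> 'a2 \<Rightarrow> real" where
  "rg_u2_s1 \<rho>0 u2 \<alpha>0 s1 a2 =
     (\<Sum>a0\<in>UNIV. \<alpha>0 a0 * (\<Sum>y0\<in>UNIV. \<rho>0 a0 y0 * (\<Sum>a1\<in>UNIV. s1 y0 a1 * u2 y0 a1 a2)))"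

definition rg_u1_stage :: "('a0::finite \<Rightarrow> 'y0::finite \<Rightarrow> real) \<Rightarrow> ('y0 \<Rightarrow> 'a1::finite \<Rightarrow> 'a2::finite \<Rightarrow> real)
    \<Rightarrow> ('a0 \<Rightarrow> real) \<Rightarrow> ('y0 \<Rightarrow> 'a1 \<Rightarrow> real) \<Rightarrow> ('a2 \<Rightarrow> real) \<Rightarrow> real" where
  "rg_u1_stage \<rho>0 u1 \<alpha>0 s1 \<alpha>2 =
     (\<Sum>a0\<in>UNIV. \<alpha>0 a0 * (\<Sum>y0\<in>UNIV. \<rho>0 a0 y0 *
        (\<Sum>a1\<in>UNIV. s1 y0 a1 * (\<Sum>a2\<in>UNIV. \<alpha>2 a2 * u1 y0 a1 a2))))"

definition rg_B :: "('a0::finite \<Rightarrow> 'y0::finite \<Rightarrow> real) \<Rightarrow> ('a0 \<Rightarrow> 'a1::finite \<Rightarrow> real)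
    \<Rightarrow> ('y0 \<Rightarrow> 'a1 \<Rightarrow> 'a2::finite \<Rightarrow> real) \<Rightarrow> ('y0 \<Rightarrow> 'a1 \<Rightarrow> real)
    \<Rightarrow> (('a0 \<Rightarrow> real) \<times> ('a2 \<Rightarrow> real)) set" where
  "rg_B \<rho>0 u0 u2 s1 = {(\<alpha>0, \<alpha>2). rg_dist \<alpha>0 \<and> rg_dist \<alpha>2 \<and>
      (\<forall>a0. 0 < \<alpha>0 a0 \<longrightarrow> (\<forall>a0'. rg_u0_s1 \<rho>0 u0 s1 a0' \<le> rg_u0_s1 \<rho>0 u0 s1 a0)) \<and>
      (\<forall>a2. 0 < \<alpha>2 a2 \<longrightarrow> (\<forall>a2'. rg_u2_s1 \<rho>0 u2 \<alpha>0 s1 a2' \<le> rg_u2_s1 \<rho>0 u2 \<alpha>0 s1 a2))}"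

text \<open>bar v_1^CM = sup over u_1-cyclically monotone s_1 of max over B(s_1) of u_1(alpha_0,s_1,alpha_2)
  (the max is written as a SUP; it is attained).\<close>
definition rg_vCM :: "('a0::finite \<Rightarrow> 'y0::finite \<Rightarrow> real) \<Rightarrow> ('a0 \<Rightarrow> 'a1::finite \<Rightarrow> real)
    \<Rightarrow> ('y0 \<Rightarrow> 'a1 \<Rightarrow> 'a2::finite \<Rightarrow> real) \<Rightarrow> ('y0 \<Rightarrow> 'a1 \<Rightarrow> 'a2 \<Rightarrow> real) \<Rightarrow> ereal" where
  "rg_vCM \<rho>0 u0 u1 u2 =
     (SUP s1 \<in> {s1. rg_stage1 s1 \<and> rg_cm_strategy u1 s1}.
        (SUP p \<in> rg_B \<rho>0 u0 u2 s1. ereal (rg_u1_stage \<rho>0 u1 (fst p) s1 (snd p))))"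

text \<open>A period outcome is (a0, y0, a1, a2, y1). Histories are lists in chronological order.
  Public history: list of y1's. Private history of player 1: list of (y0, a1, y1).\<close>

definition rg_pub :: "'a0 \<times> 'y0 \<times> 'a1 \<times> 'a2 \<times> 'y1 \<Rightarrow> 'y1" where
  "rg_pub r = (case r of (a0, y0, a1, a2, y1) \<Rightarrow> y1)"

definition rg_priv :: "'a0 \<times> 'y0 \<times> 'a1 \<times> 'a2 \<times> 'y1 \<Rightarrow> 'y0 \<times> 'a1 \<times> 'y1" where
  "rg_priv r = (case r of (a0, y0, a1, a2, y1) \<Rightarrow> (y0, a1, y1))"

definition rg_hist_prob ::
  "('a0 \<Rightarrow> 'y0 \<Rightarrow> real) \<Rightarrow> ('a1 \<Rightarrow> 'a2 \<Rightarrow> 'y1 \<Rightarrow> real)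
   \<Rightarrow> ('y1 list \<Rightarrow> 'a0 \<Rightarrow> real) \<Rightarrow> (('y0 \<times> 'a1 \<times> 'y1) list \<Rightarrow> 'y0 \<Rightarrow> 'a1 \<Rightarrow> real)
   \<Rightarrow> ('y1 list \<Rightarrow> 'a2 \<Rightarrow> real) \<Rightarrow> ('a0 \<times> 'y0 \<times> 'a1 \<times> 'a2 \<times> 'y1) list \<Rightarrow> real" where
  "rg_hist_prob \<rho>0 \<rho>1 \<sigma>0 \<tau>1 \<sigma>2 h =
     (\<Prod>i<length h. case h ! i of (a0, y0, a1, a2, y1) \<Rightarrow>
        \<sigma>0 (map rg_pub (take i h)) a0 * \<rho>0 a0 y0 *
        \<tau>1 (map rg_priv (take i h)) y0 a1 *
        \<sigma>2 (map rg_pub (take i h)) a2 * \<rho>1 a1 a2 y1)"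

definition rg_exp_stage ::
  "('a0::finite \<Rightarrow> 'y0::finite \<Rightarrow> real) \<Rightarrow> ('a1::finite \<Rightarrow> 'a2::finite \<Rightarrow> 'y1::finite \<Rightarrow> real)
   \<Rightarrow> ('y1 list \<Rightarrow> 'a0 \<Rightarrow> real) \<Rightarrow> (('y0 \<times> 'a1 \<times> 'y1) list \<Rightarrow> 'y0 \<Rightarrow> 'a1 \<Rightarrow> real)
   \<Rightarrow> ('y1 list \<Rightarrow> 'a2 \<Rightarrow> real) \<Rightarrow> nat \<Rightarrow> ('a0 \<times> 'y0 \<times> 'a1 \<times> 'a2 \<times> 'y1 \<Rightarrow> real) \<Rightarrow> real" where
  "rg_exp_stage \<rho>0 \<rho>1 \<sigma>0 \<tau>1 \<sigma>2 t f =
     (\<Sum>h\<in>{h. length h = Suc t}. rg_hist_prob \<rho>0 \<rho>1 \<sigma>0 \<tau>1 \<sigma>2 h * f (last h))"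

text \<open>Types: None = rational type omega_R; Some s1 = commitment type omega_{s1}.\<close>
definition rg_type_strat ::
  "(('y0 \<times> 'a1 \<times> 'y1) list \<Rightarrow> 'y0 \<Rightarrow> 'a1 \<Rightarrow> real) \<Rightarrow> ('y0 \<Rightarrow> 'a1 \<Rightarrow> real) option
   \<Rightarrow> (('y0 \<times> 'a1 \<times> 'y1) list \<Rightarrow> 'y0 \<Rightarrow> 'a1 \<Rightarrow> real)" where
  "rg_type_strat \<sigma>1 \<omega> = (case \<omega> of None \<Rightarrow> \<sigma>1 | Some s1 \<Rightarrow> (\<lambda>_ y0. s1 y0))"

text \<open>Prior: nonnegative, sums to 1, countable support Omega containing omega_R,
  commitment types are stage strategies. Omega is by definition the support (full support).\<close>
definition rg_prior :: "(('y0 \<Rightarrow> 'a1::finite \<Rightarrow> real) option \<Rightarrow> real) \<Rightarrow> bool" where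
  "rg_prior \<mu>0 \<longleftrightarrow> (\<forall>\<omega>. 0 \<le> \<mu>0 \<omega>) \<and> (\<mu>0 has_sum 1) UNIV \<and>
     countable {\<omega>. \<mu>0 \<omega> \<noteq> 0} \<and> 0 < \<mu>0 None \<and>
     (\<forall>s1. \<mu>0 (Some s1) \<noteq> 0 \<longrightarrow> rg_stage1 s1)"

definition rg_exante ::
  "('a0::finite \<Rightarrow> 'y0::finite \<Rightarrow> real) \<Rightarrow> ('a1::finite \<Rightarrow> 'a2::finite \<Rightarrow> 'y1::finite \<Rightarrow> real)
   \<Rightarrow> (('y0 \<Rightarrow> 'a1 \<Rightarrow> real) option \<Rightarrow> real)
   \<Rightarrow> ('y1 list \<Rightarrow> 'a0 \<Rightarrow> real) \<Rightarrow> (('y0 \<times> 'a1 \<times> 'y1) list \<Rightarrow> 'y0 \<Rightarrow> 'a1 \<Rightarrow> real)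
   \<Rightarrow> ('y1 list \<Rightarrow> 'a2 \<Rightarrow> real) \<Rightarrow> nat \<Rightarrow> ('a0 \<times> 'y0 \<times> 'a1 \<times> 'a2 \<times> 'y1 \<Rightarrow> real) \<Rightarrow> real" where
  "rg_exante \<rho>0 \<rho>1 \<mu>0 \<sigma>0 \<sigma>1 \<sigma>2 t f =
     (\<Sum>\<^sub>\<infinity>\<omega>. \<mu>0 \<omega> * rg_exp_stage \<rho>0 \<rho>1 \<sigma>0 (rg_type_strat \<sigma>1 \<omega>) \<sigma>2 t f)"

definition rg_U1 ::
  "('a0::finite \<Rightarrow> 'y0::finite \<Rightarrow> real) \<Rightarrow> ('a1::finite \<Rightarrow> 'a2::finite \<Rightarrow> 'y1::finite \<Rightarrow> real)
   \<Rightarrow> ('y0 \<Rightarrow> 'a1 \<Rightarrow> 'a2 \<Rightarrow> real) \<Rightarrow> real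
   \<Rightarrow> ('y1 list \<Rightarrow> 'a0 \<Rightarrow> real) \<Rightarrow> (('y0 \<times> 'a1 \<times> 'y1) list \<Rightarrow> 'y0 \<Rightarrow> 'a1 \<Rightarrow> real)
   \<Rightarrow> ('y1 list \<Rightarrow> 'a2 \<Rightarrow> real) \<Rightarrow> real" where
  "rg_U1 \<rho>0 \<rho>1 u1 \<delta> \<sigma>0 \<sigma>1 \<sigma>2 =
     (1 - \<delta>) * (\<Sum>t. \<delta> ^ t * rg_exp_stage \<rho>0 \<rho>1 \<sigma>0 \<sigma>1 \<sigma>2 t
                       (\<lambda>(a0, y0, a1, a2, y1). u1 y0 a1 a2))"

definition rg_valid_pub :: "('y1 list \<Rightarrow> 'a::finite \<Rightarrow> real) \<Rightarrow> bool" where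
  "rg_valid_pub \<sigma> \<longleftrightarrow> (\<forall>p. rg_dist (\<sigma> p))"

definition rg_valid1 :: "(('y0 \<times> 'a1 \<times> 'y1) list \<Rightarrow> 'y0 \<Rightarrow> 'a1::finite \<Rightarrow> real) \<Rightarrow> bool" where
  "rg_valid1 \<sigma>1 \<longleftrightarrow> (\<forall>p y0. rg_dist (\<sigma>1 p y0))"

text \<open>Nash equilibrium: (sigma0, sigma2) give the (public-history-measurable) mixed actions of
  the short-lived players 0 and 2 of each period t (their values on public histories of length t);
  sigma1 is the rational type's behaviour strategy.\<close>
definition rg_NE ::
  "('a0::finite \<Rightarrow> 'y0::finite \<Rightarrow> real) \<Rightarrow> ('a1::finite \<Rightarrow> 'a2::finite \<Rightarrow> 'y1::finite \<Rightarrow> real)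
   \<Rightarrow> ('a0 \<Rightarrow> 'a1 \<Rightarrow> real) \<Rightarrow> ('y0 \<Rightarrow> 'a1 \<Rightarrow> 'a2 \<Rightarrow> real) \<Rightarrow> ('y0 \<Rightarrow> 'a1 \<Rightarrow> 'a2 \<Rightarrow> real)
   \<Rightarrow> (('y0 \<Rightarrow> 'a1 \<Rightarrow> real) option \<Rightarrow> real) \<Rightarrow> real
   \<Rightarrow> ('y1 list \<Rightarrow> 'a0 \<Rightarrow> real) \<Rightarrow> (('y0 \<times> 'a1 \<times> 'y1) list \<Rightarrow> 'y0 \<Rightarrow> 'a1 \<Rightarrow> real)
   \<Rightarrow> ('y1 list \<Rightarrow> 'a2 \<Rightarrow> real) \<Rightarrow> bool" where
  "rg_NE \<rho>0 \<rho>1 u0 u1 u2 \<mu>0 \<delta> \<sigma>0 \<sigma>1 \<sigma>2 \<longleftrightarrow>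
     rg_valid_pub \<sigma>0 \<and> rg_valid1 \<sigma>1 \<and> rg_valid_pub \<sigma>2 \<and>
     (\<forall>\<sigma>1'. rg_valid1 \<sigma>1' \<longrightarrow>
        rg_U1 \<rho>0 \<rho>1 u1 \<delta> \<sigma>0 \<sigma>1' \<sigma>2 \<le> rg_U1 \<rho>0 \<rho>1 u1 \<delta> \<sigma>0 \<sigma>1 \<sigma>2) \<and>
     (\<forall>t \<sigma>0'. rg_valid_pub \<sigma>0' \<and> (\<forall>p. length p \<noteq> t \<longrightarrow> \<sigma>0' p = \<sigma>0 p) \<longrightarrow>
        rg_exante \<rho>0 \<rho>1 \<mu>0 \<sigma>0' \<sigma>1 \<sigma>2 t (\<lambda>(a0, y0, a1, a2, y1). u0 a0 a1)
        \<le> rg_exante \<rho>0 \<rho>1 \<mu>0 \<sigma>0 \<sigma>1 \<sigma>2 t (\<lambda>(a0, y0, a1, a2, y1). u0 a0 a1)) \<and>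
     (\<forall>t \<sigma>2'. rg_valid_pub \<sigma>2' \<and> (\<forall>p. length p \<noteq> t \<longrightarrow> \<sigma>2' p = \<sigma>2 p) \<longrightarrow>
        rg_exante \<rho>0 \<rho>1 \<mu>0 \<sigma>0 \<sigma>1 \<sigma>2' t (\<lambda>(a0, y0, a1, a2, y1). u2 y0 a1 a2)
        \<le> rg_exante \<rho>0 \<rho>1 \<mu>0 \<sigma>0 \<sigma>1 \<sigma>2 t (\<lambda>(a0, y0, a1, a2, y1). u2 y0 a1 a2))"

definition rg_U1bar ::
  "('a0::finite \<Rightarrow> 'y0::finite \<Rightarrow> real) \<Rightarrow> ('a1::finite \<Rightarrow> 'a2::finite \<Rightarrow> 'y1::finite \<Rightarrow> real)
   \<Rightarrow> ('a0 \<Rightarrow> 'a1 \<Rightarrow> real) \<Rightarrow> ('y0 \<Rightarrow> 'a1 \<Rightarrow> 'a2 \<Rightarrow> real) \<Rightarrow> ('y0 \<Rightarrow> 'a1 \<Rightarrow> 'a2 \<Rightarrow> real)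
   \<Rightarrow> (('y0 \<Rightarrow> 'a1 \<Rightarrow> real) option \<Rightarrow> real) \<Rightarrow> real \<Rightarrow> ereal" where
  "rg_U1bar \<rho>0 \<rho>1 u0 u1 u2 \<mu>0 \<delta> =
     Sup {ereal (rg_U1 \<rho>0 \<rho>1 u1 \<delta> \<sigma>0 \<sigma>1 \<sigma>2) | \<sigma>0 \<sigma>1 \<sigma>2.
            rg_NE \<rho>0 \<rho>1 u0 u1 u2 \<mu>0 \<delta> \<sigma>0 \<sigma>1 \<sigma>2}"

end

theory Submission
  imports Defs
begin

text \<open>
  Fix a Nash equilibrium and a public history \<open>p\<close> of period \<open>T\<close>. The rational type's behaviour
  at \<open>p\<close>, averaged over its private histories consistent with \<open>p\<close>, has a
  \<open>u\<^sub>1(\<cdot>, \<sigma>\<^sub>2(p))\<close>-cyclically monotone support: the opponents' continuation play only depends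
  on the public history, so the rational type may permute its continuation strategies along any
  cycle of signal/action pairs it uses, and optimality forbids a gain from doing so. Cyclic
  separability makes this behaviour \<open>u\<^sub>1\<close>-cyclically monotone.

  The short-lived players best respond to the prior-weighted mixture of all types' behaviour at
  \<open>p\<close>. When the rational type keeps posterior weight at least \<open>1 - \<zeta>\<close>, this mixture is
  \<open>\<zeta>\<close>-close to the rational behaviour, and a compactness argument bounds the rational stage
  payoff by \<open>v\<^sup>C\<^sup>M + \<epsilon>/2\<close>. The other public histories have probability at most
  \<open>(1 - \<mu>\<^sub>0(\<omega>\<^sub>R)) / (\<zeta> \<mu>\<^sub>0(\<omega>\<^sub>R))\<close> under the rational type, which is small when
  \<open>\<mu>\<^sub>0(\<omega>\<^sub>R)\<close> is close to \<open>1\<close>; averaging over periods gives the bound on \<open>U\<^sub>1\<close>.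
\<close>

section \<open>Finite sums and mixed actions\<close>

lemma has_sum_sum:
  fixes f :: "'i \<Rightarrow> 'a \<Rightarrow> real"
  assumes "finite I" "\<And>i. i \<in> I \<Longrightarrow> (f i has_sum s i) A"
  shows "((\<lambda>x. \<Sum>i\<in>I. f i x) has_sum (\<Sum>i\<in>I. s i)) A"
  using assms
proof (induction I rule: finite_induct)
  case empty then show ?case by simp
next
  case (insert j I)
  have "((\<lambda>x. f j x + (\<Sum>i\<in>I. f i x)) has_sum (s j + (\<Sum>i\<in>I. s i))) A"
    by (rule has_sum_add) (use insert in auto)
  then show ?case using insert by simp
qed

lemma sum_UNIV_prod:
  "(\<Sum>r\<in>(UNIV::('a::finite \<times> 'b::finite) set). f r) = (\<Sum>a\<in>UNIV. \<Sum>b\<in>UNIV. f (a, b))"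
  by (simp add: sum.cartesian_product)

lemma length_Suc_eq_image_Cons:
  "{h. length h = Suc n} = (\<lambda>(r, h). r # h) ` (UNIV \<times> {h. length h = n})"
  by (auto simp: length_Suc_conv image_iff)

lemma length_Suc_eq_image_snoc:
  "{h. length h = Suc n} = (\<lambda>(h, r). h @ [r]) ` ({h. length h = n} \<times> UNIV)"
proof (rule set_eqI, rule iffI)
  fix h :: "'a list" assume "h \<in> {h. length h = Suc n}"
  then have h: "length h = Suc n" by simp
  then have "h \<noteq> []" by auto
  then have "h = butlast h @ [last h]" by simp
  moreover have "length (butlast h) = n" using h by simp
  ultimately show "h \<in> (\<lambda>(h, r). h @ [r]) ` ({h. length h = n} \<times> UNIV)"
    by (intro image_eqI[where x="(butlast h, last h)"]) auto
qed auto

lemma sum_length_Suc_Cons: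
  fixes F :: "'a::finite list \<Rightarrow> 'b::comm_monoid_add"
  shows "(\<Sum>h\<in>{h. length h = Suc n}. F h) = (\<Sum>r\<in>UNIV. \<Sum>h\<in>{h. length h = n}. F (r # h))"
proof -
  have "inj_on (\<lambda>(r, h). r # h) (UNIV \<times> {h::'a list. length h = n})" by (auto simp: inj_on_def)
  then have "(\<Sum>h\<in>{h. length h = Suc n}. F h) = (\<Sum>x\<in>UNIV \<times> {h. length h = n}. F (case x of (r, h) \<Rightarrow> r # h))"
    by (simp add: length_Suc_eq_image_Cons sum.reindex)
  also have "\<dots> = (\<Sum>r\<in>UNIV. \<Sum>h\<in>{h. length h = n}. F (r # h))"
    by (simp add: sum.cartesian_product split_def)
  finally show ?thesis .
qed

lemma sum_length_Suc_snoc: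
  fixes F :: "'a::finite list \<Rightarrow> 'b::comm_monoid_add"
  shows "(\<Sum>h\<in>{h. length h = Suc n}. F h) = (\<Sum>h\<in>{h. length h = n}. \<Sum>r\<in>UNIV. F (h @ [r]))"
proof -
  have "inj_on (\<lambda>(h, r). h @ [r]) ({h::'a list. length h = n} \<times> UNIV)" by (auto simp: inj_on_def)
  then have "(\<Sum>h\<in>{h. length h = Suc n}. F h) = (\<Sum>x\<in>{h. length h = n} \<times> UNIV. F (case x of (h, r) \<Rightarrow> h @ [r]))"
    by (simp add: length_Suc_eq_image_snoc sum.reindex)
  also have "\<dots> = (\<Sum>h\<in>{h. length h = n}. \<Sum>r\<in>UNIV. F (h @ [r]))"
    by (simp add: sum.cartesian_product split_def)
  finally show ?thesis .
qed

lemma sum_rotate_mod: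
  fixes f :: "nat \<Rightarrow> real"
  assumes "1 \<le> N"
  shows "(\<Sum>i<N. f (Suc i mod N)) = (\<Sum>i<N. f i)"
proof -
  obtain M where N: "N = Suc M" using assms by (cases N) auto
  have "(\<Sum>i<Suc M. f (Suc i mod Suc M)) = (\<Sum>i<M. f (Suc i mod Suc M)) + f (Suc M mod Suc M)"
    by simp
  also have "(\<Sum>i<M. f (Suc i mod Suc M)) = (\<Sum>i<M. f (Suc i))"
    by (rule sum.cong) auto
  also have "(\<Sum>i<M. f (Suc i)) + f (Suc M mod Suc M) = (\<Sum>i<Suc M. f i)"
    by (subst sum.lessThan_Suc_shift) simp
  finally show ?thesis using N by simp
qed

lemma sum_diff_update:
  fixes f f' :: "'a \<Rightarrow> real"
  assumes "finite S" "p \<in> S" "\<And>q. q \<in> S \<Longrightarrow> q \<noteq> p \<Longrightarrow> f' q = f q"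
  shows "sum f' S - sum f S = f' p - f p"
proof -
  have "sum f' S = f' p + sum f' (S - {p})" using assms by (simp add: sum.remove)
  moreover have "sum f S = f p + sum f (S - {p})" using assms by (simp add: sum.remove)
  moreover have "sum f' (S - {p}) = sum f (S - {p})" using assms by (intro sum.cong) auto
  ultimately show ?thesis by simp
qed

lemma sum_point_mass: "(\<Sum>a1\<in>(UNIV::'a::finite set). (if a1 = a then 1 else 0) * F a1) = (F a::real)"
proof -
  have "(\<Sum>a1\<in>UNIV. (if a1 = a then 1 else 0) * F a1) = (\<Sum>a1\<in>UNIV. if a1 = a then F a1 else 0)"
    by (rule sum.cong) auto
  then show ?thesis by simp
qed

lemma sum_mult_sum_swap:
  fixes f :: "'a \<Rightarrow> real"
  shows "(\<Sum>a\<in>A. f a * (\<Sum>h\<in>H. c h * g h a)) = (\<Sum>h\<in>H. c h * (\<Sum>a\<in>A. f a * g h a))"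
proof -
  have "(\<Sum>a\<in>A. f a * (\<Sum>h\<in>H. c h * g h a)) = (\<Sum>a\<in>A. \<Sum>h\<in>H. c h * (f a * g h a))"
    by (simp add: sum_distrib_left mult.left_commute)
  also have "\<dots> = (\<Sum>h\<in>H. \<Sum>a\<in>A. c h * (f a * g h a))" by (rule sum.swap)
  also have "\<dots> = (\<Sum>h\<in>H. c h * (\<Sum>a\<in>A. f a * g h a))" by (simp add: sum_distrib_left)
  finally show ?thesis .
qed

lemma finite_ex_max: "\<exists>a::'a::finite. \<forall>b. (f b :: real) \<le> f a"
proof -
  have "Max (range f) \<in> range f" by (rule Max_in) auto
  then obtain a where "Max (range f) = f a" by blast
  moreover have "\<forall>b. f b \<le> Max (range f)" by (auto intro: Max_ge)
  ultimately show ?thesis by metis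
qed

lemma summable_discounted:
  fixes e :: "nat \<Rightarrow> real"
  assumes "0 \<le> \<delta>" "\<delta> < 1" "\<And>t. \<bar>e t\<bar> \<le> M"
  shows "summable (\<lambda>t. \<delta> ^ t * e t)"
proof -
  have "\<exists>N. \<forall>n\<ge>N. norm (\<delta> ^ n * e n) \<le> M * \<delta> ^ n"
    using assms by (intro exI[of _ 0] allI impI) (simp add: abs_mult mult.commute[of "\<delta> ^ _"] mult_right_mono)
  moreover have "summable (\<lambda>n. M * \<delta> ^ n)" using assms by (intro summable_mult summable_geometric) auto
  ultimately show ?thesis by (rule summable_comparison_test)
qed

lemma rg_dist_sum: "rg_dist p \<Longrightarrow> sum p UNIV = 1" by (simp add: rg_dist_def)
lemma rg_dist_nonneg: "rg_dist p \<Longrightarrow> 0 \<le> p a" by (simp add: rg_dist_def)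

lemma rg_dist_le1: "rg_dist (p :: 'a::finite \<Rightarrow> real) \<Longrightarrow> p a \<le> 1"
proof -
  assume d: "rg_dist p"
  have "p a \<le> sum p UNIV" by (rule member_le_sum) (use d in \<open>auto simp: rg_dist_def\<close>)
  then show ?thesis using d by (simp add: rg_dist_def)
qed

lemma rg_dist_ex_pos: "rg_dist p \<Longrightarrow> \<exists>a. 0 < (p :: 'a::finite \<Rightarrow> real) a"
proof (rule ccontr)
  assume d: "rg_dist p" and "\<not> (\<exists>a. 0 < p a)"
  then have "\<forall>a. p a \<le> 0" by (auto simp: not_less)
  then have "sum p UNIV \<le> 0" by (intro sum_nonpos) auto
  with d show False by (simp add: rg_dist_def)
qed

lemma rg_dist_point: "rg_dist (\<lambda>a1. if a1 = a then 1 else (0::real))"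
  by (simp add: rg_dist_def)

lemma rg_dist_limit:
  assumes "\<And>n. rg_dist (P n)" "\<And>a. (\<lambda>n. P n a) \<longlonglongrightarrow> (p a :: real)"
  shows "rg_dist (p :: 'a::finite \<Rightarrow> real)"
  unfolding rg_dist_def
proof
  show "\<forall>a. 0 \<le> p a"
  proof
    fix a show "0 \<le> p a"
      by (rule LIMSEQ_le_const[OF assms(2)[of a]]) (use assms(1) in \<open>auto simp: rg_dist_def\<close>)
  qed
  have "(\<lambda>n. sum (P n) UNIV) \<longlonglongrightarrow> sum p UNIV" by (intro tendsto_sum assms(2))
  moreover have "(\<lambda>n. sum (P n) UNIV) = (\<lambda>n. 1)" using assms(1) by (simp add: rg_dist_def)
  ultimately have "(\<lambda>n. 1::real) \<longlonglongrightarrow> sum p UNIV" by simp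
  from LIMSEQ_unique[OF this tendsto_const] show "sum p UNIV = 1" by simp
qed

lemma rg_dist_avg_abs_le:
  fixes w X :: "'a::finite \<Rightarrow> real"
  assumes "rg_dist w" "\<And>a. \<bar>X a\<bar> \<le> M"
  shows "\<bar>\<Sum>a\<in>UNIV. w a * X a\<bar> \<le> M"
proof -
  have "\<bar>\<Sum>a\<in>UNIV. w a * X a\<bar> \<le> (\<Sum>a\<in>UNIV. \<bar>w a * X a\<bar>)" by (rule sum_abs)
  also have "\<dots> \<le> (\<Sum>a\<in>UNIV. w a * M)"
    using assms by (intro sum_mono) (simp add: abs_mult rg_dist_def mult_left_mono)
  also have "\<dots> = M" using assms(1) by (simp add: sum_distrib_right[symmetric] rg_dist_def)
  finally show ?thesis .
qed

lemma rg_dist_avg_le_support: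
  fixes w f :: "'a::finite \<Rightarrow> real"
  assumes d: "rg_dist w" and le: "\<And>a. f a \<le> (\<Sum>a'\<in>UNIV. w a' * f a')" and b: "0 < w b"
  shows "(\<Sum>a'\<in>UNIV. w a' * f a') \<le> f b"
proof (rule ccontr)
  let ?A = "\<Sum>a'\<in>UNIV. w a' * f a'"
  assume "\<not> ?A \<le> f b"
  then have lt: "f b < ?A" by simp
  have "(\<Sum>a'\<in>UNIV. w a' * f a') < (\<Sum>a'\<in>UNIV. w a' * ?A)"
  proof (rule sum_strict_mono_ex1)
    show "\<forall>x\<in>UNIV. w x * f x \<le> w x * ?A" using le d by (auto intro: mult_left_mono simp: rg_dist_def)
    show "\<exists>a\<in>UNIV. w a * f a < w a * ?A" using lt b by (intro bexI[of _ b]) (auto simp: mult_strict_left_mono)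
  qed auto
  also have "\<dots> = ?A" using d by (simp add: sum_distrib_right[symmetric] rg_dist_def)
  finally show False by simp
qed

lemma rg_cyc_mono_subset: "rg_cyc_mono u S \<Longrightarrow> S' \<subseteq> S \<Longrightarrow> rg_cyc_mono u S'"
  unfolding rg_cyc_mono_def by blast

lemma normalized_dist_close:
  fixes n R w P m \<zeta> :: real
  assumes "0 \<le> n" "n \<le> R" "0 < R" "0 \<le> w" "w \<le> P - m * R" "(1 - \<zeta>) * P \<le> m * R" "0 < P"
  shows "\<bar>(m * n + w) / P - n / R\<bar> \<le> \<zeta>"
proof -
  define \<theta> where "\<theta> = (P - m * R) / P"
  have \<theta>: "0 \<le> \<theta>" "\<theta> \<le> \<zeta>" using assms by (auto simp: \<theta>_def field_simps)
  have "0 \<le> n / R" "n / R \<le> 1" using assms by auto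
  then have "0 \<le> \<theta> * (n / R)" "\<theta> * (n / R) \<le> \<theta>"
    using \<theta> by (simp_all only: mult_nonneg_nonneg mult_left_le)
  moreover have "0 \<le> w / P" "w / P \<le> \<theta>" using assms by (auto simp: \<theta>_def divide_right_mono)
  moreover have "(m * n + w) / P - n / R = w / P - \<theta> * (n / R)"
    using assms by (simp add: \<theta>_def field_simps)
  ultimately show ?thesis using \<theta> by (simp add: abs_le_iff)
qed

section \<open>Probabilities of histories\<close>

definition rg_after :: "'b list \<Rightarrow> ('b list \<Rightarrow> 'c) \<Rightarrow> ('b list \<Rightarrow> 'c)" where
  "rg_after q f = (\<lambda>p. f (q @ p))"

lemma rg_after_Nil [simp]: "rg_after [] f = f"
  by (simp add: rg_after_def)

lemma rg_after_after [simp]: "rg_after q (rg_after q' f) = rg_after (q' @ q) f"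
  by (simp add: rg_after_def)

lemma rg_after_apply: "rg_after q f p = f (q @ p)" by (simp add: rg_after_def)

definition rg_step_prob :: "('a0 \<Rightarrow> 'y0 \<Rightarrow> real) \<Rightarrow> ('a1 \<Rightarrow> 'a2 \<Rightarrow> 'y1 \<Rightarrow> real)
   \<Rightarrow> ('y1 list \<Rightarrow> 'a0 \<Rightarrow> real) \<Rightarrow> (('y0 \<times> 'a1 \<times> 'y1) list \<Rightarrow> 'y0 \<Rightarrow> 'a1 \<Rightarrow> real)
   \<Rightarrow> ('y1 list \<Rightarrow> 'a2 \<Rightarrow> real) \<Rightarrow> ('a0 \<times> 'y0 \<times> 'a1 \<times> 'a2 \<times> 'y1) list \<Rightarrow> ('a0 \<times> 'y0 \<times> 'a1 \<times> 'a2 \<times> 'y1) \<Rightarrow> real" where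
  "rg_step_prob \<rho>0 \<rho>1 \<sigma>0 \<tau>1 \<sigma>2 h r = (case r of (a0, y0, a1, a2, y1) \<Rightarrow>
        \<sigma>0 (map rg_pub h) a0 * \<rho>0 a0 y0 *
        \<tau>1 (map rg_priv h) y0 a1 *
        \<sigma>2 (map rg_pub h) a2 * \<rho>1 a1 a2 y1)"

lemma rg_hist_prob_eq_prod:
  "rg_hist_prob \<rho>0 \<rho>1 \<sigma>0 \<tau>1 \<sigma>2 h = (\<Prod>i<length h. rg_step_prob \<rho>0 \<rho>1 \<sigma>0 \<tau>1 \<sigma>2 (take i h) (h ! i))"
  by (simp add: rg_hist_prob_def rg_step_prob_def)

lemma rg_hist_prob_Nil[simp]: "rg_hist_prob \<rho>0 \<rho>1 \<sigma>0 \<tau>1 \<sigma>2 [] = 1"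
  by (simp add: rg_hist_prob_eq_prod)

lemma rg_hist_prob_snoc: "rg_hist_prob \<rho>0 \<rho>1 \<sigma>0 \<tau>1 \<sigma>2 (h @ [r]) =
   rg_hist_prob \<rho>0 \<rho>1 \<sigma>0 \<tau>1 \<sigma>2 h * rg_step_prob \<rho>0 \<rho>1 \<sigma>0 \<tau>1 \<sigma>2 h r"
proof -
  have "(\<Prod>i<length (h@[r]). rg_step_prob \<rho>0 \<rho>1 \<sigma>0 \<tau>1 \<sigma>2 (take i (h@[r])) ((h@[r]) ! i))
     = (\<Prod>i<length h. rg_step_prob \<rho>0 \<rho>1 \<sigma>0 \<tau>1 \<sigma>2 (take i (h@[r])) ((h@[r]) ! i)) * rg_step_prob \<rho>0 \<rho>1 \<sigma>0 \<tau>1 \<sigma>2 h r"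
    by (simp add: prod.lessThan_Suc)
  also have "(\<Prod>i<length h. rg_step_prob \<rho>0 \<rho>1 \<sigma>0 \<tau>1 \<sigma>2 (take i (h@[r])) ((h@[r]) ! i))
     = (\<Prod>i<length h. rg_step_prob \<rho>0 \<rho>1 \<sigma>0 \<tau>1 \<sigma>2 (take i h) (h ! i))"
    by (rule prod.cong) (auto simp: nth_append)
  finally show ?thesis by (simp add: rg_hist_prob_eq_prod)
qed

lemma rg_step_prob_after:
  "rg_step_prob \<rho>0 \<rho>1 (rg_after (map rg_pub h1) \<sigma>0) (rg_after (map rg_priv h1) \<tau>1) (rg_after (map rg_pub h1) \<sigma>2) h2 r
   = rg_step_prob \<rho>0 \<rho>1 \<sigma>0 \<tau>1 \<sigma>2 (h1 @ h2) r"
  by (simp add: rg_step_prob_def rg_after_apply)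

lemma rg_hist_prob_append: "rg_hist_prob \<rho>0 \<rho>1 \<sigma>0 \<tau>1 \<sigma>2 (h1 @ h2) =
   rg_hist_prob \<rho>0 \<rho>1 \<sigma>0 \<tau>1 \<sigma>2 h1 *
   rg_hist_prob \<rho>0 \<rho>1 (rg_after (map rg_pub h1) \<sigma>0) (rg_after (map rg_priv h1) \<tau>1) (rg_after (map rg_pub h1) \<sigma>2) h2"
proof (induction h2 rule: rev_induct)
  case Nil then show ?case by simp
next
  case (snoc r h2)
  have "rg_hist_prob \<rho>0 \<rho>1 \<sigma>0 \<tau>1 \<sigma>2 (h1 @ h2 @ [r]) = rg_hist_prob \<rho>0 \<rho>1 \<sigma>0 \<tau>1 \<sigma>2 ((h1 @ h2) @ [r])" by simp
  also have "\<dots> = rg_hist_prob \<rho>0 \<rho>1 \<sigma>0 \<tau>1 \<sigma>2 (h1 @ h2) * rg_step_prob \<rho>0 \<rho>1 \<sigma>0 \<tau>1 \<sigma>2 (h1 @ h2) r"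
    by (rule rg_hist_prob_snoc)
  also have "\<dots> = rg_hist_prob \<rho>0 \<rho>1 \<sigma>0 \<tau>1 \<sigma>2 h1 *
   (rg_hist_prob \<rho>0 \<rho>1 (rg_after (map rg_pub h1) \<sigma>0) (rg_after (map rg_priv h1) \<tau>1) (rg_after (map rg_pub h1) \<sigma>2) h2 *
    rg_step_prob \<rho>0 \<rho>1 (rg_after (map rg_pub h1) \<sigma>0) (rg_after (map rg_priv h1) \<tau>1) (rg_after (map rg_pub h1) \<sigma>2) h2 r)"
    by (simp only: snoc rg_step_prob_after mult.assoc)
  also have "\<dots> = rg_hist_prob \<rho>0 \<rho>1 \<sigma>0 \<tau>1 \<sigma>2 h1 *
   rg_hist_prob \<rho>0 \<rho>1 (rg_after (map rg_pub h1) \<sigma>0) (rg_after (map rg_priv h1) \<tau>1) (rg_after (map rg_pub h1) \<sigma>2) (h2 @ [r])"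
    by (simp only: rg_hist_prob_snoc)
  finally show ?case .
qed

lemma rg_hist_prob_Cons: "rg_hist_prob \<rho>0 \<rho>1 \<sigma>0 \<tau>1 \<sigma>2 (r # h) =
   rg_step_prob \<rho>0 \<rho>1 \<sigma>0 \<tau>1 \<sigma>2 [] r *
   rg_hist_prob \<rho>0 \<rho>1 (rg_after [rg_pub r] \<sigma>0) (rg_after [rg_priv r] \<tau>1) (rg_after [rg_pub r] \<sigma>2) h"
proof -
  have "rg_hist_prob \<rho>0 \<rho>1 \<sigma>0 \<tau>1 \<sigma>2 (r # h) = rg_hist_prob \<rho>0 \<rho>1 \<sigma>0 \<tau>1 \<sigma>2 ([r] @ h)" by simp
  also have "\<dots> = rg_hist_prob \<rho>0 \<rho>1 \<sigma>0 \<tau>1 \<sigma>2 [r] *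
   rg_hist_prob \<rho>0 \<rho>1 (rg_after (map rg_pub [r]) \<sigma>0) (rg_after (map rg_priv [r]) \<tau>1) (rg_after (map rg_pub [r]) \<sigma>2) h"
    by (rule rg_hist_prob_append)
  also have "rg_hist_prob \<rho>0 \<rho>1 \<sigma>0 \<tau>1 \<sigma>2 [r] = rg_hist_prob \<rho>0 \<rho>1 \<sigma>0 \<tau>1 \<sigma>2 ([] @ [r])" by simp
  also have "\<dots> = rg_step_prob \<rho>0 \<rho>1 \<sigma>0 \<tau>1 \<sigma>2 [] r" by (simp only: rg_hist_prob_snoc rg_hist_prob_Nil mult_1)
  finally show ?thesis by simp
qed

lemma sum_group_by_pub:
  fixes F :: "('a0::finite \<times> 'y0::finite \<times> 'a1::finite \<times> 'a2::finite \<times> 'y1::finite) list \<Rightarrow> real"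
  shows "(\<Sum>h\<in>{h. length h = T}. F h) =
    (\<Sum>p\<in>{p. length p = T}. \<Sum>h\<in>{h. length h = T}. if map rg_pub h = p then F h else 0)"
proof -
  have "(\<Sum>p\<in>{p. length p = T}. \<Sum>h\<in>{h. length h = T}. if map rg_pub h = p then F h else 0) =
      (\<Sum>h\<in>{h. length h = T}. \<Sum>p\<in>{p. length p = T}. if map rg_pub h = p then F h else 0)"
    by (rule sum.swap)
  also have "\<dots> = (\<Sum>h\<in>{h. length h = T}. F h)"
    by (rule sum.cong) (auto simp: finite_list_length)
  finally show ?thesis by simp
qed

definition rg_valid_profile where
  "rg_valid_profile \<sigma>0 \<tau> \<sigma>2 \<longleftrightarrow> rg_valid_pub \<sigma>0 \<and> rg_valid1 \<tau> \<and> rg_valid_pub \<sigma>2"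

lemma rg_valid_profile_after:
  "rg_valid_profile \<sigma>0 \<tau> \<sigma>2 \<Longrightarrow> rg_valid_profile (rg_after q \<sigma>0) (rg_after k \<tau>) (rg_after q \<sigma>2)"
  by (simp add: rg_valid_profile_def rg_valid_pub_def rg_valid1_def rg_after_apply)

lemma rg_valid_profileD:
  assumes "rg_valid_profile \<sigma>0 \<tau> \<sigma>2"
  shows "rg_dist (\<sigma>0 p)" "rg_dist (\<tau> k y0)" "rg_dist (\<sigma>2 p)"
  using assms by (auto simp: rg_valid_profile_def rg_valid_pub_def rg_valid1_def)

definition rg_u1_max :: "('y0::finite \<Rightarrow> 'a1::finite \<Rightarrow> 'a2::finite \<Rightarrow> real) \<Rightarrow> real" where
  "rg_u1_max u1 = Max (range (\<lambda>(y0, a1, a2). \<bar>u1 y0 a1 a2\<bar>))"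

lemma rg_u1_max_bound:
  "\<bar>u1 y0 a1 a2\<bar> \<le> rg_u1_max (u1 :: 'y0::finite \<Rightarrow> 'a1::finite \<Rightarrow> 'a2::finite \<Rightarrow> real)"
  unfolding rg_u1_max_def by (rule Max_ge) (auto intro!: image_eqI[where x="(y0, a1, a2)"])

lemma rg_NE_valid_profile: "rg_NE \<rho>0 \<rho>1 u0 u1 u2 \<mu> \<delta> \<sigma>0 \<sigma>1 \<sigma>2 \<Longrightarrow> rg_valid_profile \<sigma>0 \<sigma>1 \<sigma>2"
  by (simp add: rg_NE_def rg_valid_profile_def)

locale rg_signals =
  fixes \<rho>0 :: "'a0::finite \<Rightarrow> 'y0::finite \<Rightarrow> real"
    and \<rho>1 :: "'a1::finite \<Rightarrow> 'a2::finite \<Rightarrow> 'y1::finite \<Rightarrow> real"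
  assumes rho0: "\<forall>a0. rg_dist (\<rho>0 a0)"
    and rho1: "\<forall>a1 a2. rg_dist (\<rho>1 a1 a2)"
begin

lemma rho0_sum[simp]: "sum (\<rho>0 a0) UNIV = 1" using rho0 by (simp add: rg_dist_def)
lemma rho1_sum[simp]: "sum (\<rho>1 a1 a2) UNIV = 1" using rho1 by (simp add: rg_dist_def)
lemma rho0_nonneg: "0 \<le> \<rho>0 a0 y0" using rho0 by (simp add: rg_dist_def)
lemma rho1_nonneg: "0 \<le> \<rho>1 a1 a2 y1" using rho1 by (simp add: rg_dist_def)

lemma sum_step_prob:
  "(\<Sum>r\<in>UNIV. rg_step_prob \<rho>0 \<rho>1 \<sigma>0 \<tau> \<sigma>2 h r * F r) =
   (\<Sum>a0\<in>UNIV. \<Sum>y0\<in>UNIV. \<Sum>a1\<in>UNIV. \<Sum>a2\<in>UNIV. \<Sum>y1\<in>UNIV.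
      \<sigma>0 (map rg_pub h) a0 * \<rho>0 a0 y0 * \<tau> (map rg_priv h) y0 a1 * \<sigma>2 (map rg_pub h) a2 * \<rho>1 a1 a2 y1
      * F (a0, y0, a1, a2, y1))"
  by (simp add: sum_UNIV_prod rg_step_prob_def)

lemma sum_step_prob_stage:
  "(\<Sum>r\<in>UNIV. rg_step_prob \<rho>0 \<rho>1 \<sigma>0 \<tau> \<sigma>2 h r * (case r of (a0, y0, a1, a2, y1) \<Rightarrow> G a0 y0 a1 a2)) =
   (\<Sum>a0\<in>UNIV. \<sigma>0 (map rg_pub h) a0 * (\<Sum>y0\<in>UNIV. \<rho>0 a0 y0 * (\<Sum>a1\<in>UNIV. \<tau> (map rg_priv h) y0 a1 *
       (\<Sum>a2\<in>UNIV. \<sigma>2 (map rg_pub h) a2 * G a0 y0 a1 a2))))"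
proof -
  have "\<And>a0 y0 a1 a2. (\<Sum>y1\<in>UNIV. \<sigma>0 (map rg_pub h) a0 * \<rho>0 a0 y0 * \<tau> (map rg_priv h) y0 a1 * \<sigma>2 (map rg_pub h) a2 * \<rho>1 a1 a2 y1
      * G a0 y0 a1 a2) = \<sigma>0 (map rg_pub h) a0 * \<rho>0 a0 y0 * \<tau> (map rg_priv h) y0 a1 * \<sigma>2 (map rg_pub h) a2 * G a0 y0 a1 a2"
  proof -
    fix a0 y0 a1 a2
    have "(\<Sum>y1\<in>UNIV. \<sigma>0 (map rg_pub h) a0 * \<rho>0 a0 y0 * \<tau> (map rg_priv h) y0 a1 * \<sigma>2 (map rg_pub h) a2 *
        \<rho>1 a1 a2 y1 * G a0 y0 a1 a2) =
      (\<sigma>0 (map rg_pub h) a0 * \<rho>0 a0 y0 * \<tau> (map rg_priv h) y0 a1 * \<sigma>2 (map rg_pub h) a2 * G a0 y0 a1 a2) *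
      (\<Sum>y1\<in>UNIV. \<rho>1 a1 a2 y1)"
      unfolding sum_distrib_left by (simp add: mult_ac del: rho1_sum)
    then show "?thesis a0 y0 a1 a2" by simp
  qed
  then show ?thesis
    by (simp add: sum_step_prob sum_distrib_left mult_ac)
qed

lemma rg_valid_profile_nonneg:
  assumes "rg_valid_profile \<sigma>0 \<tau> \<sigma>2"
  shows "0 \<le> \<sigma>0 p a" "0 \<le> \<tau> k y0 a1" "0 \<le> \<sigma>2 p a2"
  using rg_dist_nonneg[OF rg_valid_profileD(1)[OF assms]] rg_dist_nonneg[OF rg_valid_profileD(2)[OF assms]]
    rg_dist_nonneg[OF rg_valid_profileD(3)[OF assms]]
  by auto

lemma step_prob_nonneg: assumes v: "rg_valid_profile \<sigma>0 \<tau> \<sigma>2" shows "0 \<le> rg_step_prob \<rho>0 \<rho>1 \<sigma>0 \<tau> \<sigma>2 h r"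
  by (cases r) (simp add: rg_step_prob_def mult_nonneg_nonneg rho0_nonneg rho1_nonneg rg_valid_profile_nonneg[OF v])

lemma sum_step_prob_eq_1: "rg_valid_profile \<sigma>0 \<tau> \<sigma>2 \<Longrightarrow> (\<Sum>r\<in>UNIV. rg_step_prob \<rho>0 \<rho>1 \<sigma>0 \<tau> \<sigma>2 h r) = 1"
proof -
  assume v: "rg_valid_profile \<sigma>0 \<tau> \<sigma>2"
  have "(\<Sum>r\<in>UNIV. rg_step_prob \<rho>0 \<rho>1 \<sigma>0 \<tau> \<sigma>2 h r) =
     (\<Sum>r\<in>UNIV. rg_step_prob \<rho>0 \<rho>1 \<sigma>0 \<tau> \<sigma>2 h r * (case r of (a0, y0, a1, a2, y1) \<Rightarrow> 1))"
    by (simp add: split_def)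
  also have "\<dots> = (\<Sum>a0\<in>UNIV. \<sigma>0 (map rg_pub h) a0 * (\<Sum>y0\<in>UNIV. \<rho>0 a0 y0 * (\<Sum>a1\<in>UNIV. \<tau> (map rg_priv h) y0 a1 *
       (\<Sum>a2\<in>UNIV. \<sigma>2 (map rg_pub h) a2 * 1))))"
    by (rule sum_step_prob_stage)
  also have "\<dots> = 1"
    using rg_valid_profileD[OF v] by (simp add: rg_dist_sum sum_distrib_left[symmetric])
  finally show ?thesis .
qed

lemma hist_prob_nonneg: "rg_valid_profile \<sigma>0 \<tau> \<sigma>2 \<Longrightarrow> 0 \<le> rg_hist_prob \<rho>0 \<rho>1 \<sigma>0 \<tau> \<sigma>2 h"
  by (simp add: rg_hist_prob_eq_prod prod_nonneg step_prob_nonneg)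

lemma sum_hist_prob_eq_1:
  "rg_valid_profile \<sigma>0 \<tau> \<sigma>2 \<Longrightarrow> (\<Sum>h\<in>{h. length h = n}. rg_hist_prob \<rho>0 \<rho>1 \<sigma>0 \<tau> \<sigma>2 h) = 1"
proof (induction n)
  case 0 then show ?case by simp
next
  case (Suc n)
  have "(\<Sum>h\<in>{h. length h = Suc n}. rg_hist_prob \<rho>0 \<rho>1 \<sigma>0 \<tau> \<sigma>2 h)
     = (\<Sum>h\<in>{h. length h = n}. \<Sum>r\<in>UNIV. rg_hist_prob \<rho>0 \<rho>1 \<sigma>0 \<tau> \<sigma>2 h * rg_step_prob \<rho>0 \<rho>1 \<sigma>0 \<tau> \<sigma>2 h r)"
    by (simp add: sum_length_Suc_snoc rg_hist_prob_snoc)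
  also have "\<dots> = (\<Sum>h\<in>{h. length h = n}. rg_hist_prob \<rho>0 \<rho>1 \<sigma>0 \<tau> \<sigma>2 h)"
    by (simp add: sum_distrib_left[symmetric] sum_step_prob_eq_1 Suc.prems)
  finally show ?case using Suc by simp
qed

lemma exp_stage_snoc: "rg_exp_stage \<rho>0 \<rho>1 \<sigma>0 \<tau> \<sigma>2 t f =
  (\<Sum>h\<in>{h. length h = t}. rg_hist_prob \<rho>0 \<rho>1 \<sigma>0 \<tau> \<sigma>2 h * (\<Sum>r\<in>UNIV. rg_step_prob \<rho>0 \<rho>1 \<sigma>0 \<tau> \<sigma>2 h r * f r))"
  by (simp add: rg_exp_stage_def sum_length_Suc_snoc rg_hist_prob_snoc sum_distrib_left mult_ac)

lemma exp_stage_0: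
  "rg_exp_stage \<rho>0 \<rho>1 \<sigma>0 \<tau> \<sigma>2 0 f = (\<Sum>r\<in>UNIV. rg_step_prob \<rho>0 \<rho>1 \<sigma>0 \<tau> \<sigma>2 [] r * f r)"
  by (simp add: exp_stage_snoc)

lemma exp_stage_Suc: "rg_exp_stage \<rho>0 \<rho>1 \<sigma>0 \<tau> \<sigma>2 (Suc t) f =
  (\<Sum>r\<in>UNIV. rg_step_prob \<rho>0 \<rho>1 \<sigma>0 \<tau> \<sigma>2 [] r *
     rg_exp_stage \<rho>0 \<rho>1 (rg_after [rg_pub r] \<sigma>0) (rg_after [rg_priv r] \<tau>) (rg_after [rg_pub r] \<sigma>2) t f)"
proof -
  have "rg_exp_stage \<rho>0 \<rho>1 \<sigma>0 \<tau> \<sigma>2 (Suc t) f =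
    (\<Sum>r\<in>UNIV. \<Sum>h\<in>{h. length h = Suc t}. rg_hist_prob \<rho>0 \<rho>1 \<sigma>0 \<tau> \<sigma>2 (r # h) * f (last (r # h)))"
    unfolding rg_exp_stage_def by (rule sum_length_Suc_Cons)
  also have "\<dots> = (\<Sum>r\<in>UNIV. \<Sum>h\<in>{h. length h = Suc t}. rg_step_prob \<rho>0 \<rho>1 \<sigma>0 \<tau> \<sigma>2 [] r *
      (rg_hist_prob \<rho>0 \<rho>1 (rg_after [rg_pub r] \<sigma>0) (rg_after [rg_priv r] \<tau>) (rg_after [rg_pub r] \<sigma>2) h * f (last h)))"
    by (intro sum.cong refl) (auto simp: rg_hist_prob_Cons)
  finally show ?thesis by (simp add: rg_exp_stage_def sum_distrib_left)
qed

lemma abs_exp_stage_le: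
  assumes v: "rg_valid_profile \<sigma>0 \<tau> \<sigma>2" and f: "\<And>r. \<bar>f r\<bar> \<le> M"
  shows "\<bar>rg_exp_stage \<rho>0 \<rho>1 \<sigma>0 \<tau> \<sigma>2 t f\<bar> \<le> M"
proof -
  have "\<bar>rg_exp_stage \<rho>0 \<rho>1 \<sigma>0 \<tau> \<sigma>2 t f\<bar> \<le> (\<Sum>h\<in>{h. length h = Suc t}. \<bar>rg_hist_prob \<rho>0 \<rho>1 \<sigma>0 \<tau> \<sigma>2 h * f (last h)\<bar>)"
    unfolding rg_exp_stage_def by (rule sum_abs)
  also have "\<dots> \<le> (\<Sum>h\<in>{h. length h = Suc t}. rg_hist_prob \<rho>0 \<rho>1 \<sigma>0 \<tau> \<sigma>2 h * M)"
    by (intro sum_mono) (simp add: abs_mult hist_prob_nonneg[OF v] mult_left_mono f)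
  also have "\<dots> = M" by (simp add: sum_distrib_right[symmetric] sum_hist_prob_eq_1[OF v])
  finally show ?thesis .
qed

section \<open>Discounted payoffs\<close>

definition rg_flow1 :: "('y0 \<Rightarrow> 'a1 \<Rightarrow> 'a2 \<Rightarrow> real) \<Rightarrow> 'a0 \<times> 'y0 \<times> 'a1 \<times> 'a2 \<times> 'y1 \<Rightarrow> real" where
  "rg_flow1 u1 = (\<lambda>(a0, y0, a1, a2, y1). u1 y0 a1 a2)"

lemma rg_U1_eq_flow:
  "rg_U1 \<rho>0 \<rho>1 u1 \<delta> \<sigma>0 \<tau> \<sigma>2 = (1 - \<delta>) * (\<Sum>t. \<delta> ^ t * rg_exp_stage \<rho>0 \<rho>1 \<sigma>0 \<tau> \<sigma>2 t (rg_flow1 u1))"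
  by (simp add: rg_U1_def rg_flow1_def)

lemma abs_flow1_le: "\<bar>rg_flow1 u1 r\<bar> \<le> rg_u1_max u1"
  by (cases r) (simp add: rg_flow1_def rg_u1_max_bound)

lemma U1_recursion:
  assumes v: "rg_valid_profile \<sigma>0 \<tau> \<sigma>2" and d: "0 \<le> \<delta>" "\<delta> < 1"
  shows "rg_U1 \<rho>0 \<rho>1 u1 \<delta> \<sigma>0 \<tau> \<sigma>2 =
    (1 - \<delta>) * (\<Sum>r\<in>UNIV. rg_step_prob \<rho>0 \<rho>1 \<sigma>0 \<tau> \<sigma>2 [] r * rg_flow1 u1 r) +
    \<delta> * (\<Sum>r\<in>UNIV. rg_step_prob \<rho>0 \<rho>1 \<sigma>0 \<tau> \<sigma>2 [] r *
       rg_U1 \<rho>0 \<rho>1 u1 \<delta> (rg_after [rg_pub r] \<sigma>0) (rg_after [rg_priv r] \<tau>) (rg_after [rg_pub r] \<sigma>2))"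
proof -
  define e where "e = (\<lambda>t. rg_exp_stage \<rho>0 \<rho>1 \<sigma>0 \<tau> \<sigma>2 t (rg_flow1 u1))"
  define e' where "e' = (\<lambda>(r::'a0 \<times> 'y0 \<times> 'a1 \<times> 'a2 \<times> 'y1) t.
    rg_exp_stage \<rho>0 \<rho>1 (rg_after [rg_pub r] \<sigma>0) (rg_after [rg_priv r] \<tau>) (rg_after [rg_pub r] \<sigma>2) t (rg_flow1 u1))"
  have sm: "summable (\<lambda>t. \<delta> ^ t * e t)"
    using d by (intro summable_discounted[where M="rg_u1_max u1"]) (auto simp: e_def intro!: abs_exp_stage_le[OF v] abs_flow1_le)
  have sm': "summable (\<lambda>t. \<delta> ^ t * e' r t)" for r
    using d by (intro summable_discounted[where M="rg_u1_max u1"])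
      (auto simp: e'_def intro!: abs_exp_stage_le rg_valid_profile_after[OF v] abs_flow1_le)
  have "(\<Sum>t. \<delta> ^ t * e t) = \<delta> ^ 0 * e 0 + (\<Sum>t. \<delta> ^ Suc t * e (Suc t))"
    using suminf_split_head[OF sm] by simp
  also have "(\<Sum>t. \<delta> ^ Suc t * e (Suc t)) = (\<Sum>t. \<Sum>r\<in>UNIV. \<delta> * (rg_step_prob \<rho>0 \<rho>1 \<sigma>0 \<tau> \<sigma>2 [] r * (\<delta> ^ t * e' r t)))"
    by (simp add: e_def e'_def exp_stage_Suc sum_distrib_left mult_ac)
  also have "\<dots> = (\<Sum>r\<in>UNIV. \<Sum>t. \<delta> * (rg_step_prob \<rho>0 \<rho>1 \<sigma>0 \<tau> \<sigma>2 [] r * (\<delta> ^ t * e' r t)))"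
    by (rule suminf_sum) (intro summable_mult sm')
  also have "\<dots> = (\<Sum>r\<in>UNIV. \<delta> * (rg_step_prob \<rho>0 \<rho>1 \<sigma>0 \<tau> \<sigma>2 [] r * (\<Sum>t. \<delta> ^ t * e' r t)))"
    by (intro sum.cong refl) (simp add: suminf_mult summable_mult sm')
  finally have eq: "(\<Sum>t. \<delta> ^ t * e t) = e 0 + \<delta> * (\<Sum>r\<in>UNIV. rg_step_prob \<rho>0 \<rho>1 \<sigma>0 \<tau> \<sigma>2 [] r * (\<Sum>t. \<delta> ^ t * e' r t))"
    by (simp add: sum_distrib_left)
  have A: "rg_U1 \<rho>0 \<rho>1 u1 \<delta> \<sigma>0 \<tau> \<sigma>2 = (1 - \<delta>) * (\<Sum>t. \<delta> ^ t * e t)"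
    by (simp add: rg_U1_eq_flow e_def)
  have B: "rg_U1 \<rho>0 \<rho>1 u1 \<delta> (rg_after [rg_pub r] \<sigma>0) (rg_after [rg_priv r] \<tau>) (rg_after [rg_pub r] \<sigma>2) =
      (1 - \<delta>) * (\<Sum>t. \<delta> ^ t * e' r t)" for r
    by (simp add: rg_U1_eq_flow e'_def)
  have C: "e 0 = (\<Sum>r\<in>UNIV. rg_step_prob \<rho>0 \<rho>1 \<sigma>0 \<tau> \<sigma>2 [] r * rg_flow1 u1 r)"
    by (simp add: e_def exp_stage_0)
  have D: "(\<Sum>r\<in>UNIV. rg_step_prob \<rho>0 \<rho>1 \<sigma>0 \<tau> \<sigma>2 [] r * ((1 - \<delta>) * (\<Sum>t. \<delta> ^ t * e' r t)))
     = (1 - \<delta>) * (\<Sum>r\<in>UNIV. rg_step_prob \<rho>0 \<rho>1 \<sigma>0 \<tau> \<sigma>2 [] r * (\<Sum>t. \<delta> ^ t * e' r t))"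
    by (simp add: sum_distrib_left mult_ac)
  show ?thesis unfolding A B eq D C[symmetric] by (simp add: algebra_simps)
qed

lemma U1_le_if_exp_stage_le:
  assumes v: "rg_valid_profile \<sigma>0 \<sigma>1 \<sigma>2" and d: "0 < \<delta>" "\<delta> < 1"
    and E: "\<And>T. rg_exp_stage \<rho>0 \<rho>1 \<sigma>0 \<sigma>1 \<sigma>2 T (rg_flow1 u1) \<le> Bnd"
  shows "rg_U1 \<rho>0 \<rho>1 u1 \<delta> \<sigma>0 \<sigma>1 \<sigma>2 \<le> Bnd"
proof -
  have s1: "summable (\<lambda>t. \<delta> ^ t * rg_exp_stage \<rho>0 \<rho>1 \<sigma>0 \<sigma>1 \<sigma>2 t (rg_flow1 u1))"
    using d by (intro summable_discounted[where M="rg_u1_max u1"]) (auto intro!: abs_exp_stage_le[OF v] abs_flow1_le)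
  have s2: "summable (\<lambda>t. \<delta> ^ t * Bnd)"
    using d by (intro summable_discounted[where M="\<bar>Bnd\<bar>"]) auto
  have "(\<Sum>t. \<delta> ^ t * rg_exp_stage \<rho>0 \<rho>1 \<sigma>0 \<sigma>1 \<sigma>2 t (rg_flow1 u1)) \<le> (\<Sum>t. \<delta> ^ t * Bnd)"
    by (rule suminf_le[OF _ s1 s2]) (use d E in \<open>auto intro: mult_left_mono\<close>)
  also have "(\<Sum>t. \<delta> ^ t * Bnd) = (\<Sum>t. \<delta> ^ t) * Bnd"
    by (rule suminf_mult2[symmetric]) (use d in \<open>auto intro: summable_geometric\<close>)
  also have "(\<Sum>t. \<delta> ^ t) = 1 / (1 - \<delta>)" using d by (intro suminf_geometric) auto
  finally have "(1 - \<delta>) * (\<Sum>t. \<delta> ^ t * rg_exp_stage \<rho>0 \<rho>1 \<sigma>0 \<sigma>1 \<sigma>2 t (rg_flow1 u1)) \<le> (1 - \<delta>) * (1 / (1 - \<delta>) * Bnd)"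
    using d by (intro mult_left_mono) auto
  then show ?thesis using d by (simp add: rg_U1_eq_flow)
qed

definition rg_U1_gain where
  "rg_U1_gain u1 \<delta> \<sigma>0 \<tau>' \<tau> \<sigma>2 (h :: ('a0 \<times> 'y0 \<times> 'a1 \<times> 'a2 \<times> 'y1) list) =
     rg_U1 \<rho>0 \<rho>1 u1 \<delta> (rg_after (map rg_pub h) \<sigma>0) (rg_after (map rg_priv h) \<tau>') (rg_after (map rg_pub h) \<sigma>2) -
     rg_U1 \<rho>0 \<rho>1 u1 \<delta> (rg_after (map rg_pub h) \<sigma>0) (rg_after (map rg_priv h) \<tau>) (rg_after (map rg_pub h) \<sigma>2)"

lemma U1_gain_Cons:
  "rg_U1_gain u1 \<delta> \<sigma>0 \<tau>' \<tau> \<sigma>2 (r # h) =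
   rg_U1_gain u1 \<delta> (rg_after [rg_pub r] \<sigma>0) (rg_after [rg_priv r] \<tau>') (rg_after [rg_priv r] \<tau>) (rg_after [rg_pub r] \<sigma>2) h"
  by (simp add: rg_U1_gain_def)

lemma U1_gain_Nil_same_root:
  assumes "rg_valid_profile \<sigma>0 \<tau> \<sigma>2" "rg_valid_profile \<sigma>0 \<tau>' \<sigma>2" "0 \<le> \<delta>" "\<delta> < 1"
    and "\<tau>' [] = \<tau> []"
  shows "rg_U1_gain u1 \<delta> \<sigma>0 \<tau>' \<tau> \<sigma>2 [] =
    \<delta> * (\<Sum>r\<in>UNIV. rg_step_prob \<rho>0 \<rho>1 \<sigma>0 \<tau> \<sigma>2 [] r * rg_U1_gain u1 \<delta> \<sigma>0 \<tau>' \<tau> \<sigma>2 [r])"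
proof -
  have "rg_step_prob \<rho>0 \<rho>1 \<sigma>0 \<tau>' \<sigma>2 [] = rg_step_prob \<rho>0 \<rho>1 \<sigma>0 \<tau> \<sigma>2 []"
    using assms(5) by (simp add: rg_step_prob_def fun_eq_iff)
  then show ?thesis
    unfolding rg_U1_gain_def
    by (simp add: U1_recursion[OF assms(1,3,4)] U1_recursion[OF assms(2,3,4)] sum_subtractf[symmetric]
        right_diff_distrib, simp add: sum_subtractf right_diff_distrib)
qed

lemma U1_diff_deviation:
  assumes "rg_valid_profile \<sigma>0 \<tau> \<sigma>2" "rg_valid_profile \<sigma>0 \<tau>' \<sigma>2" "0 \<le> \<delta>" "\<delta> < 1"
    and "\<And>k. (\<forall>k'. k \<noteq> \<pi> @ k') \<Longrightarrow> \<tau>' k = \<tau> k"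
  shows "rg_U1_gain u1 \<delta> \<sigma>0 \<tau>' \<tau> \<sigma>2 [] =
    \<delta> ^ length \<pi> * (\<Sum>h\<in>{h. length h = length \<pi>}.
      if map rg_priv h = \<pi> then rg_hist_prob \<rho>0 \<rho>1 \<sigma>0 \<tau> \<sigma>2 h * rg_U1_gain u1 \<delta> \<sigma>0 \<tau>' \<tau> \<sigma>2 h else 0)"
  using assms
proof (induction \<pi> arbitrary: \<sigma>0 \<tau> \<tau>' \<sigma>2)
  case Nil
  have "{h. length h = length []} = {[]}" by auto
  then show ?case by simp
next
  case (Cons c \<pi>)
  let ?G = "rg_U1_gain u1 \<delta> \<sigma>0 \<tau>' \<tau> \<sigma>2"
  have summand: "rg_step_prob \<rho>0 \<rho>1 \<sigma>0 \<tau> \<sigma>2 [] r * ?G [r] =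
     \<delta> ^ length \<pi> * (\<Sum>h\<in>{h. length h = length \<pi>}. if map rg_priv (r # h) = c # \<pi> then
       rg_hist_prob \<rho>0 \<rho>1 \<sigma>0 \<tau> \<sigma>2 (r # h) * ?G (r # h) else 0)" for r
  proof (cases "rg_priv r = c")
    case False
    then have "rg_after [rg_priv r] \<tau>' = rg_after [rg_priv r] \<tau>"
      by (simp add: fun_eq_iff rg_after_apply Cons.prems(5))
    then show ?thesis using False by (simp add: rg_U1_gain_def)
  next
    case True
    have "?G [r] = \<delta> ^ length \<pi> * (\<Sum>h\<in>{h. length h = length \<pi>}. if map rg_priv h = \<pi> then
       rg_hist_prob \<rho>0 \<rho>1 (rg_after [rg_pub r] \<sigma>0) (rg_after [rg_priv r] \<tau>) (rg_after [rg_pub r] \<sigma>2) h *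
       ?G (r # h) else 0)"
    proof -
      have cond: "\<And>k. (\<forall>k'. k \<noteq> \<pi> @ k') \<Longrightarrow> rg_after [rg_priv r] \<tau>' k = rg_after [rg_priv r] \<tau> k"
        by (simp add: rg_after_apply True Cons.prems(5))
      show ?thesis
        using Cons.IH[OF rg_valid_profile_after[OF Cons.prems(1), where q="[rg_pub r]" and k="[rg_priv r]"]
            rg_valid_profile_after[OF Cons.prems(2), where q="[rg_pub r]" and k="[rg_priv r]"]
            Cons.prems(3,4) cond]
        by (simp add: U1_gain_Cons cong: if_cong)
    qed
    then show ?thesis
      by (simp add: sum_distrib_left rg_hist_prob_Cons True mult_ac if_distrib cong: if_cong)
  qed
  have "?G [] = \<delta> * (\<Sum>r\<in>UNIV. rg_step_prob \<rho>0 \<rho>1 \<sigma>0 \<tau> \<sigma>2 [] r * ?G [r])"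
    using Cons.prems(5)[of "[]"] by (intro U1_gain_Nil_same_root Cons.prems(1-4)) auto
  then show ?case
    by (simp only: summand sum_length_Suc_Cons length_Cons sum_distrib_left power_Suc mult.assoc)
qed

end

section \<open>One-shot deviations\<close>

text \<open>The deviation used for cyclic monotonicity, seen from the private history \<open>\<pi>\<close>: after
  the signal \<open>x\<close> play \<open>a\<close>, and if this happened, continue as if the private history had been
  \<open>\<pi>'\<close> followed by the signal \<open>x'\<close>; otherwise play as \<open>\<sigma>1\<close> does after \<open>\<pi>\<close>.\<close>
definition rg_swap_root :: "(('y0 \<times> 'a1 \<times> 'y1) list \<Rightarrow> 'y0 \<Rightarrow> 'a1 \<Rightarrow> real) \<Rightarrow> ('y0 \<times> 'a1 \<times> 'y1) list \<Rightarrow> 'y0 \<Rightarrow> 'a1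
   \<Rightarrow> ('y0 \<times> 'a1 \<times> 'y1) list \<Rightarrow> 'y0 \<Rightarrow> (('y0 \<times> 'a1 \<times> 'y1) list \<Rightarrow> 'y0 \<Rightarrow> 'a1 \<Rightarrow> real)" where
  "rg_swap_root \<sigma>1 \<pi> x a \<pi>' x' = (\<lambda>k. case k of
      [] \<Rightarrow> (\<lambda>y0. if y0 = x then (\<lambda>a1. if a1 = a then 1 else 0) else \<sigma>1 \<pi> y0)
    | e # rest \<Rightarrow> (if fst e = x \<and> fst (snd e) = a then \<sigma>1 (\<pi>' @ (x', a, snd (snd e)) # rest) else \<sigma>1 (\<pi> @ k)))"

definition rg_swap_dev :: "(('y0 \<times> 'a1 \<times> 'y1) list \<Rightarrow> 'y0 \<Rightarrow> 'a1 \<Rightarrow> real) \<Rightarrow> ('y0 \<times> 'a1 \<times> 'y1) list \<Rightarrow> 'y0 \<Rightarrow> 'a1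
   \<Rightarrow> ('y0 \<times> 'a1 \<times> 'y1) list \<Rightarrow> 'y0 \<Rightarrow> (('y0 \<times> 'a1 \<times> 'y1) list \<Rightarrow> 'y0 \<Rightarrow> 'a1 \<Rightarrow> real)" where
  "rg_swap_dev \<sigma>1 \<pi> x a \<pi>' x' = (\<lambda>k. if length \<pi> \<le> length k \<and> take (length \<pi>) k = \<pi>
      then rg_swap_root \<sigma>1 \<pi> x a \<pi>' x' (drop (length \<pi>) k) else \<sigma>1 k)"

lemma rg_after_swap_dev: "rg_after \<pi> (rg_swap_dev \<sigma>1 \<pi> x a \<pi>' x') = rg_swap_root \<sigma>1 \<pi> x a \<pi>' x'"
  by (rule ext) (simp add: rg_swap_dev_def rg_after_apply)

lemma rg_swap_dev_outside: "(\<forall>k'. k \<noteq> \<pi> @ k') \<Longrightarrow> rg_swap_dev \<sigma>1 \<pi> x a \<pi>' x' k = \<sigma>1 k"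
  unfolding rg_swap_dev_def by (metis append_take_drop_id)

lemma rg_valid1_swap_root: "rg_valid1 \<sigma>1 \<Longrightarrow> rg_valid1 (rg_swap_root \<sigma>1 \<pi> x a \<pi>' x')"
  unfolding rg_valid1_def rg_swap_root_def by (auto simp: rg_dist_point split: list.split)

lemma rg_valid1_swap_dev: "rg_valid1 \<sigma>1 \<Longrightarrow> rg_valid1 (rg_swap_dev \<sigma>1 \<pi> x a \<pi>' x')"
  using rg_valid1_swap_root[of \<sigma>1] unfolding rg_valid1_def rg_swap_dev_def by auto

lemma rg_swap_root_Nil:
  "rg_swap_root \<sigma>1 \<pi> x a \<pi>' x' [] y0 = (if y0 = x then (\<lambda>a1. if a1 = a then 1 else 0) else \<sigma>1 \<pi> y0)"
  by (simp add: rg_swap_root_def)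

lemma rg_after_swap_root_hit:
  "rg_after [(x, a, y1)] (rg_swap_root \<sigma>1 \<pi> x a \<pi>' x') = rg_after (\<pi>' @ [(x', a, y1)]) \<sigma>1"
  by (rule ext) (simp add: rg_swap_root_def rg_after_apply)

lemma rg_after_swap_root_miss:
  "\<not> (y0 = x \<and> a1 = a) \<Longrightarrow> rg_after [(y0, a1, y1)] (rg_swap_root \<sigma>1 \<pi> x a \<pi>' x') = rg_after (\<pi> @ [(y0, a1, y1)]) \<sigma>1"
  by (rule ext) (auto simp: rg_swap_root_def rg_after_apply)

definition rg_pubs :: "('y0 \<times> 'a1 \<times> 'y1) list \<Rightarrow> 'y1 list" where
  "rg_pubs k = map (\<lambda>e. snd (snd e)) k"

lemma map_pub_eq_pubs_priv: "map rg_pub h = rg_pubs (map rg_priv h)"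
  by (induction h) (auto simp: rg_pubs_def rg_pub_def rg_priv_def split: prod.split)

context rg_signals begin

definition rg_action_value where
  "rg_action_value u1 \<delta> \<sigma>0 \<tau> \<sigma>2 y0 a1 = (\<Sum>a2\<in>UNIV. \<sigma>2 [] a2 * (\<Sum>y1\<in>UNIV. \<rho>1 a1 a2 y1 *
     ((1 - \<delta>) * u1 y0 a1 a2 + \<delta> * rg_U1 \<rho>0 \<rho>1 u1 \<delta> (rg_after [y1] \<sigma>0) (rg_after [(y0, a1, y1)] \<tau>) (rg_after [y1] \<sigma>2))))"

lemma U1_eq_action_values:
  assumes v: "rg_valid_profile \<sigma>0 \<tau> \<sigma>2" and d: "0 \<le> \<delta>" "\<delta> < 1"
  shows "rg_U1 \<rho>0 \<rho>1 u1 \<delta> \<sigma>0 \<tau> \<sigma>2 =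
    (\<Sum>a0\<in>UNIV. \<sigma>0 [] a0 * (\<Sum>y0\<in>UNIV. \<rho>0 a0 y0 * (\<Sum>a1\<in>UNIV. \<tau> [] y0 a1 * rg_action_value u1 \<delta> \<sigma>0 \<tau> \<sigma>2 y0 a1)))"
proof -
  have "rg_U1 \<rho>0 \<rho>1 u1 \<delta> \<sigma>0 \<tau> \<sigma>2 = (\<Sum>r\<in>UNIV. rg_step_prob \<rho>0 \<rho>1 \<sigma>0 \<tau> \<sigma>2 [] r *
     ((1 - \<delta>) * rg_flow1 u1 r + \<delta> * rg_U1 \<rho>0 \<rho>1 u1 \<delta> (rg_after [rg_pub r] \<sigma>0) (rg_after [rg_priv r] \<tau>) (rg_after [rg_pub r] \<sigma>2)))"
    by (simp add: U1_recursion[OF v d] sum_distrib_left distrib_left sum.distrib mult_ac)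
  also have "\<dots> = (\<Sum>a0\<in>UNIV. \<Sum>y0\<in>UNIV. \<Sum>a1\<in>UNIV. \<Sum>a2\<in>UNIV. \<Sum>y1\<in>UNIV.
      \<sigma>0 [] a0 * \<rho>0 a0 y0 * \<tau> [] y0 a1 * \<sigma>2 [] a2 * \<rho>1 a1 a2 y1 *
      ((1 - \<delta>) * u1 y0 a1 a2 + \<delta> * rg_U1 \<rho>0 \<rho>1 u1 \<delta> (rg_after [y1] \<sigma>0) (rg_after [(y0, a1, y1)] \<tau>) (rg_after [y1] \<sigma>2)))"
    by (simp add: sum_step_prob rg_flow1_def rg_pub_def rg_priv_def)
  also have "\<dots> = (\<Sum>a0\<in>UNIV. \<sigma>0 [] a0 * (\<Sum>y0\<in>UNIV. \<rho>0 a0 y0 * (\<Sum>a1\<in>UNIV. \<tau> [] y0 a1 * rg_action_value u1 \<delta> \<sigma>0 \<tau> \<sigma>2 y0 a1)))"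
    by (simp add: rg_action_value_def sum_distrib_left mult_ac)
  finally show ?thesis .
qed

definition rg_swap_value where
  "rg_swap_value u1 \<delta> \<sigma>0 \<sigma>1 \<sigma>2 q y0 a1 k y0' = (\<Sum>a2\<in>UNIV. \<sigma>2 q a2 * (\<Sum>y1\<in>UNIV. \<rho>1 a1 a2 y1 *
     ((1 - \<delta>) * u1 y0 a1 a2 + \<delta> * rg_U1 \<rho>0 \<rho>1 u1 \<delta> (rg_after (q @ [y1]) \<sigma>0)
        (rg_after (k @ [(y0', a1, y1)]) \<sigma>1) (rg_after (q @ [y1]) \<sigma>2))))"

lemma action_value_after:
  "rg_action_value u1 \<delta> (rg_after q \<sigma>0) (rg_after \<pi> \<sigma>1) (rg_after q \<sigma>2) y0 a1 = rg_swap_value u1 \<delta> \<sigma>0 \<sigma>1 \<sigma>2 q y0 a1 \<pi> y0"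
  by (simp add: rg_action_value_def rg_swap_value_def rg_after_apply)

lemma action_value_swap_miss: "\<not> (y0 = x \<and> a1 = a) \<Longrightarrow>
  rg_action_value u1 \<delta> (rg_after q \<sigma>0) (rg_swap_root \<sigma>1 \<pi> x a \<pi>' x') (rg_after q \<sigma>2) y0 a1 = rg_swap_value u1 \<delta> \<sigma>0 \<sigma>1 \<sigma>2 q y0 a1 \<pi> y0"
  by (simp add: rg_action_value_def rg_swap_value_def rg_after_apply rg_after_swap_root_miss)

lemma action_value_swap_hit:
  "rg_action_value u1 \<delta> (rg_after q \<sigma>0) (rg_swap_root \<sigma>1 \<pi> x a \<pi>' x') (rg_after q \<sigma>2) x a = rg_swap_value u1 \<delta> \<sigma>0 \<sigma>1 \<sigma>2 q x a \<pi>' x'"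
  by (simp add: rg_action_value_def rg_swap_value_def rg_after_apply rg_after_swap_root_hit)

lemma U1_diff_swap_root:
  assumes v: "rg_valid_profile \<sigma>0 \<sigma>1 \<sigma>2" and d: "0 \<le> \<delta>" "\<delta> < 1"
  shows "rg_U1 \<rho>0 \<rho>1 u1 \<delta> (rg_after q \<sigma>0) (rg_swap_root \<sigma>1 \<pi> x a \<pi>' x') (rg_after q \<sigma>2) -
         rg_U1 \<rho>0 \<rho>1 u1 \<delta> (rg_after q \<sigma>0) (rg_after \<pi> \<sigma>1) (rg_after q \<sigma>2) =
    (\<Sum>a0\<in>UNIV. \<sigma>0 q a0 * \<rho>0 a0 x) *
    (rg_swap_value u1 \<delta> \<sigma>0 \<sigma>1 \<sigma>2 q x a \<pi>' x' - (\<Sum>a1\<in>UNIV. \<sigma>1 \<pi> x a1 * rg_swap_value u1 \<delta> \<sigma>0 \<sigma>1 \<sigma>2 q x a1 \<pi> x))"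
proof -
  have v1: "rg_valid_profile (rg_after q \<sigma>0) (rg_swap_root \<sigma>1 \<pi> x a \<pi>' x') (rg_after q \<sigma>2)"
    using v rg_valid1_swap_root[of \<sigma>1] by (auto simp: rg_valid_profile_def rg_valid_pub_def rg_after_apply)
  have v2: "rg_valid_profile (rg_after q \<sigma>0) (rg_after \<pi> \<sigma>1) (rg_after q \<sigma>2)" by (rule rg_valid_profile_after[OF v])
  define S1 where "S1 = (\<lambda>y0. \<Sum>a1\<in>UNIV. rg_swap_root \<sigma>1 \<pi> x a \<pi>' x' [] y0 a1 *
    rg_action_value u1 \<delta> (rg_after q \<sigma>0) (rg_swap_root \<sigma>1 \<pi> x a \<pi>' x') (rg_after q \<sigma>2) y0 a1)"
  define S2 where "S2 = (\<lambda>y0. \<Sum>a1\<in>UNIV. rg_after \<pi> \<sigma>1 [] y0 a1 *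
    rg_action_value u1 \<delta> (rg_after q \<sigma>0) (rg_after \<pi> \<sigma>1) (rg_after q \<sigma>2) y0 a1)"
  define L where "L = rg_swap_value u1 \<delta> \<sigma>0 \<sigma>1 \<sigma>2 q x a \<pi>' x' -
    (\<Sum>a1\<in>UNIV. \<sigma>1 \<pi> x a1 * rg_swap_value u1 \<delta> \<sigma>0 \<sigma>1 \<sigma>2 q x a1 \<pi> x)"
  have inner: "S1 y0 - S2 y0 = (if y0 = x then L else 0)" for y0
  proof (cases "y0 = x")
    case True
    then have "S1 y0 = rg_swap_value u1 \<delta> \<sigma>0 \<sigma>1 \<sigma>2 q x a \<pi>' x'"
      by (simp add: S1_def rg_swap_root_Nil action_value_swap_hit sum_point_mass)
    then show ?thesis using True by (simp add: S2_def L_def rg_after_apply action_value_after)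
  next
    case False
    then show ?thesis
      by (simp add: S1_def S2_def rg_swap_root_Nil action_value_swap_miss action_value_after rg_after_apply)
  qed
  have "rg_U1 \<rho>0 \<rho>1 u1 \<delta> (rg_after q \<sigma>0) (rg_swap_root \<sigma>1 \<pi> x a \<pi>' x') (rg_after q \<sigma>2) -
         rg_U1 \<rho>0 \<rho>1 u1 \<delta> (rg_after q \<sigma>0) (rg_after \<pi> \<sigma>1) (rg_after q \<sigma>2) =
     (\<Sum>a0\<in>UNIV. rg_after q \<sigma>0 [] a0 * (\<Sum>y0\<in>UNIV. \<rho>0 a0 y0 * S1 y0)) -
     (\<Sum>a0\<in>UNIV. rg_after q \<sigma>0 [] a0 * (\<Sum>y0\<in>UNIV. \<rho>0 a0 y0 * S2 y0))"
    unfolding U1_eq_action_values[OF v1 d] U1_eq_action_values[OF v2 d] S1_def S2_def by (rule refl)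
  also have "\<dots> = (\<Sum>a0\<in>UNIV. \<sigma>0 q a0 * (\<Sum>y0\<in>UNIV. \<rho>0 a0 y0 * (S1 y0 - S2 y0)))"
    by (simp add: rg_after_apply sum_subtractf[symmetric] right_diff_distrib[symmetric])
  also have "\<dots> = (\<Sum>a0\<in>UNIV. \<sigma>0 q a0 * (\<Sum>y0\<in>UNIV. \<rho>0 a0 y0 * (if y0 = x then L else 0)))"
    using inner by simp
  also have "\<dots> = (\<Sum>a0\<in>UNIV. \<sigma>0 q a0 * \<rho>0 a0 x) * L"
    by (simp add: if_distrib sum_distrib_right sum_distrib_left mult_ac cong: if_cong)
  finally show ?thesis unfolding L_def .
qed

end

context rg_signals begin

lemma U1_gain_nonpos_if_reached:
  assumes v: "rg_valid_profile \<sigma>0 \<sigma>1 \<sigma>2" "rg_valid_profile \<sigma>0 \<tau>' \<sigma>2" and d: "0 < \<delta>" "\<delta> < 1"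
    and opt: "rg_U1 \<rho>0 \<rho>1 u1 \<delta> \<sigma>0 \<tau>' \<sigma>2 \<le> rg_U1 \<rho>0 \<rho>1 u1 \<delta> \<sigma>0 \<sigma>1 \<sigma>2"
    and agree: "\<And>k. (\<forall>k'. k \<noteq> map rg_priv h0 @ k') \<Longrightarrow> \<tau>' k = \<sigma>1 k"
    and reached: "0 < rg_hist_prob \<rho>0 \<rho>1 \<sigma>0 \<sigma>1 \<sigma>2 h0"
  shows "rg_U1_gain u1 \<delta> \<sigma>0 \<tau>' \<sigma>1 \<sigma>2 h0 \<le> 0"
proof -
  let ?\<pi> = "map rg_priv h0"
  let ?G = "rg_U1_gain u1 \<delta> \<sigma>0 \<tau>' \<sigma>1 \<sigma>2"
  define g where "g = ?G h0"
  define W where "W = (\<Sum>h\<in>{h. length h = length ?\<pi>}.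
    if map rg_priv h = ?\<pi> then rg_hist_prob \<rho>0 \<rho>1 \<sigma>0 \<sigma>1 \<sigma>2 h else 0)"
  \<comment> \<open>the private history determines the public one, hence the continuation gain\<close>
  have same: "map rg_priv h = ?\<pi> \<Longrightarrow> ?G h = g" for h
    by (simp add: g_def rg_U1_gain_def map_pub_eq_pubs_priv)
  have "?G [] = \<delta> ^ length ?\<pi> * (\<Sum>h\<in>{h. length h = length ?\<pi>}.
      if map rg_priv h = ?\<pi> then rg_hist_prob \<rho>0 \<rho>1 \<sigma>0 \<sigma>1 \<sigma>2 h * ?G h else 0)"
    by (rule U1_diff_deviation[OF v(1,2) less_imp_le[OF d(1)] d(2) agree])
  also have "\<dots> = \<delta> ^ length ?\<pi> * W * g"
    unfolding W_def mult.assoc sum_distrib_right using same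
    by (intro arg_cong[where f="\<lambda>z. \<delta> ^ length ?\<pi> * z"] sum.cong refl) simp
  finally have "?G [] = \<delta> ^ length ?\<pi> * W * g" .
  moreover have "?G [] \<le> 0" using opt by (simp add: rg_U1_gain_def)
  moreover have "0 < W"
  proof -
    have "(if map rg_priv h0 = ?\<pi> then rg_hist_prob \<rho>0 \<rho>1 \<sigma>0 \<sigma>1 \<sigma>2 h0 else 0) \<le> W"
      unfolding W_def
      by (rule member_le_sum) (use hist_prob_nonneg[OF v(1)] in \<open>auto simp: finite_list_length\<close>)
    then show ?thesis using reached by simp
  qed
  ultimately have "(\<delta> ^ length ?\<pi> * W) * g \<le> 0" "0 < \<delta> ^ length ?\<pi> * W" using d by auto
  then show ?thesis
    unfolding g_def using mult_le_cancel_left_pos[of "\<delta> ^ length ?\<pi> * W" g 0] by (simp add: g_def)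
qed

text \<open>The incentive constraint behind cyclic monotonicity.\<close>
lemma swap_value_le_equilibrium:
  assumes v: "rg_valid_profile \<sigma>0 \<sigma>1 \<sigma>2" and d: "0 < \<delta>" "\<delta> < 1"
    and opt: "\<And>\<sigma>1'. rg_valid1 \<sigma>1' \<Longrightarrow> rg_U1 \<rho>0 \<rho>1 u1 \<delta> \<sigma>0 \<sigma>1' \<sigma>2 \<le> rg_U1 \<rho>0 \<rho>1 u1 \<delta> \<sigma>0 \<sigma>1 \<sigma>2"
    and full: "\<And>a0 y0. 0 < \<rho>0 a0 y0"
    and h0: "map rg_priv h0 = \<pi>" "0 < rg_hist_prob \<rho>0 \<rho>1 \<sigma>0 \<sigma>1 \<sigma>2 h0"
  shows "rg_swap_value u1 \<delta> \<sigma>0 \<sigma>1 \<sigma>2 (rg_pubs \<pi>) x a \<pi>' x' \<le>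
    (\<Sum>a1\<in>UNIV. \<sigma>1 \<pi> x a1 * rg_swap_value u1 \<delta> \<sigma>0 \<sigma>1 \<sigma>2 (rg_pubs \<pi>) x a1 \<pi> x)"
proof -
  define \<tau>' where "\<tau>' = rg_swap_dev \<sigma>1 \<pi> x a \<pi>' x'"
  define q where "q = rg_pubs \<pi>"
  have v': "rg_valid_profile \<sigma>0 \<tau>' \<sigma>2"
    using v rg_valid1_swap_dev[of \<sigma>1] by (simp add: rg_valid_profile_def \<tau>'_def)
  have "rg_U1_gain u1 \<delta> \<sigma>0 \<tau>' \<sigma>1 \<sigma>2 h0 \<le> 0"
    using opt[of \<tau>'] v' h0
    by (intro U1_gain_nonpos_if_reached[OF v v' d]) (auto simp: rg_valid_profile_def \<tau>'_def rg_swap_dev_outside)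
  moreover have "rg_U1_gain u1 \<delta> \<sigma>0 \<tau>' \<sigma>1 \<sigma>2 h0 = (\<Sum>a0\<in>UNIV. \<sigma>0 q a0 * \<rho>0 a0 x) *
    (rg_swap_value u1 \<delta> \<sigma>0 \<sigma>1 \<sigma>2 q x a \<pi>' x' - (\<Sum>a1\<in>UNIV. \<sigma>1 \<pi> x a1 * rg_swap_value u1 \<delta> \<sigma>0 \<sigma>1 \<sigma>2 q x a1 \<pi> x))"
    using U1_diff_swap_root[OF v] d h0(1)
    by (simp add: rg_U1_gain_def q_def \<tau>'_def map_pub_eq_pubs_priv rg_after_swap_dev)
  moreover have "0 < (\<Sum>a0\<in>UNIV. \<sigma>0 q a0 * \<rho>0 a0 x)"
  proof -
    obtain b where "0 < \<sigma>0 q b" using rg_dist_ex_pos rg_valid_profileD(1)[OF v] by blast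
    then show ?thesis
      using full rg_valid_profile_nonneg(1)[OF v] by (intro sum_pos2[of UNIV b]) (auto simp: less_imp_le)
  qed
  ultimately show ?thesis by (simp add: q_def mult_le_0_iff)
qed

end

section \<open>Cyclic monotonicity of equilibrium behaviour\<close>

definition rg_stage_exp :: "('a0::finite \<Rightarrow> 'y0::finite \<Rightarrow> real) \<Rightarrow> ('a0 \<Rightarrow> 'y0 \<Rightarrow> 'a1::finite \<Rightarrow> 'a2::finite \<Rightarrow> real)
   \<Rightarrow> ('a0 \<Rightarrow> real) \<Rightarrow> ('y0 \<Rightarrow> 'a1 \<Rightarrow> real) \<Rightarrow> ('a2 \<Rightarrow> real) \<Rightarrow> real" where
  "rg_stage_exp \<rho>0 G \<alpha>0 s \<alpha>2 = (\<Sum>a0\<in>UNIV. \<alpha>0 a0 * (\<Sum>y0\<in>UNIV. \<rho>0 a0 y0 * (\<Sum>a1\<in>UNIV. s y0 a1 *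
       (\<Sum>a2\<in>UNIV. \<alpha>2 a2 * G a0 y0 a1 a2))))"

lemma stage_exp_sum:
  assumes "finite H"
  shows "rg_stage_exp \<rho>0 G \<alpha>0 (\<lambda>y0 a1. \<Sum>h\<in>H. c h * S h y0 a1) \<alpha>2 = (\<Sum>h\<in>H. c h * rg_stage_exp \<rho>0 G \<alpha>0 (S h) \<alpha>2)"
  using assms
proof (induction H rule: finite_induct)
  case empty then show ?case by (simp add: rg_stage_exp_def)
next
  case (insert x H)
  have "rg_stage_exp \<rho>0 G \<alpha>0 (\<lambda>y0 a1. \<Sum>h\<in>insert x H. c h * S h y0 a1) \<alpha>2 =
        rg_stage_exp \<rho>0 G \<alpha>0 (\<lambda>y0 a1. c x * S x y0 a1 + (\<Sum>h\<in>H. c h * S h y0 a1)) \<alpha>2"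
    using insert by simp
  also have "\<dots> = c x * rg_stage_exp \<rho>0 G \<alpha>0 (S x) \<alpha>2 + rg_stage_exp \<rho>0 G \<alpha>0 (\<lambda>y0 a1. \<Sum>h\<in>H. c h * S h y0 a1) \<alpha>2"
    unfolding rg_stage_exp_def by (simp add: distrib_right distrib_left sum.distrib sum_distrib_left mult_ac)
  finally show ?case using insert by simp
qed

lemma stage_exp_u1:
  "rg_stage_exp \<rho>0 (\<lambda>a0 y0 a1 a2. u1 y0 a1 a2) \<alpha>0 s \<alpha>2 = rg_u1_stage \<rho>0 u1 \<alpha>0 s \<alpha>2"
  by (simp add: rg_stage_exp_def rg_u1_stage_def)

lemma stage_exp_u0:
  "rg_dist \<alpha>2 \<Longrightarrow> rg_stage_exp \<rho>0 (\<lambda>a0 y0 a1 a2. u0 a0 a1) \<alpha>0 s \<alpha>2 = (\<Sum>a0\<in>UNIV. \<alpha>0 a0 * rg_u0_s1 \<rho>0 u0 s a0)"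
  by (simp add: rg_stage_exp_def rg_u0_s1_def sum_distrib_right[symmetric] rg_dist_def)

lemma stage_exp_u2:
  "rg_stage_exp \<rho>0 (\<lambda>a0 y0 a1 a2. u2 y0 a1 a2) \<alpha>0 s \<alpha>2 = (\<Sum>a2\<in>UNIV. \<alpha>2 a2 * rg_u2_s1 \<rho>0 u2 \<alpha>0 s a2)"
proof -
  have e1: "\<And>y0. (\<Sum>a1\<in>UNIV. s y0 a1 * (\<Sum>a2\<in>UNIV. \<alpha>2 a2 * u2 y0 a1 a2)) = (\<Sum>a2\<in>UNIV. \<alpha>2 a2 * (\<Sum>a1\<in>UNIV. s y0 a1 * u2 y0 a1 a2))"
    by (rule sum_mult_sum_swap)
  have e2: "\<And>a0. (\<Sum>y0\<in>UNIV. \<rho>0 a0 y0 * (\<Sum>a2\<in>UNIV. \<alpha>2 a2 * (\<Sum>a1\<in>UNIV. s y0 a1 * u2 y0 a1 a2))) =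
     (\<Sum>a2\<in>UNIV. \<alpha>2 a2 * (\<Sum>y0\<in>UNIV. \<rho>0 a0 y0 * (\<Sum>a1\<in>UNIV. s y0 a1 * u2 y0 a1 a2)))"
    by (rule sum_mult_sum_swap)
  have e3: "(\<Sum>a0\<in>UNIV. \<alpha>0 a0 * (\<Sum>a2\<in>UNIV. \<alpha>2 a2 * (\<Sum>y0\<in>UNIV. \<rho>0 a0 y0 * (\<Sum>a1\<in>UNIV. s y0 a1 * u2 y0 a1 a2)))) =
     (\<Sum>a2\<in>UNIV. \<alpha>2 a2 * (\<Sum>a0\<in>UNIV. \<alpha>0 a0 * (\<Sum>y0\<in>UNIV. \<rho>0 a0 y0 * (\<Sum>a1\<in>UNIV. s y0 a1 * u2 y0 a1 a2))))"
    by (rule sum_mult_sum_swap)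
  show ?thesis unfolding rg_stage_exp_def rg_u2_s1_def by (simp only: e1 e2 e3)
qed

definition rg_pub_behav where
  "rg_pub_behav \<rho>0 \<rho>1 \<sigma>0 \<tau> \<sigma>2 T p = (\<lambda>y0 a1. \<Sum>h\<in>{h. length h = T}.
      (if map rg_pub h = p then rg_hist_prob \<rho>0 \<rho>1 \<sigma>0 \<tau> \<sigma>2 h else 0) * \<tau> (map rg_priv h) y0 a1)"

definition rg_pub_prob where
  "rg_pub_prob \<rho>0 \<rho>1 \<sigma>0 \<tau> \<sigma>2 T p = (\<Sum>h\<in>{h. length h = T}.
      (if map rg_pub h = p then rg_hist_prob \<rho>0 \<rho>1 \<sigma>0 \<tau> \<sigma>2 h else 0))"

context rg_signals begin

lemma exp_stage_by_pub:
  "rg_exp_stage \<rho>0 \<rho>1 \<sigma>0 \<tau> \<sigma>2 T (\<lambda>(a0, y0, a1, a2, y1). G a0 y0 a1 a2) =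
   (\<Sum>p\<in>{p. length p = T}. rg_stage_exp \<rho>0 G (\<sigma>0 p) (rg_pub_behav \<rho>0 \<rho>1 \<sigma>0 \<tau> \<sigma>2 T p) (\<sigma>2 p))"
proof -
  have "rg_exp_stage \<rho>0 \<rho>1 \<sigma>0 \<tau> \<sigma>2 T (\<lambda>(a0, y0, a1, a2, y1). G a0 y0 a1 a2) =
     (\<Sum>h\<in>{h. length h = T}. rg_hist_prob \<rho>0 \<rho>1 \<sigma>0 \<tau> \<sigma>2 h *
        rg_stage_exp \<rho>0 G (\<sigma>0 (map rg_pub h)) (\<tau> (map rg_priv h)) (\<sigma>2 (map rg_pub h)))"
    unfolding exp_stage_snoc sum_step_prob_stage rg_stage_exp_def by (rule refl)
  also have "\<dots> = (\<Sum>p\<in>{p. length p = T}. \<Sum>h\<in>{h. length h = T}. if map rg_pub h = p then rg_hist_prob \<rho>0 \<rho>1 \<sigma>0 \<tau> \<sigma>2 h *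
        rg_stage_exp \<rho>0 G (\<sigma>0 (map rg_pub h)) (\<tau> (map rg_priv h)) (\<sigma>2 (map rg_pub h)) else 0)"
    by (rule sum_group_by_pub)
  also have "\<dots> = (\<Sum>p\<in>{p. length p = T}. \<Sum>h\<in>{h. length h = T}.
        (if map rg_pub h = p then rg_hist_prob \<rho>0 \<rho>1 \<sigma>0 \<tau> \<sigma>2 h else 0) * rg_stage_exp \<rho>0 G (\<sigma>0 p) (\<tau> (map rg_priv h)) (\<sigma>2 p))"
    by (intro sum.cong refl) auto
  also have "\<dots> = (\<Sum>p\<in>{p. length p = T}. rg_stage_exp \<rho>0 G (\<sigma>0 p) (rg_pub_behav \<rho>0 \<rho>1 \<sigma>0 \<tau> \<sigma>2 T p) (\<sigma>2 p))"
    unfolding rg_pub_behav_def by (intro sum.cong refl) (simp add: stage_exp_sum finite_list_length)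
  finally show ?thesis .
qed

lemma pub_behav_nonneg: "rg_valid_profile \<sigma>0 \<tau> \<sigma>2 \<Longrightarrow> 0 \<le> rg_pub_behav \<rho>0 \<rho>1 \<sigma>0 \<tau> \<sigma>2 T p y0 a1"
  unfolding rg_pub_behav_def by (intro sum_nonneg mult_nonneg_nonneg) (auto simp: hist_prob_nonneg rg_valid_profile_nonneg)

lemma pub_prob_nonneg: "rg_valid_profile \<sigma>0 \<tau> \<sigma>2 \<Longrightarrow> 0 \<le> rg_pub_prob \<rho>0 \<rho>1 \<sigma>0 \<tau> \<sigma>2 T p"
  unfolding rg_pub_prob_def by (intro sum_nonneg) (auto simp: hist_prob_nonneg)

lemma sum_pub_behav:
  "rg_valid_profile \<sigma>0 \<tau> \<sigma>2 \<Longrightarrow> (\<Sum>a1\<in>UNIV. rg_pub_behav \<rho>0 \<rho>1 \<sigma>0 \<tau> \<sigma>2 T p y0 a1) = rg_pub_prob \<rho>0 \<rho>1 \<sigma>0 \<tau> \<sigma>2 T p"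
proof -
  assume v: "rg_valid_profile \<sigma>0 \<tau> \<sigma>2"
  define c where "c = (\<lambda>h. if map rg_pub h = p then rg_hist_prob \<rho>0 \<rho>1 \<sigma>0 \<tau> \<sigma>2 h else 0)"
  have "(\<Sum>a1\<in>UNIV. \<Sum>h\<in>{h. length h = T}. c h * \<tau> (map rg_priv h) y0 a1) =
      (\<Sum>h\<in>{h. length h = T}. \<Sum>a1\<in>UNIV. c h * \<tau> (map rg_priv h) y0 a1)"
    by (rule sum.swap)
  also have "\<dots> = (\<Sum>h\<in>{h. length h = T}. c h * (\<Sum>a1\<in>UNIV. \<tau> (map rg_priv h) y0 a1))"
    by (simp add: sum_distrib_left)
  also have "\<dots> = (\<Sum>h\<in>{h. length h = T}. c h)"
    using rg_dist_sum[OF rg_valid_profileD(2)[OF v]] by simp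
  finally show ?thesis unfolding rg_pub_behav_def rg_pub_prob_def c_def .
qed

lemma sum_pub_prob_eq_1:
  "rg_valid_profile \<sigma>0 \<tau> \<sigma>2 \<Longrightarrow> (\<Sum>p\<in>{p. length p = T}. rg_pub_prob \<rho>0 \<rho>1 \<sigma>0 \<tau> \<sigma>2 T p) = 1"
  unfolding rg_pub_prob_def
  using sum_group_by_pub[where T=T and F="rg_hist_prob \<rho>0 \<rho>1 \<sigma>0 \<tau> \<sigma>2", symmetric]
    sum_hist_prob_eq_1[of \<sigma>0 \<tau> \<sigma>2 T]
  by (simp add: finite_list_length)

lemma pub_behav_pos_witness:
  assumes v: "rg_valid_profile \<sigma>0 \<tau> \<sigma>2" and pos: "0 < rg_pub_behav \<rho>0 \<rho>1 \<sigma>0 \<tau> \<sigma>2 T p y0 a1"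
  shows "\<exists>h. length h = T \<and> map rg_pub h = p \<and> 0 < rg_hist_prob \<rho>0 \<rho>1 \<sigma>0 \<tau> \<sigma>2 h \<and> 0 < \<tau> (map rg_priv h) y0 a1"
proof (rule ccontr)
  assume "\<not> ?thesis"
  then have "\<And>h. h \<in> {h. length h = T} \<Longrightarrow>
     (if map rg_pub h = p then rg_hist_prob \<rho>0 \<rho>1 \<sigma>0 \<tau> \<sigma>2 h else 0) * \<tau> (map rg_priv h) y0 a1 \<le> 0"
    using hist_prob_nonneg[OF v] rg_valid_profile_nonneg(2)[OF v] by (force simp: mult_le_0_iff not_less)
  then have "rg_pub_behav \<rho>0 \<rho>1 \<sigma>0 \<tau> \<sigma>2 T p y0 a1 \<le> 0" unfolding rg_pub_behav_def by (rule sum_nonpos)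
  with pos show False by simp
qed

definition rg_cont_value where
  "rg_cont_value u1 \<delta> \<sigma>0 \<sigma>1 \<sigma>2 q a1 k y0' = (\<Sum>a2\<in>UNIV. \<sigma>2 q a2 * (\<Sum>y1\<in>UNIV. \<rho>1 a1 a2 y1 *
      rg_U1 \<rho>0 \<rho>1 u1 \<delta> (rg_after (q @ [y1]) \<sigma>0) (rg_after (k @ [(y0', a1, y1)]) \<sigma>1) (rg_after (q @ [y1]) \<sigma>2)))"

lemma swap_value_split:
  "rg_swap_value u1 \<delta> \<sigma>0 \<sigma>1 \<sigma>2 q y0 a1 k y0' =
   (1 - \<delta>) * rg_u1_at u1 (\<sigma>2 q) y0 a1 + \<delta> * rg_cont_value u1 \<delta> \<sigma>0 \<sigma>1 \<sigma>2 q a1 k y0'"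
proof -
  have "\<And>a2. (\<Sum>y1\<in>UNIV. \<rho>1 a1 a2 y1 * ((1 - \<delta>) * u1 y0 a1 a2)) = (1 - \<delta>) * u1 y0 a1 a2"
    by (simp add: sum_distrib_right[symmetric])
  then show ?thesis
    unfolding rg_swap_value_def rg_cont_value_def rg_u1_at_def
    by (simp add: distrib_left sum.distrib sum_distrib_left mult_ac)
qed

lemma pub_behav_cyc_mono:
  assumes v: "rg_valid_profile \<sigma>0 \<sigma>1 \<sigma>2" and d: "0 < \<delta>" "\<delta> < 1"
    and opt: "\<And>\<sigma>1'. rg_valid1 \<sigma>1' \<Longrightarrow> rg_U1 \<rho>0 \<rho>1 u1 \<delta> \<sigma>0 \<sigma>1' \<sigma>2 \<le> rg_U1 \<rho>0 \<rho>1 u1 \<delta> \<sigma>0 \<sigma>1 \<sigma>2"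
    and full: "\<And>a0 y0. 0 < \<rho>0 a0 y0"
  shows "rg_cyc_mono (rg_u1_at u1 (\<sigma>2 p)) (rg_supp1 (rg_pub_behav \<rho>0 \<rho>1 \<sigma>0 \<sigma>1 \<sigma>2 T p))"
  unfolding rg_cyc_mono_def
proof (intro allI impI)
  fix N :: nat and x :: "nat \<Rightarrow> 'y0" and y :: "nat \<Rightarrow> 'a1"
  assume a: "1 \<le> N \<and> (\<forall>i<N. (x i, y i) \<in> rg_supp1 (rg_pub_behav \<rho>0 \<rho>1 \<sigma>0 \<sigma>1 \<sigma>2 T p))"
  have "\<forall>i. \<exists>h. i < N \<longrightarrow> length h = T \<and> map rg_pub h = p \<and> 0 < rg_hist_prob \<rho>0 \<rho>1 \<sigma>0 \<sigma>1 \<sigma>2 h \<and> 0 < \<sigma>1 (map rg_priv h) (x i) (y i)"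
    using a pub_behav_pos_witness[OF v] by (auto simp: rg_supp1_def)
  then obtain H where H: "\<And>i. i < N \<Longrightarrow> length (H i) = T \<and> map rg_pub (H i) = p \<and>
      0 < rg_hist_prob \<rho>0 \<rho>1 \<sigma>0 \<sigma>1 \<sigma>2 (H i) \<and> 0 < \<sigma>1 (map rg_priv (H i)) (x i) (y i)"
    by metis
  define \<pi> where "\<pi> = (\<lambda>i. map rg_priv (H i))"
  have pp: "rg_pubs (\<pi> i) = p" if "i < N" for i using H[OF that] by (simp add: \<pi>_def map_pub_eq_pubs_priv[symmetric])
  define ub where "ub = rg_u1_at u1 (\<sigma>2 p)"
  define K where "K = (\<lambda>i. rg_cont_value u1 \<delta> \<sigma>0 \<sigma>1 \<sigma>2 p (y i) (\<pi> i) (x i))"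
  \<comment> \<open>at \<open>\<pi> i\<close>, deviate to the action and continuation used at \<open>\<pi> j\<close>; the continuation
    values \<open>K\<close> then cancel around the cycle\<close>
  have step: "(1 - \<delta>) * ub (x i) (y (Suc i mod N)) + \<delta> * K (Suc i mod N) \<le> (1 - \<delta>) * ub (x i) (y i) + \<delta> * K i"
    if i: "i < N" for i
  proof -
    define j where "j = Suc i mod N"
    have j: "j < N" using a by (simp add: j_def)
    have ic: "\<And>a' \<pi>' x'. rg_swap_value u1 \<delta> \<sigma>0 \<sigma>1 \<sigma>2 p (x i) a' \<pi>' x' \<le>
        (\<Sum>a1\<in>UNIV. \<sigma>1 (\<pi> i) (x i) a1 * rg_swap_value u1 \<delta> \<sigma>0 \<sigma>1 \<sigma>2 p (x i) a1 (\<pi> i) (x i))"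
      using swap_value_le_equilibrium[OF v d opt full, of "H i" "\<pi> i"] H[OF i] pp[OF i] by (simp add: \<pi>_def)
    have a2: "(\<Sum>a1\<in>UNIV. \<sigma>1 (\<pi> i) (x i) a1 * rg_swap_value u1 \<delta> \<sigma>0 \<sigma>1 \<sigma>2 p (x i) a1 (\<pi> i) (x i)) \<le>
        rg_swap_value u1 \<delta> \<sigma>0 \<sigma>1 \<sigma>2 p (x i) (y i) (\<pi> i) (x i)"
      by (rule rg_dist_avg_le_support[OF rg_valid_profileD(2)[OF v] ic]) (use H[OF i] in \<open>simp add: \<pi>_def\<close>)
    have "rg_swap_value u1 \<delta> \<sigma>0 \<sigma>1 \<sigma>2 p (x i) (y j) (\<pi> j) (x j) \<le> rg_swap_value u1 \<delta> \<sigma>0 \<sigma>1 \<sigma>2 p (x i) (y i) (\<pi> i) (x i)"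
      by (rule order.trans[OF ic a2])
    then show ?thesis by (simp add: swap_value_split ub_def K_def j_def)
  qed
  have "(\<Sum>i<N. (1 - \<delta>) * ub (x i) (y (Suc i mod N)) + \<delta> * K (Suc i mod N)) \<le> (\<Sum>i<N. (1 - \<delta>) * ub (x i) (y i) + \<delta> * K i)"
    by (rule sum_mono) (use step in auto)
  moreover have "(\<Sum>i<N. K (Suc i mod N)) = (\<Sum>i<N. K i)" using a by (intro sum_rotate_mod) auto
  ultimately have "(1 - \<delta>) * (\<Sum>i<N. ub (x i) (y (Suc i mod N))) \<le> (1 - \<delta>) * (\<Sum>i<N. ub (x i) (y i))"
    by (simp add: sum.distrib sum_distrib_left[symmetric])
  then show "(\<Sum>i<N. rg_u1_at u1 (\<sigma>2 p) (x i) (y (Suc i mod N))) \<le> (\<Sum>i<N. rg_u1_at u1 (\<sigma>2 p) (x i) (y i))"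
    using d by (simp add: ub_def)
qed

end

section \<open>Beliefs of the short-lived players\<close>

lemma rg_valid1_type_strat:
  assumes "rg_prior \<mu>" "rg_valid1 \<sigma>1" "\<mu> \<omega> \<noteq> 0"
  shows "rg_valid1 (rg_type_strat \<sigma>1 \<omega>)"
proof (cases \<omega>)
  case None then show ?thesis using assms by (simp add: rg_type_strat_def)
next
  case (Some s1)
  then have "rg_stage1 s1" using assms by (simp add: rg_prior_def)
  then show ?thesis using Some by (simp add: rg_type_strat_def rg_valid1_def rg_stage1_def)
qed

lemma rg_prior_summable: "rg_prior \<mu> \<Longrightarrow> \<mu> summable_on UNIV"
  by (auto simp: rg_prior_def summable_on_def)

lemma rg_prior_infsum: "rg_prior \<mu> \<Longrightarrow> infsum \<mu> UNIV = 1"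
  by (auto simp: rg_prior_def infsumI)

lemma rg_prior_summable_mult:
  assumes "rg_prior \<mu>" "\<And>\<omega>. \<mu> \<omega> \<noteq> 0 \<Longrightarrow> 0 \<le> g \<omega> \<and> g \<omega> \<le> 1"
  shows "(\<lambda>\<omega>. \<mu> \<omega> * g \<omega>) summable_on UNIV"
proof (rule summable_on_comparison_test[OF rg_prior_summable[OF assms(1)]])
  fix \<omega>
  have m: "0 \<le> \<mu> \<omega>" using assms(1) by (simp add: rg_prior_def)
  show "\<mu> \<omega> * g \<omega> \<le> \<mu> \<omega>"
    using assms(2)[of \<omega>] m by (cases "\<mu> \<omega> = 0") (auto intro: mult_left_le)
  show "0 \<le> \<mu> \<omega> * g \<omega>"
    using assms(2)[of \<omega>] m by (cases "\<mu> \<omega> = 0") auto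
qed

lemma rg_prior_le1: "rg_prior \<mu> \<Longrightarrow> \<mu> x \<le> 1"
proof -
  assume pr: "rg_prior \<mu>"
  have "(\<Sum>\<omega>\<in>{x}. \<mu> \<omega>) \<le> infsum \<mu> UNIV"
    by (rule finite_sum_le_infsum[OF rg_prior_summable[OF pr]]) (use pr in \<open>auto simp: rg_prior_def\<close>)
  then show ?thesis using rg_prior_infsum[OF pr] by simp
qed

definition rg_pairing :: "('y0::finite \<Rightarrow> 'a1::finite \<Rightarrow> real) \<Rightarrow> ('y0 \<Rightarrow> 'a1 \<Rightarrow> real) \<Rightarrow> real" where
  "rg_pairing W s = (\<Sum>y0\<in>UNIV. \<Sum>a1\<in>UNIV. s y0 a1 * W y0 a1)"

lemma has_sum_pairing:
  fixes N :: "'w \<Rightarrow> 'y0::finite \<Rightarrow> 'a1::finite \<Rightarrow> real"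
  assumes "\<And>y0 a1. ((\<lambda>\<omega>. \<mu> \<omega> * N \<omega> y0 a1) has_sum M y0 a1) A"
  shows "((\<lambda>\<omega>. \<mu> \<omega> * rg_pairing W (N \<omega>)) has_sum rg_pairing W M) A"
proof -
  have eq: "(\<lambda>\<omega>. \<mu> \<omega> * (\<Sum>y0\<in>UNIV. \<Sum>a1\<in>UNIV. N \<omega> y0 a1 * W y0 a1)) = (\<lambda>\<omega>. \<Sum>y0\<in>UNIV. \<Sum>a1\<in>UNIV. (\<mu> \<omega> * N \<omega> y0 a1) * W y0 a1)"
    by (simp add: sum_distrib_left mult_ac)
  show ?thesis unfolding rg_pairing_def eq
    by (intro has_sum_sum has_sum_cmult_left assms) simp_all
qed

lemma stage_exp_eq_pairing:
  "rg_stage_exp \<rho>0 G \<alpha>0 s \<alpha>2 = rg_pairing (\<lambda>y0 a1. \<Sum>a0\<in>UNIV. \<alpha>0 a0 * \<rho>0 a0 y0 * (\<Sum>a2\<in>UNIV. \<alpha>2 a2 * G a0 y0 a1 a2)) s"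
proof -
  have "rg_stage_exp \<rho>0 G \<alpha>0 s \<alpha>2 = (\<Sum>a0\<in>UNIV. \<Sum>y0\<in>UNIV. \<Sum>a1\<in>UNIV. s y0 a1 * (\<alpha>0 a0 * \<rho>0 a0 y0 * (\<Sum>a2\<in>UNIV. \<alpha>2 a2 * G a0 y0 a1 a2)))"
    by (simp add: rg_stage_exp_def sum_distrib_left mult_ac)
  also have "\<dots> = (\<Sum>y0\<in>UNIV. \<Sum>a0\<in>UNIV. \<Sum>a1\<in>UNIV. s y0 a1 * (\<alpha>0 a0 * \<rho>0 a0 y0 * (\<Sum>a2\<in>UNIV. \<alpha>2 a2 * G a0 y0 a1 a2)))"
    by (rule sum.swap)
  also have "\<dots> = (\<Sum>y0\<in>UNIV. \<Sum>a1\<in>UNIV. \<Sum>a0\<in>UNIV. s y0 a1 * (\<alpha>0 a0 * \<rho>0 a0 y0 * (\<Sum>a2\<in>UNIV. \<alpha>2 a2 * G a0 y0 a1 a2)))"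
    by (rule sum.cong[OF refl]) (rule sum.swap)
  also have "\<dots> = rg_pairing (\<lambda>y0 a1. \<Sum>a0\<in>UNIV. \<alpha>0 a0 * \<rho>0 a0 y0 * (\<Sum>a2\<in>UNIV. \<alpha>2 a2 * G a0 y0 a1 a2)) s"
    by (simp add: rg_pairing_def sum_distrib_left)
  finally show ?thesis .
qed

context rg_signals begin

lemma rg_hist_prob_cong:
  assumes "\<And>q. length q < length h \<Longrightarrow> \<sigma>0' q = \<sigma>0 q" "\<And>q. length q < length h \<Longrightarrow> \<sigma>2' q = \<sigma>2 q"
  shows "rg_hist_prob \<rho>0 \<rho>1 \<sigma>0' \<tau> \<sigma>2' h = rg_hist_prob \<rho>0 \<rho>1 \<sigma>0 \<tau> \<sigma>2 h"
  unfolding rg_hist_prob_eq_prod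
proof (rule prod.cong[OF refl])
  fix i assume "i \<in> {..<length h}"
  then have l: "length (map rg_pub (take i h)) < length h" by simp
  show "rg_step_prob \<rho>0 \<rho>1 \<sigma>0' \<tau> \<sigma>2' (take i h) (h ! i) = rg_step_prob \<rho>0 \<rho>1 \<sigma>0 \<tau> \<sigma>2 (take i h) (h ! i)"
    unfolding rg_step_prob_def assms(1)[OF l] assms(2)[OF l] by (rule refl)
qed

lemma pub_behav_cong:
  assumes "\<And>q. length q < T \<Longrightarrow> \<sigma>0' q = \<sigma>0 q" "\<And>q. length q < T \<Longrightarrow> \<sigma>2' q = \<sigma>2 q"
  shows "rg_pub_behav \<rho>0 \<rho>1 \<sigma>0' \<tau> \<sigma>2' T p = rg_pub_behav \<rho>0 \<rho>1 \<sigma>0 \<tau> \<sigma>2 T p"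
  unfolding rg_pub_behav_def
proof (intro ext sum.cong refl)
  fix y0 a1 and h :: "('a0 \<times> 'y0 \<times> 'a1 \<times> 'a2 \<times> 'y1) list" assume "h \<in> {h. length h = T}"
  then have "rg_hist_prob \<rho>0 \<rho>1 \<sigma>0' \<tau> \<sigma>2' h = rg_hist_prob \<rho>0 \<rho>1 \<sigma>0 \<tau> \<sigma>2 h"
    by (intro rg_hist_prob_cong) (auto intro: assms)
  then show "(if map rg_pub h = p then rg_hist_prob \<rho>0 \<rho>1 \<sigma>0' \<tau> \<sigma>2' h else 0) * \<tau> (map rg_priv h) y0 a1 =
    (if map rg_pub h = p then rg_hist_prob \<rho>0 \<rho>1 \<sigma>0 \<tau> \<sigma>2 h else 0) * \<tau> (map rg_priv h) y0 a1" by simp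
qed

lemma pub_prob_le1: "rg_valid_profile \<sigma>0 \<tau> \<sigma>2 \<Longrightarrow> rg_pub_prob \<rho>0 \<rho>1 \<sigma>0 \<tau> \<sigma>2 T p \<le> 1"
proof -
  assume v: "rg_valid_profile \<sigma>0 \<tau> \<sigma>2"
  have "rg_pub_prob \<rho>0 \<rho>1 \<sigma>0 \<tau> \<sigma>2 T p \<le> (\<Sum>h\<in>{h. length h = T}. rg_hist_prob \<rho>0 \<rho>1 \<sigma>0 \<tau> \<sigma>2 h)"
    unfolding rg_pub_prob_def by (rule sum_mono) (simp add: hist_prob_nonneg[OF v])
  then show ?thesis using sum_hist_prob_eq_1[OF v] by simp
qed

lemma pub_behav_le_pub_prob:
  "rg_valid_profile \<sigma>0 \<tau> \<sigma>2 \<Longrightarrow> rg_pub_behav \<rho>0 \<rho>1 \<sigma>0 \<tau> \<sigma>2 T p y0 a1 \<le> rg_pub_prob \<rho>0 \<rho>1 \<sigma>0 \<tau> \<sigma>2 T p"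
proof -
  assume v: "rg_valid_profile \<sigma>0 \<tau> \<sigma>2"
  have "rg_pub_behav \<rho>0 \<rho>1 \<sigma>0 \<tau> \<sigma>2 T p y0 a1 \<le> (\<Sum>a\<in>UNIV. rg_pub_behav \<rho>0 \<rho>1 \<sigma>0 \<tau> \<sigma>2 T p y0 a)"
    by (rule member_le_sum) (auto simp: pub_behav_nonneg[OF v])
  then show ?thesis using sum_pub_behav[OF v] by simp
qed

definition rg_mix_behav where
  "rg_mix_behav \<mu> \<sigma>0 \<sigma>1 \<sigma>2 T p = (\<lambda>y0 a1. \<Sum>\<^sub>\<infinity>\<omega>. \<mu> \<omega> * rg_pub_behav \<rho>0 \<rho>1 \<sigma>0 (rg_type_strat \<sigma>1 \<omega>) \<sigma>2 T p y0 a1)"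

definition rg_mix_prob where
  "rg_mix_prob \<mu> \<sigma>0 \<sigma>1 \<sigma>2 T p = (\<Sum>\<^sub>\<infinity>\<omega>. \<mu> \<omega> * rg_pub_prob \<rho>0 \<rho>1 \<sigma>0 (rg_type_strat \<sigma>1 \<omega>) \<sigma>2 T p)"

lemma valid_profile_type_strat:
  assumes "rg_prior \<mu>" "rg_valid_profile \<sigma>0 \<sigma>1 \<sigma>2" "\<mu> \<omega> \<noteq> 0"
  shows "rg_valid_profile \<sigma>0 (rg_type_strat \<sigma>1 \<omega>) \<sigma>2"
  using assms rg_valid1_type_strat[of \<mu> \<sigma>1 \<omega>] by (simp add: rg_valid_profile_def)

lemma pub_behav_summable:
  assumes "rg_prior \<mu>" "rg_valid_profile \<sigma>0 \<sigma>1 \<sigma>2"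
  shows "(\<lambda>\<omega>. \<mu> \<omega> * rg_pub_behav \<rho>0 \<rho>1 \<sigma>0 (rg_type_strat \<sigma>1 \<omega>) \<sigma>2 T p y0 a1) summable_on UNIV"
proof (rule rg_prior_summable_mult[OF assms(1)])
  fix \<omega> assume "\<mu> \<omega> \<noteq> 0"
  then have v': "rg_valid_profile \<sigma>0 (rg_type_strat \<sigma>1 \<omega>) \<sigma>2" by (rule valid_profile_type_strat[OF assms])
  show "0 \<le> rg_pub_behav \<rho>0 \<rho>1 \<sigma>0 (rg_type_strat \<sigma>1 \<omega>) \<sigma>2 T p y0 a1 \<and> rg_pub_behav \<rho>0 \<rho>1 \<sigma>0 (rg_type_strat \<sigma>1 \<omega>) \<sigma>2 T p y0 a1 \<le> 1"
    using pub_behav_nonneg[OF v'] pub_behav_le_pub_prob[OF v'] pub_prob_le1[OF v'] by (meson order.trans)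
qed

lemma pub_prob_summable:
  assumes "rg_prior \<mu>" "rg_valid_profile \<sigma>0 \<sigma>1 \<sigma>2"
  shows "(\<lambda>\<omega>. \<mu> \<omega> * rg_pub_prob \<rho>0 \<rho>1 \<sigma>0 (rg_type_strat \<sigma>1 \<omega>) \<sigma>2 T p) summable_on UNIV"
proof (rule rg_prior_summable_mult[OF assms(1)])
  fix \<omega> assume "\<mu> \<omega> \<noteq> 0"
  then have v': "rg_valid_profile \<sigma>0 (rg_type_strat \<sigma>1 \<omega>) \<sigma>2" by (rule valid_profile_type_strat[OF assms])
  show "0 \<le> rg_pub_prob \<rho>0 \<rho>1 \<sigma>0 (rg_type_strat \<sigma>1 \<omega>) \<sigma>2 T p \<and> rg_pub_prob \<rho>0 \<rho>1 \<sigma>0 (rg_type_strat \<sigma>1 \<omega>) \<sigma>2 T p \<le> 1"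
    using pub_prob_nonneg[OF v'] pub_prob_le1[OF v'] by simp
qed

lemma mix_behav_has_sum:
  assumes "rg_prior \<mu>" "rg_valid_profile \<sigma>0 \<sigma>1 \<sigma>2"
  shows "((\<lambda>\<omega>. \<mu> \<omega> * rg_pub_behav \<rho>0 \<rho>1 \<sigma>0 (rg_type_strat \<sigma>1 \<omega>) \<sigma>2 T p y0 a1) has_sum rg_mix_behav \<mu> \<sigma>0 \<sigma>1 \<sigma>2 T p y0 a1) UNIV"
  unfolding rg_mix_behav_def using pub_behav_summable[OF assms] by simp

lemma exante_by_pub:
  assumes pr: "rg_prior \<mu>" and v: "rg_valid_profile \<sigma>0 \<sigma>1 \<sigma>2"
    and ag: "\<And>q. length q < T \<Longrightarrow> \<sigma>0' q = \<sigma>0 q" "\<And>q. length q < T \<Longrightarrow> \<sigma>2' q = \<sigma>2 q"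
  shows "rg_exante \<rho>0 \<rho>1 \<mu> \<sigma>0' \<sigma>1 \<sigma>2' T (\<lambda>(a0, y0, a1, a2, y1). G a0 y0 a1 a2) =
    (\<Sum>p\<in>{p. length p = T}. rg_stage_exp \<rho>0 G (\<sigma>0' p) (rg_mix_behav \<mu> \<sigma>0 \<sigma>1 \<sigma>2 T p) (\<sigma>2' p))"
proof -
  define W where "W = (\<lambda>p y0 a1. \<Sum>a0\<in>UNIV. \<sigma>0' p a0 * \<rho>0 a0 y0 * (\<Sum>a2\<in>UNIV. \<sigma>2' p a2 * G a0 y0 a1 a2))"
  have eq: "(\<lambda>\<omega>. \<mu> \<omega> * rg_exp_stage \<rho>0 \<rho>1 \<sigma>0' (rg_type_strat \<sigma>1 \<omega>) \<sigma>2' T (\<lambda>(a0, y0, a1, a2, y1). G a0 y0 a1 a2))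
     = (\<lambda>\<omega>. \<Sum>p\<in>{p. length p = T}. \<mu> \<omega> * rg_pairing (W p) (rg_pub_behav \<rho>0 \<rho>1 \<sigma>0 (rg_type_strat \<sigma>1 \<omega>) \<sigma>2 T p))"
    by (simp add: exp_stage_by_pub pub_behav_cong[OF ag] stage_exp_eq_pairing W_def sum_distrib_left)
  have "((\<lambda>\<omega>. \<Sum>p\<in>{p. length p = T}. \<mu> \<omega> * rg_pairing (W p) (rg_pub_behav \<rho>0 \<rho>1 \<sigma>0 (rg_type_strat \<sigma>1 \<omega>) \<sigma>2 T p)) has_sum
        (\<Sum>p\<in>{p. length p = T}. rg_pairing (W p) (rg_mix_behav \<mu> \<sigma>0 \<sigma>1 \<sigma>2 T p))) UNIV"
    by (intro has_sum_sum has_sum_pairing mix_behav_has_sum[OF pr v]) (simp add: finite_list_length)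
  then have "rg_exante \<rho>0 \<rho>1 \<mu> \<sigma>0' \<sigma>1 \<sigma>2' T (\<lambda>(a0, y0, a1, a2, y1). G a0 y0 a1 a2) =
      (\<Sum>p\<in>{p. length p = T}. rg_pairing (W p) (rg_mix_behav \<mu> \<sigma>0 \<sigma>1 \<sigma>2 T p))"
    unfolding rg_exante_def eq by (rule infsumI)
  then show ?thesis by (simp add: stage_exp_eq_pairing W_def)
qed

end

lemma rg_B_scale:
  assumes "0 < c"
  shows "rg_B \<rho>0 u0 u2 (\<lambda>y a. c * s y a) = rg_B \<rho>0 u0 u2 s"
proof -
  have e0: "rg_u0_s1 \<rho>0 u0 (\<lambda>y a. c * s y a) a0 = c * rg_u0_s1 \<rho>0 u0 s a0" for a0
    by (simp add: rg_u0_s1_def sum_distrib_left mult_ac)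
  have e2: "rg_u2_s1 \<rho>0 u2 \<alpha>0 (\<lambda>y a. c * s y a) a2 = c * rg_u2_s1 \<rho>0 u2 \<alpha>0 s a2" for \<alpha>0 a2
    by (simp add: rg_u2_s1_def sum_distrib_left mult_ac)
  show ?thesis unfolding rg_B_def e0 e2 using assms by simp
qed

lemma rg_u1_stage_scale: "rg_u1_stage \<rho>0 u1 \<alpha>0 (\<lambda>y a. c * s y a) \<alpha>2 = c * rg_u1_stage \<rho>0 u1 \<alpha>0 s \<alpha>2"
  by (simp add: rg_u1_stage_def sum_distrib_left mult_ac)

lemma pure_deviation_le:
  fixes V :: "'q \<Rightarrow> 'a::finite \<Rightarrow> real"
  assumes "finite Q" "p \<in> Q"
    and "(\<Sum>q\<in>Q. \<Sum>a\<in>UNIV. (\<sigma>(p := (\<lambda>a. if a = b then 1 else 0))) q a * V q a) \<le>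
         (\<Sum>q\<in>Q. \<Sum>a\<in>UNIV. \<sigma> q a * V q a)"
  shows "V p b \<le> (\<Sum>a\<in>UNIV. \<sigma> p a * V p a)"
proof -
  have "(\<Sum>a\<in>UNIV. (\<sigma>(p := (\<lambda>a. if a = b then 1 else 0))) p a * V p a) - (\<Sum>a\<in>UNIV. \<sigma> p a * V p a) \<le> 0"
    using assms by (subst sum_diff_update[symmetric, where S=Q]) auto
  then show ?thesis by (simp add: sum_point_mass)
qed

lemma best_response_on_support:
  fixes w V :: "'a::finite \<Rightarrow> real"
  assumes "rg_dist w" "\<And>b. V b \<le> (\<Sum>a\<in>UNIV. w a * V a)" "0 < w a"
  shows "V a' \<le> V a"
  using assms rg_dist_avg_le_support[OF assms] by (meson order.trans)

context rg_signals begin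

lemma exante_u0_by_pub:
  assumes "rg_prior \<mu>" "rg_valid_profile \<sigma>0 \<sigma>1 \<sigma>2" "\<And>q. length q < T \<Longrightarrow> \<sigma>0' q = \<sigma>0 q"
  shows "rg_exante \<rho>0 \<rho>1 \<mu> \<sigma>0' \<sigma>1 \<sigma>2 T (\<lambda>(a0, y0, a1, a2, y1). u0 a0 a1) =
    (\<Sum>q\<in>{q. length q = T}. \<Sum>a\<in>UNIV. \<sigma>0' q a * rg_u0_s1 \<rho>0 u0 (rg_mix_behav \<mu> \<sigma>0 \<sigma>1 \<sigma>2 T q) a)"
proof -
  have "rg_exante \<rho>0 \<rho>1 \<mu> \<sigma>0' \<sigma>1 \<sigma>2 T (\<lambda>(a0, y0, a1, a2, y1). u0 a0 a1) =
    (\<Sum>q\<in>{q. length q = T}. rg_stage_exp \<rho>0 (\<lambda>a0 y0 a1 a2. u0 a0 a1) (\<sigma>0' q) (rg_mix_behav \<mu> \<sigma>0 \<sigma>1 \<sigma>2 T q) (\<sigma>2 q))"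
    by (rule exante_by_pub[OF assms(1,2)]) (use assms(3) in auto)
  then show ?thesis by (simp add: stage_exp_u0[OF rg_valid_profileD(3)[OF assms(2)]])
qed

lemma exante_u2_by_pub:
  assumes "rg_prior \<mu>" "rg_valid_profile \<sigma>0 \<sigma>1 \<sigma>2" "\<And>q. length q < T \<Longrightarrow> \<sigma>2' q = \<sigma>2 q"
  shows "rg_exante \<rho>0 \<rho>1 \<mu> \<sigma>0 \<sigma>1 \<sigma>2' T (\<lambda>(a0, y0, a1, a2, y1). u2 y0 a1 a2) =
    (\<Sum>q\<in>{q. length q = T}. \<Sum>a\<in>UNIV. \<sigma>2' q a * rg_u2_s1 \<rho>0 u2 (\<sigma>0 q) (rg_mix_behav \<mu> \<sigma>0 \<sigma>1 \<sigma>2 T q) a)"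
proof -
  have "rg_exante \<rho>0 \<rho>1 \<mu> \<sigma>0 \<sigma>1 \<sigma>2' T (\<lambda>(a0, y0, a1, a2, y1). u2 y0 a1 a2) =
    (\<Sum>q\<in>{q. length q = T}. rg_stage_exp \<rho>0 (\<lambda>a0 y0 a1 a2. u2 y0 a1 a2) (\<sigma>0 q) (rg_mix_behav \<mu> \<sigma>0 \<sigma>1 \<sigma>2 T q) (\<sigma>2' q))"
    by (rule exante_by_pub[OF assms(1,2)]) (use assms(3) in auto)
  then show ?thesis by (simp add: stage_exp_u2)
qed

lemma equilibrium_in_rg_B:
  assumes pr: "rg_prior \<mu>" and ne: "rg_NE \<rho>0 \<rho>1 u0 u1 u2 \<mu> \<delta> \<sigma>0 \<sigma>1 \<sigma>2" and lp: "length p = T"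
  shows "(\<sigma>0 p, \<sigma>2 p) \<in> rg_B \<rho>0 u0 u2 (rg_mix_behav \<mu> \<sigma>0 \<sigma>1 \<sigma>2 T p)"
proof -
  have v: "rg_valid_profile \<sigma>0 \<sigma>1 \<sigma>2" using ne by (rule rg_NE_valid_profile)
  let ?N = "rg_mix_behav \<mu> \<sigma>0 \<sigma>1 \<sigma>2 T"
  have fin: "finite {q::'y1 list. length q = T}" and p: "p \<in> {q. length q = T}"
    using lp by (simp_all add: finite_list_length)
  have br0: "rg_u0_s1 \<rho>0 u0 (?N p) b \<le> (\<Sum>a\<in>UNIV. \<sigma>0 p a * rg_u0_s1 \<rho>0 u0 (?N p) a)" for b
  proof -
    define \<sigma>0' where "\<sigma>0' = \<sigma>0(p := (\<lambda>a. if a = b then 1 else 0))"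
    have "rg_valid_pub \<sigma>0'" "\<forall>q. length q \<noteq> T \<longrightarrow> \<sigma>0' q = \<sigma>0 q"
      using v lp by (auto simp: \<sigma>0'_def rg_valid_pub_def rg_valid_profile_def rg_dist_point)
    then have "rg_exante \<rho>0 \<rho>1 \<mu> \<sigma>0' \<sigma>1 \<sigma>2 T (\<lambda>(a0, y0, a1, a2, y1). u0 a0 a1)
        \<le> rg_exante \<rho>0 \<rho>1 \<mu> \<sigma>0 \<sigma>1 \<sigma>2 T (\<lambda>(a0, y0, a1, a2, y1). u0 a0 a1)"
      using ne unfolding rg_NE_def by blast
    moreover have "\<And>q. length q < T \<Longrightarrow> \<sigma>0' q = \<sigma>0 q" "\<And>q. length q < T \<Longrightarrow> \<sigma>0 q = \<sigma>0 q"
      using lp by (auto simp: \<sigma>0'_def)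
    ultimately show ?thesis
      unfolding \<sigma>0'_def by (intro pure_deviation_le[OF fin p]) (simp only: exante_u0_by_pub[OF pr v])
  qed
  have br2: "rg_u2_s1 \<rho>0 u2 (\<sigma>0 p) (?N p) b \<le> (\<Sum>a\<in>UNIV. \<sigma>2 p a * rg_u2_s1 \<rho>0 u2 (\<sigma>0 p) (?N p) a)" for b
  proof -
    define \<sigma>2' where "\<sigma>2' = \<sigma>2(p := (\<lambda>a. if a = b then 1 else 0))"
    have "rg_valid_pub \<sigma>2'" "\<forall>q. length q \<noteq> T \<longrightarrow> \<sigma>2' q = \<sigma>2 q"
      using v lp by (auto simp: \<sigma>2'_def rg_valid_pub_def rg_valid_profile_def rg_dist_point)
    then have "rg_exante \<rho>0 \<rho>1 \<mu> \<sigma>0 \<sigma>1 \<sigma>2' T (\<lambda>(a0, y0, a1, a2, y1). u2 y0 a1 a2)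
        \<le> rg_exante \<rho>0 \<rho>1 \<mu> \<sigma>0 \<sigma>1 \<sigma>2 T (\<lambda>(a0, y0, a1, a2, y1). u2 y0 a1 a2)"
      using ne unfolding rg_NE_def by blast
    moreover have "\<And>q. length q < T \<Longrightarrow> \<sigma>2' q = \<sigma>2 q" "\<And>q. length q < T \<Longrightarrow> \<sigma>2 q = \<sigma>2 q"
      using lp by (auto simp: \<sigma>2'_def)
    ultimately show ?thesis
      unfolding \<sigma>2'_def by (intro pure_deviation_le[OF fin p]) (simp only: exante_u2_by_pub[OF pr v])
  qed
  show ?thesis
    using rg_valid_profileD(1,3)[OF v] best_response_on_support[OF _ br0] best_response_on_support[OF _ br2]
    by (simp add: rg_B_def)
qed

end

context rg_signals begin

lemma mix_terms_nonneg:
  assumes pr: "rg_prior \<mu>" and v: "rg_valid_profile \<sigma>0 \<sigma>1 \<sigma>2"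
  shows "0 \<le> \<mu> \<omega> * rg_pub_behav \<rho>0 \<rho>1 \<sigma>0 (rg_type_strat \<sigma>1 \<omega>) \<sigma>2 T p y0 a1"
    "0 \<le> \<mu> \<omega> * rg_pub_prob \<rho>0 \<rho>1 \<sigma>0 (rg_type_strat \<sigma>1 \<omega>) \<sigma>2 T p"
proof -
  have m: "0 \<le> \<mu> \<omega>" using pr by (simp add: rg_prior_def)
  show "0 \<le> \<mu> \<omega> * rg_pub_behav \<rho>0 \<rho>1 \<sigma>0 (rg_type_strat \<sigma>1 \<omega>) \<sigma>2 T p y0 a1"
  proof (cases "\<mu> \<omega> = 0")
    case False
    then show ?thesis using m pub_behav_nonneg[OF valid_profile_type_strat[OF pr v False]] by simp
  qed simp
  show "0 \<le> \<mu> \<omega> * rg_pub_prob \<rho>0 \<rho>1 \<sigma>0 (rg_type_strat \<sigma>1 \<omega>) \<sigma>2 T p"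
  proof (cases "\<mu> \<omega> = 0")
    case False
    then show ?thesis using m pub_prob_nonneg[OF valid_profile_type_strat[OF pr v False]] by simp
  qed simp
qed

lemma mix_behav_ge:
  assumes pr: "rg_prior \<mu>" and v: "rg_valid_profile \<sigma>0 \<sigma>1 \<sigma>2"
  shows "\<mu> None * rg_pub_behav \<rho>0 \<rho>1 \<sigma>0 \<sigma>1 \<sigma>2 T p y0 a1 \<le> rg_mix_behav \<mu> \<sigma>0 \<sigma>1 \<sigma>2 T p y0 a1"
proof -
  have "(\<Sum>\<omega>\<in>{None}. \<mu> \<omega> * rg_pub_behav \<rho>0 \<rho>1 \<sigma>0 (rg_type_strat \<sigma>1 \<omega>) \<sigma>2 T p y0 a1) \<le> rg_mix_behav \<mu> \<sigma>0 \<sigma>1 \<sigma>2 T p y0 a1"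
    unfolding rg_mix_behav_def by (rule finite_sum_le_infsum[OF pub_behav_summable[OF pr v]]) (auto intro: mix_terms_nonneg[OF pr v])
  then show ?thesis by (simp add: rg_type_strat_def)
qed

lemma mix_prob_ge:
  assumes pr: "rg_prior \<mu>" and v: "rg_valid_profile \<sigma>0 \<sigma>1 \<sigma>2"
  shows "\<mu> None * rg_pub_prob \<rho>0 \<rho>1 \<sigma>0 \<sigma>1 \<sigma>2 T p \<le> rg_mix_prob \<mu> \<sigma>0 \<sigma>1 \<sigma>2 T p"
proof -
  have "(\<Sum>\<omega>\<in>{None}. \<mu> \<omega> * rg_pub_prob \<rho>0 \<rho>1 \<sigma>0 (rg_type_strat \<sigma>1 \<omega>) \<sigma>2 T p) \<le> rg_mix_prob \<mu> \<sigma>0 \<sigma>1 \<sigma>2 T p"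
    unfolding rg_mix_prob_def by (rule finite_sum_le_infsum[OF pub_prob_summable[OF pr v]]) (auto intro: mix_terms_nonneg[OF pr v])
  then show ?thesis by (simp add: rg_type_strat_def)
qed

lemma sum_mix_behav:
  assumes pr: "rg_prior \<mu>" and v: "rg_valid_profile \<sigma>0 \<sigma>1 \<sigma>2"
  shows "(\<Sum>a1\<in>UNIV. rg_mix_behav \<mu> \<sigma>0 \<sigma>1 \<sigma>2 T p y0 a1) = rg_mix_prob \<mu> \<sigma>0 \<sigma>1 \<sigma>2 T p"
proof -
  have hs: "((\<lambda>\<omega>. \<Sum>a1\<in>UNIV. \<mu> \<omega> * rg_pub_behav \<rho>0 \<rho>1 \<sigma>0 (rg_type_strat \<sigma>1 \<omega>) \<sigma>2 T p y0 a1) has_sum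
      (\<Sum>a1\<in>UNIV. rg_mix_behav \<mu> \<sigma>0 \<sigma>1 \<sigma>2 T p y0 a1)) UNIV"
    by (intro has_sum_sum mix_behav_has_sum[OF pr v]) simp
  have eq: "(\<lambda>\<omega>. \<Sum>a1\<in>UNIV. \<mu> \<omega> * rg_pub_behav \<rho>0 \<rho>1 \<sigma>0 (rg_type_strat \<sigma>1 \<omega>) \<sigma>2 T p y0 a1) =
     (\<lambda>\<omega>. \<mu> \<omega> * rg_pub_prob \<rho>0 \<rho>1 \<sigma>0 (rg_type_strat \<sigma>1 \<omega>) \<sigma>2 T p)"
  proof
    fix \<omega>
    show "(\<Sum>a1\<in>UNIV. \<mu> \<omega> * rg_pub_behav \<rho>0 \<rho>1 \<sigma>0 (rg_type_strat \<sigma>1 \<omega>) \<sigma>2 T p y0 a1) =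
     \<mu> \<omega> * rg_pub_prob \<rho>0 \<rho>1 \<sigma>0 (rg_type_strat \<sigma>1 \<omega>) \<sigma>2 T p"
    proof (cases "\<mu> \<omega> = 0")
      case False
      then show ?thesis using sum_pub_behav[OF valid_profile_type_strat[OF pr v False]] by (simp add: sum_distrib_left[symmetric])
    qed simp
  qed
  show ?thesis using hs unfolding eq rg_mix_prob_def by (simp add: infsumI)
qed

lemma sum_mix_prob_le:
  assumes pr: "rg_prior \<mu>" and v: "rg_valid_profile \<sigma>0 \<sigma>1 \<sigma>2" and Bad: "Bad \<subseteq> {p. length p = T}"
  shows "(\<Sum>p\<in>Bad. rg_mix_prob \<mu> \<sigma>0 \<sigma>1 \<sigma>2 T p) \<le> \<mu> None * (\<Sum>p\<in>Bad. rg_pub_prob \<rho>0 \<rho>1 \<sigma>0 \<sigma>1 \<sigma>2 T p) + (1 - \<mu> None)"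
proof -
  have fB: "finite Bad" using Bad finite_list_length by (rule finite_subset)
  define X where "X = (\<Sum>p\<in>Bad. rg_pub_prob \<rho>0 \<rho>1 \<sigma>0 \<sigma>1 \<sigma>2 T p)"
  define Z where "Z = (\<lambda>\<omega>. \<Sum>p\<in>Bad. \<mu> \<omega> * rg_pub_prob \<rho>0 \<rho>1 \<sigma>0 (rg_type_strat \<sigma>1 \<omega>) \<sigma>2 T p)"
  have hZ: "(Z has_sum (\<Sum>p\<in>Bad. rg_mix_prob \<mu> \<sigma>0 \<sigma>1 \<sigma>2 T p)) UNIV"
    unfolding Z_def rg_mix_prob_def using pub_prob_summable[OF pr v] by (intro has_sum_sum fB) simp
  define g where "g = (\<lambda>\<omega>. \<mu> \<omega> + (if \<omega> = None then \<mu> None * X - \<mu> None else 0))"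
  have hmu: "(\<mu> has_sum 1) UNIV" using pr by (simp add: rg_prior_def)
  have hsing: "((\<lambda>\<omega>. if \<omega> = None then \<mu> None * X - \<mu> None else 0) has_sum (\<mu> None * X - \<mu> None)) UNIV"
    by (rule has_sum_finite_neutralI[of "{None}"]) auto
  have hg: "(g has_sum (1 + (\<mu> None * X - \<mu> None))) UNIV"
    unfolding g_def by (rule has_sum_add[OF hmu hsing])
  have le: "Z \<omega> \<le> g \<omega>" for \<omega>
  proof (cases "\<omega> = None")
    case True
    have "Z \<omega> = \<mu> None * X" using True by (simp add: Z_def X_def rg_type_strat_def sum_distrib_left)
    moreover have "g \<omega> = \<mu> None * X" using True by (simp add: g_def)
    ultimately show ?thesis by simp
  next
    case False
    have m: "0 \<le> \<mu> \<omega>" using pr by (simp add: rg_prior_def)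
    have "Z \<omega> \<le> \<mu> \<omega>"
    proof (cases "\<mu> \<omega> = 0")
      case True then show ?thesis by (simp add: Z_def)
    next
      case nz: False
      have v': "rg_valid_profile \<sigma>0 (rg_type_strat \<sigma>1 \<omega>) \<sigma>2" by (rule valid_profile_type_strat[OF pr v nz])
      have "(\<Sum>p\<in>Bad. rg_pub_prob \<rho>0 \<rho>1 \<sigma>0 (rg_type_strat \<sigma>1 \<omega>) \<sigma>2 T p) \<le>
          (\<Sum>p\<in>{p. length p = T}. rg_pub_prob \<rho>0 \<rho>1 \<sigma>0 (rg_type_strat \<sigma>1 \<omega>) \<sigma>2 T p)"
        by (rule sum_mono2[OF finite_list_length Bad]) (simp add: pub_prob_nonneg[OF v'])
      also have "\<dots> = 1" by (rule sum_pub_prob_eq_1[OF v'])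
      finally have "(\<Sum>p\<in>Bad. rg_pub_prob \<rho>0 \<rho>1 \<sigma>0 (rg_type_strat \<sigma>1 \<omega>) \<sigma>2 T p) \<le> 1" .
      then show ?thesis using m by (simp add: Z_def sum_distrib_left[symmetric] mult_left_le)
    qed
    moreover have "g \<omega> = \<mu> \<omega>" unfolding g_def by (subst if_not_P[OF False]) simp
    ultimately show ?thesis by simp
  qed
  have "(\<Sum>p\<in>Bad. rg_mix_prob \<mu> \<sigma>0 \<sigma>1 \<sigma>2 T p) \<le> 1 + (\<mu> None * X - \<mu> None)"
    by (rule has_sum_mono[OF hZ hg]) (use le in auto)
  then show ?thesis by (simp add: X_def)
qed

end

section \<open>Robustness of the cyclically monotone value\<close>

lemma rg_vCM_ge:
  assumes "rg_stage1 s" "rg_cm_strategy u1 s" "(\<alpha>0, \<alpha>2) \<in> rg_B \<rho>0 u0 u2 s"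
  shows "ereal (rg_u1_stage \<rho>0 u1 \<alpha>0 s \<alpha>2) \<le> rg_vCM \<rho>0 u0 u1 u2"
proof -
  have "ereal (rg_u1_stage \<rho>0 u1 \<alpha>0 s \<alpha>2) \<le> (SUP p \<in> rg_B \<rho>0 u0 u2 s. ereal (rg_u1_stage \<rho>0 u1 (fst p) s (snd p)))"
    by (rule SUP_upper2[where i="(\<alpha>0, \<alpha>2)"]) (use assms(3) in auto)
  also have "\<dots> \<le> rg_vCM \<rho>0 u0 u1 u2"
    unfolding rg_vCM_def by (rule SUP_upper) (use assms(1,2) in simp)
  finally show ?thesis .
qed

lemma abs_rg_u1_stage_le:
  assumes "rg_dist \<alpha>0" "rg_stage1 s" "rg_dist \<alpha>2" "\<forall>a0. rg_dist (\<rho>0 a0)"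
  shows "\<bar>rg_u1_stage \<rho>0 u1 \<alpha>0 s \<alpha>2\<bar> \<le> rg_u1_max u1"
  unfolding rg_u1_stage_def
  using assms
  by (intro rg_dist_avg_abs_le) (auto simp: rg_stage1_def intro!: rg_dist_avg_abs_le rg_u1_max_bound)

lemma rg_cm_strategy_const:
  fixes u1 :: "'y0 \<Rightarrow> 'a1 \<Rightarrow> 'a2::finite \<Rightarrow> real"
  shows "rg_cm_strategy u1 (\<lambda>(_::'y0) a. if a = c then 1 else 0)"
  unfolding rg_cm_strategy_def rg_cyc_mono_def
proof (intro allI impI)
  fix \<alpha>2 N and x :: "nat \<Rightarrow> 'y0" and y :: "nat \<Rightarrow> 'a1"
  assume "1 \<le> N \<and> (\<forall>i<N. (x i, y i) \<in> rg_supp1 (\<lambda>(_::'y0) a. if a = c then 1 else (0::real)))"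
  then have "\<And>i. i < N \<Longrightarrow> y i = c" "\<And>i. i < N \<Longrightarrow> y (Suc i mod N) = c"
    by (auto simp: rg_supp1_def split: if_splits)
  then show "(\<Sum>i<N. rg_u1_at u1 \<alpha>2 (x i) (y (Suc i mod N))) \<le> (\<Sum>i<N. rg_u1_at u1 \<alpha>2 (x i) (y i))"
    by simp
qed

lemma rg_B_nonempty:
  fixes \<rho>0 :: "'a0::finite \<Rightarrow> 'y0::finite \<Rightarrow> real" and u0 :: "'a0 \<Rightarrow> 'a1::finite \<Rightarrow> real"
    and u2 :: "'y0 \<Rightarrow> 'a1 \<Rightarrow> 'a2::finite \<Rightarrow> real"
  shows "\<exists>\<alpha>0 \<alpha>2. (\<alpha>0, \<alpha>2) \<in> rg_B \<rho>0 u0 u2 s"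
proof -
  obtain b0 where b0: "\<forall>b. rg_u0_s1 \<rho>0 u0 s b \<le> rg_u0_s1 \<rho>0 u0 s b0" using finite_ex_max by blast
  define \<alpha>0 :: "'a0 \<Rightarrow> real" where "\<alpha>0 = (\<lambda>a. if a = b0 then 1 else 0)"
  obtain b2 where "\<forall>b. rg_u2_s1 \<rho>0 u2 \<alpha>0 s b \<le> rg_u2_s1 \<rho>0 u2 \<alpha>0 s b2" using finite_ex_max by blast
  then have "(\<alpha>0, \<lambda>a. if a = b2 then 1 else 0) \<in> rg_B \<rho>0 u0 u2 s"
    using b0 by (auto simp: rg_B_def \<alpha>0_def rg_dist_point split: if_splits)
  then show ?thesis by blast
qed

lemma rg_vCM_finite:
  fixes \<rho>0 :: "'a0::finite \<Rightarrow> 'y0::finite \<Rightarrow> real" and u0 :: "'a0 \<Rightarrow> 'a1::finite \<Rightarrow> real"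
    and u1 u2 :: "'y0 \<Rightarrow> 'a1 \<Rightarrow> 'a2::finite \<Rightarrow> real"
  assumes r0: "\<forall>a0. rg_dist (\<rho>0 a0)"
  shows "\<exists>v. rg_vCM \<rho>0 u0 u1 u2 = ereal v"
proof -
  define s :: "'y0 \<Rightarrow> 'a1 \<Rightarrow> real" where "s = (\<lambda>y a. if a = undefined then 1 else 0)"
  have st: "rg_stage1 s" by (simp add: s_def rg_stage1_def rg_dist_point)
  obtain \<alpha>0 \<alpha>2 where B: "(\<alpha>0, \<alpha>2) \<in> rg_B \<rho>0 u0 u2 s" using rg_B_nonempty by blast
  have "rg_cm_strategy u1 s" unfolding s_def by (rule rg_cm_strategy_const)
  then have "ereal (rg_u1_stage \<rho>0 u1 \<alpha>0 s \<alpha>2) \<le> rg_vCM \<rho>0 u0 u1 u2"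
    by (rule rg_vCM_ge[OF st _ B])
  moreover have "rg_vCM \<rho>0 u0 u1 u2 \<le> ereal (rg_u1_max u1)"
    unfolding rg_vCM_def
  proof (intro SUP_least)
    fix s' p assume "s' \<in> {s1. rg_stage1 s1 \<and> rg_cm_strategy u1 s1}" "p \<in> rg_B \<rho>0 u0 u2 s'"
    then have "\<bar>rg_u1_stage \<rho>0 u1 (fst p) s' (snd p)\<bar> \<le> rg_u1_max u1"
      by (intro abs_rg_u1_stage_le r0) (auto simp: rg_B_def)
    then show "ereal (rg_u1_stage \<rho>0 u1 (fst p) s' (snd p)) \<le> ereal (rg_u1_max u1)" by simp
  qed
  ultimately show ?thesis by (cases "rg_vCM \<rho>0 u0 u1 u2") auto
qed

lemma finite_fun_convergent_subseq:
  fixes F :: "nat \<Rightarrow> 'i::finite \<Rightarrow> real"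
  assumes "\<And>n i. \<bar>F n i\<bar> \<le> B"
  obtains l r where "strict_mono r" "\<And>i. (\<lambda>n. F (r n) i) \<longlonglongrightarrow> l i"
proof -
  have "\<forall>d\<subseteq>UNIV. \<exists>l::'i \<Rightarrow> real. \<exists>r::nat\<Rightarrow>nat.
    strict_mono r \<and> (\<forall>e>0. eventually (\<lambda>n. \<forall>i\<in>d. dist (F (r n) i) (l i) < e) sequentially)"
  proof (rule compact_lemma_general[where proj="\<lambda>x k. x k" and unproj="\<lambda>g. g"])
    show "bounded ((\<lambda>x. x k) ` range F)" for k
      unfolding bounded_iff using assms by auto
  qed auto
  then obtain l r where r: "strict_mono r"
    and lr: "\<forall>e>0. eventually (\<lambda>n. \<forall>i\<in>UNIV. dist (F (r n) i) (l i) < e) sequentially"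
    by blast
  have "(\<lambda>n. F (r n) i) \<longlonglongrightarrow> l i" for i
    unfolding tendsto_iff using lr by (blast intro: eventually_mono)
  with r show ?thesis by (rule that)
qed

lemma stage_profile_convergent_subseq:
  fixes S :: "nat \<Rightarrow> 'y0::finite \<Rightarrow> 'a1::finite \<Rightarrow> real"
    and A0 :: "nat \<Rightarrow> 'a0::finite \<Rightarrow> real" and A2 :: "nat \<Rightarrow> 'a2::finite \<Rightarrow> real"
  assumes dS: "\<And>n y. rg_dist (S n y)" and dA0: "\<And>n. rg_dist (A0 n)" and dA2: "\<And>n. rg_dist (A2 n)"
  obtains r s \<beta>0 \<beta>2 where "strict_mono r" "\<And>y a. (\<lambda>n. S (r n) y a) \<longlonglongrightarrow> s y a"
    "\<And>a. (\<lambda>n. A0 (r n) a) \<longlonglongrightarrow> \<beta>0 a" "\<And>a. (\<lambda>n. A2 (r n) a) \<longlonglongrightarrow> \<beta>2 a"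
proof -
  define F :: "nat \<Rightarrow> ('y0 \<times> 'a1) + 'a0 + 'a2 \<Rightarrow> real" where
    "F = (\<lambda>n i. case i of Inl ya \<Rightarrow> S n (fst ya) (snd ya) | Inr (Inl a0) \<Rightarrow> A0 n a0 | Inr (Inr a2) \<Rightarrow> A2 n a2)"
  have Fb: "\<bar>F n i\<bar> \<le> 1" for n i
    using rg_dist_le1[OF dS] rg_dist_le1[OF dA0] rg_dist_le1[OF dA2]
      rg_dist_nonneg[OF dS] rg_dist_nonneg[OF dA0] rg_dist_nonneg[OF dA2]
    by (auto simp: F_def split: sum.split)
  obtain l r where r: "strict_mono r" and lim: "\<And>i. (\<lambda>n. F (r n) i) \<longlonglongrightarrow> l i"
    using finite_fun_convergent_subseq[of F 1, OF Fb] by blast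
  have "(\<lambda>n. S (r n) y a) \<longlonglongrightarrow> l (Inl (y, a))" for y a using lim[of "Inl (y, a)"] by (simp add: F_def)
  moreover have "(\<lambda>n. A0 (r n) a) \<longlonglongrightarrow> l (Inr (Inl a))" for a using lim[of "Inr (Inl a)"] by (simp add: F_def)
  moreover have "(\<lambda>n. A2 (r n) a) \<longlonglongrightarrow> l (Inr (Inr a))" for a using lim[of "Inr (Inr a)"] by (simp add: F_def)
  ultimately show thesis using r by (intro that) auto
qed

lemma rg_cm_strategy_limit:
  assumes cm: "\<And>n. rg_cm_strategy u1 (S n)" and lim: "\<And>y a. (\<lambda>n. S n y a) \<longlonglongrightarrow> (s y a :: real)"
  shows "rg_cm_strategy u1 (s :: 'y0::finite \<Rightarrow> 'a1::finite \<Rightarrow> real)"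
proof -
  \<comment> \<open>the support can only shrink in the limit\<close>
  have "eventually (\<lambda>n. \<forall>ya. 0 < s (fst ya) (snd ya) \<longrightarrow> 0 < S n (fst ya) (snd ya)) sequentially"
  proof (rule eventually_all_finite)
    fix ya :: "'y0 \<times> 'a1"
    show "eventually (\<lambda>n. 0 < s (fst ya) (snd ya) \<longrightarrow> 0 < S n (fst ya) (snd ya)) sequentially"
      using order_tendstoD(1)[OF lim] by (cases "0 < s (fst ya) (snd ya)") (auto elim: eventually_mono)
  qed
  then obtain n0 where "rg_supp1 s \<subseteq> rg_supp1 (S n0)"
    by (auto simp: eventually_sequentially rg_supp1_def)
  then show ?thesis
    using cm[of n0] rg_cyc_mono_subset unfolding rg_cm_strategy_def by blast
qed

lemma rg_B_limit:
  fixes \<rho>0 :: "'a0::finite \<Rightarrow> 'y0::finite \<Rightarrow> real"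
  assumes B: "\<And>n. (A0 n, A2 n) \<in> rg_B \<rho>0 u0 u2 (T n)"
    and limT: "\<And>y a. (\<lambda>n. T n y a) \<longlonglongrightarrow> (s y a :: real)"
    and lim0: "\<And>a. (\<lambda>n. A0 n a) \<longlonglongrightarrow> \<beta>0 a" and lim2: "\<And>a. (\<lambda>n. A2 n a) \<longlonglongrightarrow> \<beta>2 a"
  shows "(\<beta>0, \<beta>2) \<in> rg_B \<rho>0 u0 u2 s"
proof -
  have lim_u0: "(\<lambda>n. rg_u0_s1 \<rho>0 u0 (T n) a) \<longlonglongrightarrow> rg_u0_s1 \<rho>0 u0 s a" for a
    unfolding rg_u0_s1_def by (intro tendsto_intros limT)
  have lim_u2: "(\<lambda>n. rg_u2_s1 \<rho>0 u2 (A0 n) (T n) a) \<longlonglongrightarrow> rg_u2_s1 \<rho>0 u2 \<beta>0 s a" for a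
    unfolding rg_u2_s1_def by (intro tendsto_intros limT lim0)
  have "rg_dist \<beta>0" "rg_dist \<beta>2"
    using B by (auto intro!: rg_dist_limit[OF _ lim0] rg_dist_limit[OF _ lim2] simp: rg_B_def)
  moreover have "rg_u0_s1 \<rho>0 u0 s a0' \<le> rg_u0_s1 \<rho>0 u0 s a0" if "0 < \<beta>0 a0" for a0 a0'
  proof (rule tendsto_le[OF _ lim_u0 lim_u0])
    show "eventually (\<lambda>n. rg_u0_s1 \<rho>0 u0 (T n) a0' \<le> rg_u0_s1 \<rho>0 u0 (T n) a0) sequentially"
      using order_tendstoD(1)[OF lim0 that] B by (auto elim!: eventually_mono simp: rg_B_def)
  qed simp
  moreover have "rg_u2_s1 \<rho>0 u2 \<beta>0 s a2' \<le> rg_u2_s1 \<rho>0 u2 \<beta>0 s a2" if "0 < \<beta>2 a2" for a2 a2'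
  proof (rule tendsto_le[OF _ lim_u2 lim_u2])
    show "eventually (\<lambda>n. rg_u2_s1 \<rho>0 u2 (A0 n) (T n) a2' \<le> rg_u2_s1 \<rho>0 u2 (A0 n) (T n) a2) sequentially"
      using order_tendstoD(1)[OF lim2 that] B by (auto elim!: eventually_mono simp: rg_B_def)
  qed simp
  ultimately show ?thesis by (simp add: rg_B_def)
qed

definition rg_cm_robust ::
  "('a0::finite \<Rightarrow> 'y0::finite \<Rightarrow> real) \<Rightarrow> ('a0 \<Rightarrow> 'a1::finite \<Rightarrow> real)
   \<Rightarrow> ('y0 \<Rightarrow> 'a1 \<Rightarrow> 'a2::finite \<Rightarrow> real) \<Rightarrow> ('y0 \<Rightarrow> 'a1 \<Rightarrow> 'a2 \<Rightarrow> real) \<Rightarrow> real \<Rightarrow> real \<Rightarrow> bool" where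
  "rg_cm_robust \<rho>0 u0 u1 u2 \<zeta> V \<longleftrightarrow>
     (\<forall>s t \<alpha>0 \<alpha>2. rg_stage1 s \<and> rg_cm_strategy u1 s \<and> (\<forall>y a. \<bar>t y a - s y a\<bar> \<le> \<zeta>) \<and>
        (\<alpha>0, \<alpha>2) \<in> rg_B \<rho>0 u0 u2 t \<longrightarrow> rg_u1_stage \<rho>0 u1 \<alpha>0 s \<alpha>2 < V)"

lemma rg_cm_robustD:
  "rg_cm_robust \<rho>0 u0 u1 u2 \<zeta> V \<Longrightarrow> rg_stage1 s \<Longrightarrow> rg_cm_strategy u1 s \<Longrightarrow>
    \<forall>y a. \<bar>t y a - s y a\<bar> \<le> \<zeta> \<Longrightarrow> (\<alpha>0, \<alpha>2) \<in> rg_B \<rho>0 u0 u2 t \<Longrightarrow> rg_u1_stage \<rho>0 u1 \<alpha>0 s \<alpha>2 < V"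
  unfolding rg_cm_robust_def by blast

lemma rg_cm_robust_mono: "\<zeta>' \<le> \<zeta> \<Longrightarrow> rg_cm_robust \<rho>0 u0 u1 u2 \<zeta> V \<Longrightarrow> rg_cm_robust \<rho>0 u0 u1 u2 \<zeta>' V"
  unfolding rg_cm_robust_def using order.trans by blast

text \<open>A limit of counterexamples along shrinking perturbations would be a cyclically monotone
  strategy with a best response beating \<open>rg_vCM\<close>.\<close>
lemma vCM_robust_bound:
  fixes \<rho>0 :: "'a0::finite \<Rightarrow> 'y0::finite \<Rightarrow> real" and u0 :: "'a0 \<Rightarrow> 'a1::finite \<Rightarrow> real"
    and u1 u2 :: "'y0 \<Rightarrow> 'a1 \<Rightarrow> 'a2::finite \<Rightarrow> real"
  assumes v: "rg_vCM \<rho>0 u0 u1 u2 = ereal v" and eps: "0 < \<epsilon>"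
  shows "\<exists>\<eta>>0. rg_cm_robust \<rho>0 u0 u1 u2 \<eta> (v + \<epsilon>)"
proof (rule ccontr)
  assume "\<not> ?thesis"
  then have "\<not> rg_cm_robust \<rho>0 u0 u1 u2 (1 / real (Suc n)) (v + \<epsilon>)" for n
    by simp
  then have "\<forall>n::nat. \<exists>s t \<alpha>0 \<alpha>2. rg_stage1 s \<and> rg_cm_strategy u1 s \<and>
      (\<forall>y a. \<bar>t y a - s y a\<bar> \<le> 1 / real (Suc n)) \<and> (\<alpha>0, \<alpha>2) \<in> rg_B \<rho>0 u0 u2 t \<and>
      v + \<epsilon> \<le> rg_u1_stage \<rho>0 u1 \<alpha>0 s \<alpha>2"
    unfolding rg_cm_robust_def by (auto simp: not_less)
  then obtain S T A0 A2 where H: "\<And>n. rg_stage1 (S n) \<and> rg_cm_strategy u1 (S n) \<and>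
      (\<forall>y a. \<bar>T n y a - S n y a\<bar> \<le> 1 / real (Suc n)) \<and> (A0 n, A2 n) \<in> rg_B \<rho>0 u0 u2 (T n) \<and>
      v + \<epsilon> \<le> rg_u1_stage \<rho>0 u1 (A0 n) (S n) (A2 n)"
    by metis
  have dS: "rg_dist (S n y)" and dA0: "rg_dist (A0 n)" and dA2: "rg_dist (A2 n)" for n y
    using H[of n] by (simp_all add: rg_stage1_def rg_B_def)
  obtain r s \<beta>0 \<beta>2 where r: "strict_mono r" and limS: "\<And>y a. (\<lambda>n. S (r n) y a) \<longlonglongrightarrow> s y a"
    and limA0: "\<And>a. (\<lambda>n. A0 (r n) a) \<longlonglongrightarrow> \<beta>0 a" and limA2: "\<And>a. (\<lambda>n. A2 (r n) a) \<longlonglongrightarrow> \<beta>2 a"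
    using stage_profile_convergent_subseq[of S A0 A2, OF dS dA0 dA2] by blast
  have limT: "(\<lambda>n. T (r n) y a) \<longlonglongrightarrow> s y a" for y a
  proof -
    have "(\<lambda>n. 1 / real (Suc (r n))) \<longlonglongrightarrow> 0"
      using LIMSEQ_subseq_LIMSEQ[OF LIMSEQ_inverse_real_of_nat r] by (simp add: o_def divide_inverse)
    then have "(\<lambda>n. T (r n) y a - S (r n) y a) \<longlonglongrightarrow> 0"
      by (rule Lim_null_comparison[rotated]) (use H in auto)
    from tendsto_add[OF this limS[of y a]] show ?thesis by simp
  qed
  have "rg_stage1 s"
    unfolding rg_stage1_def using rg_dist_limit[where P="\<lambda>n. S (r n) _", OF dS limS] by blast
  moreover have "rg_cm_strategy u1 s"
    using H by (intro rg_cm_strategy_limit[OF _ limS]) blast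
  moreover have "(\<beta>0, \<beta>2) \<in> rg_B \<rho>0 u0 u2 s"
    using H by (intro rg_B_limit[OF _ limT limA0 limA2]) blast
  ultimately have "rg_u1_stage \<rho>0 u1 \<beta>0 s \<beta>2 \<le> v"
    using rg_vCM_ge v by fastforce
  moreover have "(\<lambda>n. rg_u1_stage \<rho>0 u1 (A0 (r n)) (S (r n)) (A2 (r n))) \<longlonglongrightarrow> rg_u1_stage \<rho>0 u1 \<beta>0 s \<beta>2"
    unfolding rg_u1_stage_def by (intro tendsto_intros limS limA0 limA2)
  then have "v + \<epsilon> \<le> rg_u1_stage \<rho>0 u1 \<beta>0 s \<beta>2"
    by (rule LIMSEQ_le_const) (use H in blast)
  ultimately show False using eps by simp
qed

section \<open>Payoff bound in equilibrium\<close>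

context rg_signals begin

text \<open>Both quotients are only meaningful when the denominator is positive (division by zero gives \<open>0\<close>).\<close>
definition rg_cond_behav where
  "rg_cond_behav \<sigma>0 \<sigma>1 \<sigma>2 T p =
     (\<lambda>y a. rg_pub_behav \<rho>0 \<rho>1 \<sigma>0 \<sigma>1 \<sigma>2 T p y a / rg_pub_prob \<rho>0 \<rho>1 \<sigma>0 \<sigma>1 \<sigma>2 T p)"

definition rg_belief where
  "rg_belief \<mu> \<sigma>0 \<sigma>1 \<sigma>2 T p = (\<lambda>y a. rg_mix_behav \<mu> \<sigma>0 \<sigma>1 \<sigma>2 T p y a / rg_mix_prob \<mu> \<sigma>0 \<sigma>1 \<sigma>2 T p)"

lemma stage1_cond_behav:
  assumes "rg_valid_profile \<sigma>0 \<sigma>1 \<sigma>2" "0 < rg_pub_prob \<rho>0 \<rho>1 \<sigma>0 \<sigma>1 \<sigma>2 T p"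
  shows "rg_stage1 (rg_cond_behav \<sigma>0 \<sigma>1 \<sigma>2 T p)"
  using assms pub_behav_nonneg[OF assms(1)] sum_pub_behav[OF assms(1)]
  by (simp add: rg_stage1_def rg_dist_def rg_cond_behav_def sum_divide_distrib[symmetric])

lemma cm_strategy_cond_behav:
  assumes ne: "rg_NE \<rho>0 \<rho>1 u0 u1 u2 \<mu> \<delta> \<sigma>0 \<sigma>1 \<sigma>2" and d: "0 < \<delta>" "\<delta> < 1"
    and full: "\<And>a0 y0. 0 < \<rho>0 a0 y0" and sep: "rg_cyc_separable u1"
    and pos: "0 < rg_pub_prob \<rho>0 \<rho>1 \<sigma>0 \<sigma>1 \<sigma>2 T p"
  shows "rg_cm_strategy u1 (rg_cond_behav \<sigma>0 \<sigma>1 \<sigma>2 T p)"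
proof -
  have v: "rg_valid_profile \<sigma>0 \<sigma>1 \<sigma>2" using ne by (rule rg_NE_valid_profile)
  have "rg_cyc_mono (rg_u1_at u1 (\<sigma>2 p)) (rg_supp1 (rg_pub_behav \<rho>0 \<rho>1 \<sigma>0 \<sigma>1 \<sigma>2 T p))"
    using ne by (intro pub_behav_cyc_mono[OF v d _ full]) (simp add: rg_NE_def)
  moreover have "rg_supp1 (rg_cond_behav \<sigma>0 \<sigma>1 \<sigma>2 T p) = rg_supp1 (rg_pub_behav \<rho>0 \<rho>1 \<sigma>0 \<sigma>1 \<sigma>2 T p)"
    using pos by (auto simp: rg_supp1_def rg_cond_behav_def zero_less_divide_iff)
  ultimately show ?thesis
    using sep rg_valid_profileD(3)[OF v] unfolding rg_cm_strategy_def rg_cyc_separable_def by metis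
qed

lemma belief_in_rg_B:
  assumes pr: "rg_prior \<mu>" and ne: "rg_NE \<rho>0 \<rho>1 u0 u1 u2 \<mu> \<delta> \<sigma>0 \<sigma>1 \<sigma>2" and lp: "length p = T"
    and pos: "0 < rg_mix_prob \<mu> \<sigma>0 \<sigma>1 \<sigma>2 T p"
  shows "(\<sigma>0 p, \<sigma>2 p) \<in> rg_B \<rho>0 u0 u2 (rg_belief \<mu> \<sigma>0 \<sigma>1 \<sigma>2 T p)"
proof -
  have "rg_mix_behav \<mu> \<sigma>0 \<sigma>1 \<sigma>2 T p = (\<lambda>y a. rg_mix_prob \<mu> \<sigma>0 \<sigma>1 \<sigma>2 T p * rg_belief \<mu> \<sigma>0 \<sigma>1 \<sigma>2 T p y a)"
    using pos by (simp add: rg_belief_def)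
  then show ?thesis using equilibrium_in_rg_B[OF pr ne lp] by (simp add: rg_B_scale[OF pos])
qed

text \<open>The hypothesis \<open>good\<close> says that the rational type has posterior weight at least
  \<open>1 - \<zeta>\<close> at \<open>p\<close>.\<close>
lemma belief_close_cond_behav:
  assumes pr: "rg_prior \<mu>" and v: "rg_valid_profile \<sigma>0 \<sigma>1 \<sigma>2"
    and pos: "0 < rg_pub_prob \<rho>0 \<rho>1 \<sigma>0 \<sigma>1 \<sigma>2 T p"
    and good: "(1 - \<zeta>) * rg_mix_prob \<mu> \<sigma>0 \<sigma>1 \<sigma>2 T p \<le> \<mu> None * rg_pub_prob \<rho>0 \<rho>1 \<sigma>0 \<sigma>1 \<sigma>2 T p"
  shows "\<bar>rg_belief \<mu> \<sigma>0 \<sigma>1 \<sigma>2 T p y a - rg_cond_behav \<sigma>0 \<sigma>1 \<sigma>2 T p y a\<bar> \<le> \<zeta>"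
proof -
  define R where "R = rg_pub_prob \<rho>0 \<rho>1 \<sigma>0 \<sigma>1 \<sigma>2 T p"
  define N where "N = rg_pub_behav \<rho>0 \<rho>1 \<sigma>0 \<sigma>1 \<sigma>2 T p"
  define P where "P = rg_mix_prob \<mu> \<sigma>0 \<sigma>1 \<sigma>2 T p"
  define m where "m = \<mu> None"
  define w where "w = (\<lambda>a. rg_mix_behav \<mu> \<sigma>0 \<sigma>1 \<sigma>2 T p y a - m * N y a)"
  have m0: "0 < m" using pr by (simp add: rg_prior_def m_def)
  have Ppos: "0 < P"
    using mix_prob_ge[OF pr v] m0 pos by (smt (verit) P_def m_def mult_pos_pos)
  have w0: "0 \<le> w a'" for a' using mix_behav_ge[OF pr v] by (simp add: w_def m_def N_def)
  have "(\<Sum>a'\<in>UNIV. w a') = P - m * R"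
    unfolding w_def using sum_pub_behav[OF v]
    by (simp add: sum_subtractf sum_mix_behav[OF pr v] P_def sum_distrib_left[symmetric] N_def R_def)
  then have "w a \<le> P - m * R"
    by (metis UNIV_I finite member_le_sum w0)
  then have "\<bar>(m * N y a + w a) / P - N y a / R\<bar> \<le> \<zeta>"
    using pub_behav_nonneg[OF v] pub_behav_le_pub_prob[OF v] pos w0 m0 good Ppos
    by (intro normalized_dist_close) (auto simp: N_def R_def P_def m_def)
  then show ?thesis by (simp add: rg_belief_def rg_cond_behav_def w_def N_def R_def P_def)
qed

lemma u1_stage_pub_behav_le:
  assumes pr: "rg_prior \<mu>" and ne: "rg_NE \<rho>0 \<rho>1 u0 u1 u2 \<mu> \<delta> \<sigma>0 \<sigma>1 \<sigma>2" and d: "0 < \<delta>" "\<delta> < 1"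
    and full: "\<And>a0 y0. 0 < \<rho>0 a0 y0" and sep: "rg_cyc_separable u1"
    and robust: "rg_cm_robust \<rho>0 u0 u1 u2 \<zeta> V" and lp: "length p = T"
  shows "rg_u1_stage \<rho>0 u1 (\<sigma>0 p) (rg_pub_behav \<rho>0 \<rho>1 \<sigma>0 \<sigma>1 \<sigma>2 T p) (\<sigma>2 p) \<le>
     rg_pub_prob \<rho>0 \<rho>1 \<sigma>0 \<sigma>1 \<sigma>2 T p * V +
     (if \<mu> None * rg_pub_prob \<rho>0 \<rho>1 \<sigma>0 \<sigma>1 \<sigma>2 T p < (1 - \<zeta>) * rg_mix_prob \<mu> \<sigma>0 \<sigma>1 \<sigma>2 T p
      then rg_pub_prob \<rho>0 \<rho>1 \<sigma>0 \<sigma>1 \<sigma>2 T p * (rg_u1_max u1 + \<bar>V\<bar>) else 0)"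
proof -
  have v: "rg_valid_profile \<sigma>0 \<sigma>1 \<sigma>2" using ne by (rule rg_NE_valid_profile)
  define R where "R = rg_pub_prob \<rho>0 \<rho>1 \<sigma>0 \<sigma>1 \<sigma>2 T p"
  define s where "s = rg_cond_behav \<sigma>0 \<sigma>1 \<sigma>2 T p"
  have "0 \<le> R" unfolding R_def by (rule pub_prob_nonneg[OF v])
  then consider "R = 0" | "0 < R" by linarith
  then show ?thesis
  proof cases
    case 1
    then have "rg_pub_behav \<rho>0 \<rho>1 \<sigma>0 \<sigma>1 \<sigma>2 T p = (\<lambda>y a. 0)"
      using pub_behav_nonneg[OF v] pub_behav_le_pub_prob[OF v] by (intro ext) (metis R_def antisym)
    then show ?thesis using 1 by (simp add: rg_u1_stage_def R_def)
  next
    case 2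
    have "rg_pub_behav \<rho>0 \<rho>1 \<sigma>0 \<sigma>1 \<sigma>2 T p = (\<lambda>y a. R * s y a)"
      using 2 by (simp add: s_def R_def rg_cond_behav_def)
    then have scale: "rg_u1_stage \<rho>0 u1 (\<sigma>0 p) (rg_pub_behav \<rho>0 \<rho>1 \<sigma>0 \<sigma>1 \<sigma>2 T p) (\<sigma>2 p) =
        R * rg_u1_stage \<rho>0 u1 (\<sigma>0 p) s (\<sigma>2 p)"
      by (simp add: rg_u1_stage_scale)
    have st: "rg_stage1 s" using stage1_cond_behav[OF v] 2 by (simp add: s_def R_def)
    show ?thesis
    proof (cases "\<mu> None * R < (1 - \<zeta>) * rg_mix_prob \<mu> \<sigma>0 \<sigma>1 \<sigma>2 T p")
      case True
      have "\<bar>rg_u1_stage \<rho>0 u1 (\<sigma>0 p) s (\<sigma>2 p)\<bar> \<le> rg_u1_max u1"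
        by (rule abs_rg_u1_stage_le[OF rg_valid_profileD(1)[OF v] st rg_valid_profileD(3)[OF v] rho0])
      then have "rg_u1_stage \<rho>0 u1 (\<sigma>0 p) s (\<sigma>2 p) \<le> V + (rg_u1_max u1 + \<bar>V\<bar>)"
        by linarith
      with 2 True show ?thesis by (simp add: scale R_def[symmetric] distrib_left[symmetric] mult_left_mono)
    next
      case False
      have "0 < rg_mix_prob \<mu> \<sigma>0 \<sigma>1 \<sigma>2 T p"
        using mix_prob_ge[OF pr v] 2 pr by (smt (verit) R_def mult_pos_pos rg_prior_def)
      then have "rg_u1_stage \<rho>0 u1 (\<sigma>0 p) s (\<sigma>2 p) < V"
        using False 2 cm_strategy_cond_behav[OF ne d full sep] belief_close_cond_behav[OF pr v]
        by (intro rg_cm_robustD[OF robust st _ _ belief_in_rg_B[OF pr ne lp]]) (auto simp: s_def R_def)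
      with 2 False show ?thesis by (simp add: scale R_def[symmetric])
    qed
  qed
qed

text \<open>The rational type rarely reaches public histories at which it has lost posterior weight:
  there the mixture probability exceeds \<open>\<mu> None\<close> times the rational one by the factor
  \<open>1 / (1 - \<zeta>)\<close>, while the mixture puts mass at most \<open>1 - \<mu> None\<close> outside the rational type.\<close>
lemma sum_bad_pub_prob_le:
  assumes pr: "rg_prior \<mu>" and v: "rg_valid_profile \<sigma>0 \<sigma>1 \<sigma>2" and z: "0 < \<zeta>" "\<zeta> \<le> 1"
  shows "(\<Sum>p\<in>{p. length p = T \<and> \<mu> None * rg_pub_prob \<rho>0 \<rho>1 \<sigma>0 \<sigma>1 \<sigma>2 T p < (1 - \<zeta>) * rg_mix_prob \<mu> \<sigma>0 \<sigma>1 \<sigma>2 T p}.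
      rg_pub_prob \<rho>0 \<rho>1 \<sigma>0 \<sigma>1 \<sigma>2 T p) \<le> (1 - \<mu> None) / (\<zeta> * \<mu> None)"
proof -
  define m where "m = \<mu> None"
  define Bad where "Bad = {p. length p = T \<and> m * rg_pub_prob \<rho>0 \<rho>1 \<sigma>0 \<sigma>1 \<sigma>2 T p < (1 - \<zeta>) * rg_mix_prob \<mu> \<sigma>0 \<sigma>1 \<sigma>2 T p}"
  define X where "X = (\<Sum>p\<in>Bad. rg_pub_prob \<rho>0 \<rho>1 \<sigma>0 \<sigma>1 \<sigma>2 T p)"
  have m0: "0 < m" using pr by (simp add: rg_prior_def m_def)
  have m1: "m \<le> 1" unfolding m_def by (rule rg_prior_le1[OF pr])
  have "m * X = (\<Sum>p\<in>Bad. m * rg_pub_prob \<rho>0 \<rho>1 \<sigma>0 \<sigma>1 \<sigma>2 T p)" by (simp add: X_def sum_distrib_left)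
  also have "\<dots> \<le> (\<Sum>p\<in>Bad. (1 - \<zeta>) * rg_mix_prob \<mu> \<sigma>0 \<sigma>1 \<sigma>2 T p)" by (rule sum_mono) (simp add: Bad_def)
  also have "\<dots> = (1 - \<zeta>) * (\<Sum>p\<in>Bad. rg_mix_prob \<mu> \<sigma>0 \<sigma>1 \<sigma>2 T p)" by (simp add: sum_distrib_left)
  also have "\<dots> \<le> (1 - \<zeta>) * (m * X + (1 - m))"
    using sum_mix_prob_le[OF pr v, where Bad=Bad and T=T] z by (intro mult_left_mono) (auto simp: Bad_def X_def m_def)
  finally have "\<zeta> * m * X \<le> (1 - \<zeta>) * (1 - m)" by (simp add: algebra_simps)
  also have "\<dots> \<le> 1 - m" using z m1 by (simp add: algebra_simps)
  finally show ?thesis using z m0 by (simp add: pos_le_divide_eq mult.commute mult.left_commute X_def Bad_def m_def)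
qed

lemma exp_stage_u1_le:
  assumes pr: "rg_prior \<mu>" and ne: "rg_NE \<rho>0 \<rho>1 u0 u1 u2 \<mu> \<delta> \<sigma>0 \<sigma>1 \<sigma>2" and d: "0 < \<delta>" "\<delta> < 1"
    and full: "\<And>a0 y0. 0 < \<rho>0 a0 y0" and sep: "rg_cyc_separable u1"
    and robust: "rg_cm_robust \<rho>0 u0 u1 u2 \<zeta> V" and z: "0 < \<zeta>" "\<zeta> \<le> 1"
  shows "rg_exp_stage \<rho>0 \<rho>1 \<sigma>0 \<sigma>1 \<sigma>2 T (rg_flow1 u1) \<le>
    V + (rg_u1_max u1 + \<bar>V\<bar>) * ((1 - \<mu> None) / (\<zeta> * \<mu> None))"
proof -
  have v: "rg_valid_profile \<sigma>0 \<sigma>1 \<sigma>2" using ne by (rule rg_NE_valid_profile)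
  define C where "C = rg_u1_max u1 + \<bar>V\<bar>"
  define S where "S = {p::'y1 list. length p = T}"
  define R where "R = rg_pub_prob \<rho>0 \<rho>1 \<sigma>0 \<sigma>1 \<sigma>2 T"
  define Bad where "Bad = {p. length p = T \<and> \<mu> None * R p < (1 - \<zeta>) * rg_mix_prob \<mu> \<sigma>0 \<sigma>1 \<sigma>2 T p}"
  have C0: "0 \<le> C" unfolding C_def using order.trans[OF abs_ge_zero rg_u1_max_bound, of u1] by simp
  have BS: "Bad = S \<inter> Bad" and fS: "finite S" by (auto simp: Bad_def S_def finite_list_length)
  have "rg_exp_stage \<rho>0 \<rho>1 \<sigma>0 \<sigma>1 \<sigma>2 T (rg_flow1 u1) =
      (\<Sum>p\<in>S. rg_u1_stage \<rho>0 u1 (\<sigma>0 p) (rg_pub_behav \<rho>0 \<rho>1 \<sigma>0 \<sigma>1 \<sigma>2 T p) (\<sigma>2 p))"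
    using exp_stage_by_pub[of \<sigma>0 \<sigma>1 \<sigma>2 T "\<lambda>a0 y0 a1 a2. u1 y0 a1 a2"]
    by (simp add: rg_flow1_def stage_exp_u1 S_def)
  also have "\<dots> \<le> (\<Sum>p\<in>S. R p * V + (if p \<in> Bad then R p * C else 0))"
  proof (rule sum_mono)
    fix p assume "p \<in> S"
    then show "rg_u1_stage \<rho>0 u1 (\<sigma>0 p) (rg_pub_behav \<rho>0 \<rho>1 \<sigma>0 \<sigma>1 \<sigma>2 T p) (\<sigma>2 p) \<le>
        R p * V + (if p \<in> Bad then R p * C else 0)"
      using u1_stage_pub_behav_le[OF pr ne d full sep robust, of p T]
      by (auto simp: S_def Bad_def R_def C_def split: if_splits)
  qed
  also have "\<dots> = V * (\<Sum>p\<in>S. R p) + C * (\<Sum>p\<in>Bad. R p)"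
  proof -
    have "(\<Sum>p\<in>S. if p \<in> Bad then R p * C else 0) = (\<Sum>p\<in>S \<inter> Bad. R p * C)"
      by (rule sum.inter_restrict[OF fS, symmetric])
    then show ?thesis by (simp add: sum.distrib sum_distrib_left sum_distrib_right BS[symmetric] mult_ac)
  qed
  also have "(\<Sum>p\<in>S. R p) = 1" unfolding S_def R_def by (rule sum_pub_prob_eq_1[OF v])
  also have "C * (\<Sum>p\<in>Bad. R p) \<le> C * ((1 - \<mu> None) / (\<zeta> * \<mu> None))"
    using sum_bad_pub_prob_le[OF pr v z] C0 by (intro mult_left_mono) (simp_all add: Bad_def R_def)
  finally show ?thesis by (simp add: C_def)
qed

lemma U1bar_le:
  assumes pr: "rg_prior \<mu>" and d: "0 < \<delta>" "\<delta> < 1"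
    and full: "\<And>a0 y0. 0 < \<rho>0 a0 y0" and sep: "rg_cyc_separable u1"
    and robust: "rg_cm_robust \<rho>0 u0 u1 u2 \<zeta> V" and z: "0 < \<zeta>" "\<zeta> \<le> 1"
  shows "rg_U1bar \<rho>0 \<rho>1 u0 u1 u2 \<mu> \<delta> \<le>
    ereal (V + (rg_u1_max u1 + \<bar>V\<bar>) * ((1 - \<mu> None) / (\<zeta> * \<mu> None)))"
proof -
  have "rg_U1 \<rho>0 \<rho>1 u1 \<delta> \<sigma>0 \<sigma>1 \<sigma>2 \<le> V + (rg_u1_max u1 + \<bar>V\<bar>) * ((1 - \<mu> None) / (\<zeta> * \<mu> None))"
    if ne: "rg_NE \<rho>0 \<rho>1 u0 u1 u2 \<mu> \<delta> \<sigma>0 \<sigma>1 \<sigma>2" for \<sigma>0 \<sigma>1 \<sigma>2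
    using exp_stage_u1_le[OF pr ne d full sep robust z]
    by (intro U1_le_if_exp_stage_le[OF rg_NE_valid_profile[OF ne] d])
  then show ?thesis
    unfolding rg_U1bar_def by (intro Sup_least) auto
qed

end

lemma ex_small_prior_defect:
  fixes C \<zeta> e :: real
  assumes C: "0 \<le> C" and z: "0 < \<zeta>" and e: "0 < e"
  obtains \<kappa> where "0 < \<kappa>" "\<And>m. 1 - \<kappa> < m \<Longrightarrow> C * ((1 - m) / (\<zeta> * m)) < e"
proof -
  define \<kappa> where "\<kappa> = min (1/2) (e * \<zeta> / (4 * (C + 1)))"
  have "0 < e * \<zeta> / (4 * (C + 1))" using assms by (intro divide_pos_pos mult_pos_pos) auto
  then have "0 < \<kappa>" by (simp add: \<kappa>_def min_def)
  moreover have "C * ((1 - m) / (\<zeta> * m)) < e" if "1 - \<kappa> < m" for m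
  proof -
    from that have m: "1/2 < m" and "1 - m < e * \<zeta> / (4 * (C + 1))"
      by (auto simp: \<kappa>_def)
    moreover have "0 < 4 * (C + 1)" using C by simp
    ultimately have d: "(1 - m) * (4 * (C + 1)) < e * \<zeta>"
      using pos_less_divide_eq by blast
    have "C * (1 - m) < e * (\<zeta> * m)"
    proof (cases "1 - m \<le> 0")
      case True
      then show ?thesis using C z e m by (smt (verit) mult_nonneg_nonpos mult_pos_pos)
    next
      case False
      then have "C * (1 - m) \<le> (1 - m) * (4 * (C + 1)) / 4" using C by (simp add: algebra_simps)
      also have "\<dots> < e * \<zeta> / 4" using d by simp
      also have "\<dots> < e * (\<zeta> * m)" using m e z by (simp add: algebra_simps)
      finally show ?thesis .
    qed
    then show ?thesis using z m by (simp add: pos_divide_less_eq)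
  qed
  ultimately show thesis by (rule that)
qed

theorem proposition5:
  fixes \<rho>0 :: "'a0::finite \<Rightarrow> 'y0::finite \<Rightarrow> real"
    and \<rho>1 :: "'a1::finite \<Rightarrow> 'a2::finite \<Rightarrow> 'y1::finite \<Rightarrow> real"
    and u0 :: "'a0 \<Rightarrow> 'a1 \<Rightarrow> real"
    and u1 u2 :: "'y0 \<Rightarrow> 'a1 \<Rightarrow> 'a2 \<Rightarrow> real"
  assumes rho0_dist: "\<forall>a0. rg_dist (\<rho>0 a0)"
    and rho1_dist: "\<forall>a1 a2. rg_dist (\<rho>1 a1 a2)"
    and full_support0: "\<forall>a0 y0. 0 < \<rho>0 a0 y0"
    and support1: "\<forall>y1 a1 a2 a2'. 0 < \<rho>1 a1 a2 y1 \<longrightarrow> 0 < \<rho>1 a1 a2' y1"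
    and lin_indep: "\<forall>a2 (c::'a1 \<Rightarrow> real).
                      (\<forall>y1. (\<Sum>a1\<in>UNIV. c a1 * \<rho>1 a1 a2 y1) = 0) \<longrightarrow> (\<forall>a1. c a1 = 0)"
    and sep: "rg_cyc_separable u1"
  shows "\<forall>\<epsilon>>0. \<exists>\<kappa>>0. \<forall>\<mu>0 \<delta>.
           rg_prior \<mu>0 \<and> 1 - \<kappa> < \<mu>0 None \<and> 0 < \<delta> \<and> \<delta> < 1 \<longrightarrow>
           rg_U1bar \<rho>0 \<rho>1 u0 u1 u2 \<mu>0 \<delta> < rg_vCM \<rho>0 u0 u1 u2 + ereal \<epsilon>"
proof (intro allI impI)
  fix \<epsilon> :: real assume eps: "0 < \<epsilon>"
  interpret rg_signals \<rho>0 \<rho>1 using rho0_dist rho1_dist by unfold_locales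
  obtain v where v: "rg_vCM \<rho>0 u0 u1 u2 = ereal v" using rg_vCM_finite[OF rho0_dist] by blast
  obtain \<eta> where "0 < \<eta>" and robust: "rg_cm_robust \<rho>0 u0 u1 u2 \<eta> (v + \<epsilon> / 2)"
    using vCM_robust_bound[OF v, of "\<epsilon> / 2"] eps by auto
  define \<zeta> where "\<zeta> = min \<eta> 1"
  have \<zeta>: "0 < \<zeta>" "\<zeta> \<le> 1" using \<open>0 < \<eta>\<close> by (auto simp: \<zeta>_def)
  have robust_\<zeta>: "rg_cm_robust \<rho>0 u0 u1 u2 \<zeta> (v + \<epsilon> / 2)"
    using robust by (rule rg_cm_robust_mono[rotated]) (simp add: \<zeta>_def)
  have full: "\<And>a0 y0. 0 < \<rho>0 a0 y0" using full_support0 by blast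
  define C where "C = rg_u1_max u1 + \<bar>v + \<epsilon> / 2\<bar>"
  have "0 \<le> C" unfolding C_def using order.trans[OF abs_ge_zero rg_u1_max_bound, of u1] by simp
  then obtain \<kappa> where "0 < \<kappa>" and \<kappa>: "\<And>m. 1 - \<kappa> < m \<Longrightarrow> C * ((1 - m) / (\<zeta> * m)) < \<epsilon> / 2"
    using ex_small_prior_defect[of C \<zeta> "\<epsilon> / 2"] \<zeta> eps by auto
  have "rg_U1bar \<rho>0 \<rho>1 u0 u1 u2 \<mu> \<delta> < rg_vCM \<rho>0 u0 u1 u2 + ereal \<epsilon>"
    if "rg_prior \<mu>" "1 - \<kappa> < \<mu> None" "0 < \<delta>" "\<delta> < 1" for \<mu> \<delta>
  proof -
    have "rg_U1bar \<rho>0 \<rho>1 u0 u1 u2 \<mu> \<delta> \<le> ereal (v + \<epsilon> / 2 + C * ((1 - \<mu> None) / (\<zeta> * \<mu> None)))"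
      using U1bar_le[OF that(1,3,4) full sep robust_\<zeta> \<zeta>] by (simp add: C_def)
    also have "\<dots> < ereal (v + \<epsilon>)"
      using \<kappa>[OF that(2)] by (subst less_ereal.simps) linarith
    finally show ?thesis by (simp add: v)
  qed
  with \<open>0 < \<kappa>\<close> show "\<exists>\<kappa>>0. \<forall>\<mu>0 \<delta>. rg_prior \<mu>0 \<and> 1 - \<kappa> < \<mu>0 None \<and> 0 < \<delta> \<and> \<delta> < 1 \<longrightarrow>
      rg_U1bar \<rho>0 \<rho>1 u0 u1 u2 \<mu>0 \<delta> < rg_vCM \<rho>0 u0 u1 u2 + ereal \<epsilon>"
    by blast
qed

end
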